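(* Let $H$ and $A$ be Hopf quasigroups and let $A$ be a left $H$-quasimodule Hopf quasigroup such that for all $g,h\in H$ and $a\in A$, $$h_{(1)}\otimes h_{(2)}\cdot a=h_{(2)}\otimes h_{(1)}\cdot a,\qquad g\cdot(S_H(h)\cdot a)=(gS_H(h))\cdot a.$$ Then the map $R:H\otimes A\to A\otimes H$, $R(h\otimes a)=h_{(1)}\cdot a\otimes h_{(2)}$, is a coalgebra map which is left multiplicative, normal, left conormal, right $S_H$-multiplicative and right $S_H$-conormal. Consequently $A\otimes H$ with multiplication $(a\otimes h)(b\otimes g)=a(h_{(1)}\cdot b)\otimes h_{(2)}g$, unit $1_A\otimes 1_H$, tensor product coproduct and counit, and antipode $S(a\otimes h)=R(S_H(h)\otimes S_A(a))$ is a Hopf quasigroup.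
   Context: All algebras are unital but not necessarily associative; Sweedler notation. A Hopf quasigroup is $(H,\mu_H,1_H,\Delta_H,\varepsilon_H,S_H)$ where $(H,\mu_H,1_H)$ is a unital (not necessarily associative) algebra, $(H,\Delta_H,\varepsilon_H)$ is a coassociative counital coalgebra, $\Delta_H,\varepsilon_H$ are unital algebra maps, and $S_H$ is linear with $S_H(h_{(1)})(h_{(2)}g)=\varepsilon_H(h)g=h_{(1)}(S_H(h_{(2)})g)$ and $(gh_{(1)})S_H(h_{(2)})=\varepsilon_H(h)g=(gS_H(h_{(1)}))h_{(2)}$. $A$ is a left $H$-quasimodule Hopf quasigroup if there is a linear map $H\otimes A\to A$, $h\otimes a\mapsto h\cdot a$, with $1_H\cdot a=a$, $h_{(1)}\cdot(S_H(h_{(2)})\cdot a)=\varepsilon_H(h)a=S_H(h_{(1)})\cdot(h_{(2)}\cdot a)$, $(h_{(1)}\cdot a)(h_{(2)}\cdot b)=h\cdot(ab)$, $h\cdot 1_A=\varepsilon_H(h)1_A$, $\Delta_A(h\cdot a)=h_{(1)}\cdot a_{(1)}\otimes h_{(2)}\cdot a_{(2)}$, $\varepsilon_A(h\cdot a)=\varepsilon_H(h)\varepsilon_A(a)$ for all $h\in H$, $a,b\in A$. Notation $R(h\otimes a)=\sum_R a_R\otimes h^R$; iterated $\sum_{R,r}a_{Rr}\otimes x^ry^R$ means first $R(y\otimes a)$, then $R(x\otimes a_R)$. $R$ is: a coalgebra map if $\sum_R a_{R(1)}\otimes h^R_{(1)}\otimes a_{R(2)}\otimes h^R_{(2)}=\sum_{R,r}a_{(1)R}\otimes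 h_{(1)}^R\otimes a_{(2)r}\otimes h_{(2)}^r$ and $\sum_R\varepsilon_A(a_R)\varepsilon_H(h^R)=\varepsilon_H(h)\varepsilon_A(a)$; left multiplicative if $\sum_R(ab)_R\otimes h^R=\sum_{R,r}a_Rb_r\otimes h^{Rr}$ (first $R(h\otimes a)$, then $R(h^R\otimes b)$); normal if $R(h\otimes 1_A)=1_A\otimes h$ and $R(1_H\otimes a)=a\otimes 1_H$; left conormal if $\sum_R\varepsilon_A(a_R)h^R=\varepsilon_A(a)h$; right $S_H$-multiplicative if $\sum_R a_R\otimes(gS_H(h))^R=\sum_{R,r}a_{Rr}\otimes g^rS_H(h)^R$; right $S_H$-conormal if $\sum_{R,r}a_{Rr}\varepsilon_H(S_H(h^R)^r)=\varepsilon_H(h)a$ (first $R(h\otimes a)$, then $R(S_H(h^R)\otimes a_R)$), for all $a,b\in A$, $g,h\in H$. *)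

theory Defs
  imports Main HOL.Vector_Spaces "HOL-Library.Function_Algebras"
begin

text \<open>An element of a tensor product V1 (x) ... (x) Vn is written as a finite formal sum
(a list of n-tuples of pure tensors).  Two such formal sums denote the same tensor iff
they agree under every multilinear form V1 x ... x Vn -> k (over a field the tensor
product embeds into the dual of the space of multilinear forms).  Sweedler notation
Delta(h) = h_(1) (x) h_(2) is modelled by a function returning such a list.\<close>

definition bilin ::
  "('k::field \<Rightarrow> 'a::ab_group_add \<Rightarrow> 'a) \<Rightarrow> ('k \<Rightarrow> 'b::ab_group_add \<Rightarrow> 'b)
   \<Rightarrow> ('a \<Rightarrow> 'b \<Rightarrow> 'k) \<Rightarrow> bool" where
  "bilin s1 s2 \<beta> \<longleftrightarrow>
     (\<forall>y. Vector_Spaces.linear s1 (*) (\<lambda>x. \<beta> x y)) \<and>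
     (\<forall>x. Vector_Spaces.linear s2 (*) (\<lambda>y. \<beta> x y))"

definition trilin ::
  "('k::field \<Rightarrow> 'a::ab_group_add \<Rightarrow> 'a) \<Rightarrow> ('k \<Rightarrow> 'b::ab_group_add \<Rightarrow> 'b)
   \<Rightarrow> ('k \<Rightarrow> 'c::ab_group_add \<Rightarrow> 'c) \<Rightarrow> ('a \<Rightarrow> 'b \<Rightarrow> 'c \<Rightarrow> 'k) \<Rightarrow> bool" where
  "trilin s1 s2 s3 \<gamma> \<longleftrightarrow>
     (\<forall>y z. Vector_Spaces.linear s1 (*) (\<lambda>x. \<gamma> x y z)) \<and>
     (\<forall>x z. Vector_Spaces.linear s2 (*) (\<lambda>y. \<gamma> x y z)) \<and>
     (\<forall>x y. Vector_Spaces.linear s3 (*) (\<lambda>z. \<gamma> x y z))"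

definition quadlin ::
  "('k::field \<Rightarrow> 'a::ab_group_add \<Rightarrow> 'a) \<Rightarrow> ('k \<Rightarrow> 'b::ab_group_add \<Rightarrow> 'b)
   \<Rightarrow> ('k \<Rightarrow> 'c::ab_group_add \<Rightarrow> 'c) \<Rightarrow> ('k \<Rightarrow> 'd::ab_group_add \<Rightarrow> 'd)
   \<Rightarrow> ('a \<Rightarrow> 'b \<Rightarrow> 'c \<Rightarrow> 'd \<Rightarrow> 'k) \<Rightarrow> bool" where
  "quadlin s1 s2 s3 s4 \<delta> \<longleftrightarrow>
     (\<forall>y z w. Vector_Spaces.linear s1 (*) (\<lambda>x. \<delta> x y z w)) \<and>
     (\<forall>x z w. Vector_Spaces.linear s2 (*) (\<lambda>y. \<delta> x y z w)) \<and>
     (\<forall>x y w. Vector_Spaces.linear s3 (*) (\<lambda>z. \<delta> x y z w)) \<and>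
     (\<forall>x y z. Vector_Spaces.linear s4 (*) (\<lambda>w. \<delta> x y z w))"

definition teq2 ::
  "('k::field \<Rightarrow> 'a::ab_group_add \<Rightarrow> 'a) \<Rightarrow> ('k \<Rightarrow> 'b::ab_group_add \<Rightarrow> 'b)
   \<Rightarrow> ('a \<times> 'b) list \<Rightarrow> ('a \<times> 'b) list \<Rightarrow> bool" where
  "teq2 s1 s2 xs ys \<longleftrightarrow>
     (\<forall>\<beta>. bilin s1 s2 \<beta> \<longrightarrow> (\<Sum>(x,y)\<leftarrow>xs. \<beta> x y) = (\<Sum>(x,y)\<leftarrow>ys. \<beta> x y))"

definition teq3 ::
  "('k::field \<Rightarrow> 'a::ab_group_add \<Rightarrow> 'a) \<Rightarrow> ('k \<Rightarrow> 'b::ab_group_add \<Rightarrow> 'b)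
   \<Rightarrow> ('k \<Rightarrow> 'c::ab_group_add \<Rightarrow> 'c)
   \<Rightarrow> ('a \<times> 'b \<times> 'c) list \<Rightarrow> ('a \<times> 'b \<times> 'c) list \<Rightarrow> bool" where
  "teq3 s1 s2 s3 xs ys \<longleftrightarrow>
     (\<forall>\<gamma>. trilin s1 s2 s3 \<gamma> \<longrightarrow>
        (\<Sum>(x,y,z)\<leftarrow>xs. \<gamma> x y z) = (\<Sum>(x,y,z)\<leftarrow>ys. \<gamma> x y z))"

definition teq4 ::
  "('k::field \<Rightarrow> 'a::ab_group_add \<Rightarrow> 'a) \<Rightarrow> ('k \<Rightarrow> 'b::ab_group_add \<Rightarrow> 'b)
   \<Rightarrow> ('k \<Rightarrow> 'c::ab_group_add \<Rightarrow> 'c) \<Rightarrow> ('k \<Rightarrow> 'd::ab_group_add \<Rightarrow> 'd)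
   \<Rightarrow> ('a \<times> 'b \<times> 'c \<times> 'd) list \<Rightarrow> ('a \<times> 'b \<times> 'c \<times> 'd) list \<Rightarrow> bool" where
  "teq4 s1 s2 s3 s4 xs ys \<longleftrightarrow>
     (\<forall>\<delta>. quadlin s1 s2 s3 s4 \<delta> \<longrightarrow>
        (\<Sum>(x,y,z,w)\<leftarrow>xs. \<delta> x y z w) = (\<Sum>(x,y,z,w)\<leftarrow>ys. \<delta> x y z w))"

text \<open>For H and A we take V = UNIV; a proper
carrier is needed only for the tensor product A (x) H built below.
mu = multiplication, u = unit, D = comultiplication (Sweedler: D h = sum h_(1) (x) h_(2)),
e = counit, S = antipode.\<close>

definition hopf_quasigroup ::
  "('k::field \<Rightarrow> 'v::ab_group_add \<Rightarrow> 'v) \<Rightarrow> 'v set \<Rightarrow> ('v \<Rightarrow> 'v \<Rightarrow> 'v) \<Rightarrow> 'v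
   \<Rightarrow> ('v \<Rightarrow> ('v \<times> 'v) list) \<Rightarrow> ('v \<Rightarrow> 'k) \<Rightarrow> ('v \<Rightarrow> 'v) \<Rightarrow> bool" where
  "hopf_quasigroup sc V mu u D e S \<longleftrightarrow>
     vector_space sc \<and> module.subspace sc V \<and>
     \<comment> \<open>closure of the structure maps on V\<close>
     u \<in> V \<and> (\<forall>x\<in>V. \<forall>y\<in>V. mu x y \<in> V) \<and> (\<forall>x\<in>V. S x \<in> V) \<and>
     (\<forall>x\<in>V. \<forall>(p,q)\<in>set (D x). p \<in> V \<and> q \<in> V) \<and>
     \<comment> \<open>linearity of mu, D, e, S\<close>
     (\<forall>x\<in>V. \<forall>y\<in>V. \<forall>z\<in>V. \<forall>c.
        mu (x + y) z = mu x z + mu y z \<and> mu z (x + y) = mu z x + mu z y \<and>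
        mu (sc c x) y = sc c (mu x y) \<and> mu x (sc c y) = sc c (mu x y)) \<and>
     (\<forall>x\<in>V. \<forall>y\<in>V. \<forall>c. teq2 sc sc (D (x + y)) (D x @ D y) \<and>
        teq2 sc sc (D (sc c x)) (map (\<lambda>(p,q). (sc c p, q)) (D x))) \<and>
     (\<forall>x\<in>V. \<forall>y\<in>V. \<forall>c. e (x + y) = e x + e y \<and> e (sc c x) = c * e x) \<and>
     (\<forall>x\<in>V. \<forall>y\<in>V. \<forall>c. S (x + y) = S x + S y \<and> S (sc c x) = sc c (S x)) \<and>
     \<comment> \<open>unital algebra (not necessarily associative)\<close>
     (\<forall>x\<in>V. mu u x = x \<and> mu x u = x) \<and>
     \<comment> \<open>coassociative counital coalgebra\<close>
     (\<forall>x\<in>V. teq3 sc sc sc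
        (concat (map (\<lambda>(p,q). map (\<lambda>(r,s). (r,s,q)) (D p)) (D x)))
        (concat (map (\<lambda>(p,q). map (\<lambda>(r,s). (p,r,s)) (D q)) (D x)))) \<and>
     (\<forall>x\<in>V. (\<Sum>(p,q)\<leftarrow>D x. sc (e p) q) = x \<and> (\<Sum>(p,q)\<leftarrow>D x. sc (e q) p) = x) \<and>
     \<comment> \<open>D and e are unital algebra maps\<close>
     teq2 sc sc (D u) [(u, u)] \<and>
     (\<forall>x\<in>V. \<forall>y\<in>V. teq2 sc sc (D (mu x y))
        (concat (map (\<lambda>(p,q). map (\<lambda>(r,s). (mu p r, mu q s)) (D y)) (D x)))) \<and>
     e u = 1 \<and> (\<forall>x\<in>V. \<forall>y\<in>V. e (mu x y) = e x * e y) \<and>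
     \<comment> \<open>antipode axioms\<close>
     (\<forall>h\<in>V. \<forall>g\<in>V.
        (\<Sum>(p,q)\<leftarrow>D h. mu (S p) (mu q g)) = sc (e h) g \<and>
        (\<Sum>(p,q)\<leftarrow>D h. mu p (mu (S q) g)) = sc (e h) g \<and>
        (\<Sum>(p,q)\<leftarrow>D h. mu (mu g p) (S q)) = sc (e h) g \<and>
        (\<Sum>(p,q)\<leftarrow>D h. mu (mu g (S p)) q) = sc (e h) g)"

definition quasimodule_hqg ::
  "('k::field \<Rightarrow> 'h::ab_group_add \<Rightarrow> 'h) \<Rightarrow> ('h \<Rightarrow> 'h \<Rightarrow> 'h) \<Rightarrow> 'h
   \<Rightarrow> ('h \<Rightarrow> ('h \<times> 'h) list) \<Rightarrow> ('h \<Rightarrow> 'k) \<Rightarrow> ('h \<Rightarrow> 'h)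
   \<Rightarrow> ('k \<Rightarrow> 'a::ab_group_add \<Rightarrow> 'a) \<Rightarrow> ('a \<Rightarrow> 'a \<Rightarrow> 'a) \<Rightarrow> 'a
   \<Rightarrow> ('a \<Rightarrow> ('a \<times> 'a) list) \<Rightarrow> ('a \<Rightarrow> 'k) \<Rightarrow> ('a \<Rightarrow> 'a)
   \<Rightarrow> ('h \<Rightarrow> 'a \<Rightarrow> 'a) \<Rightarrow> bool" where
  "quasimodule_hqg sH muH uH DH eH SH sA muA uA DA eA SA act \<longleftrightarrow>
     \<comment> \<open>the action is a linear map H (x) A -> A\<close>
     (\<forall>h h' a a' c. act (h + h') a = act h a + act h' a \<and>
        act h (a + a') = act h a + act h a' \<and>
        act (sH c h) a = sA c (act h a) \<and> act h (sA c a) = sA c (act h a)) \<and>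
     (\<forall>a. act uH a = a) \<and>
     (\<forall>h a. (\<Sum>(p,q)\<leftarrow>DH h. act p (act (SH q) a)) = sA (eH h) a \<and>
            (\<Sum>(p,q)\<leftarrow>DH h. act (SH p) (act q a)) = sA (eH h) a) \<and>
     (\<forall>h a b. (\<Sum>(p,q)\<leftarrow>DH h. muA (act p a) (act q b)) = act h (muA a b)) \<and>
     (\<forall>h. act h uA = sA (eH h) uA) \<and>
     (\<forall>h a. teq2 sA sA (DA (act h a))
        (concat (map (\<lambda>(p,q). map (\<lambda>(x,y). (act p x, act q y)) (DA a)) (DH h)))) \<and>
     (\<forall>h a. eA (act h a) = eH h * eA a)"

definition Rmap :: "('h \<Rightarrow> ('h \<times> 'h) list) \<Rightarrow> ('h \<Rightarrow> 'a \<Rightarrow> 'a) \<Rightarrow> 'h \<Rightarrow> 'a \<Rightarrow> ('a \<times> 'h) list"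
  where "Rmap DH act h a = map (\<lambda>(p,q). (act p a, q)) (DH h)"

text \<open>Concrete model of the vector space A (x) H: an element sum a_i (x) h_i is
represented by the functional  beta |-> sum beta(a_i,h_i)  on bilinear forms beta
(value 0 on non-bilinear beta).  This gives an injective linear map from A (x) H into
the type  ('a => 'h => 'k) => 'k  whose image is the carrier tens_carrier.\<close>

type_synonym ('a, 'h, 'k) tens = "('a \<Rightarrow> 'h \<Rightarrow> 'k) \<Rightarrow> 'k"

definition tens_of ::
  "('k::field \<Rightarrow> 'a::ab_group_add \<Rightarrow> 'a) \<Rightarrow> ('k \<Rightarrow> 'h::ab_group_add \<Rightarrow> 'h)
   \<Rightarrow> ('a \<times> 'h) list \<Rightarrow> ('a, 'h, 'k) tens" where
  "tens_of sA sH xs = (\<lambda>\<beta>. if bilin sA sH \<beta> then (\<Sum>(a,h)\<leftarrow>xs. \<beta> a h) else 0)"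

definition tens_carrier ::
  "('k::field \<Rightarrow> 'a::ab_group_add \<Rightarrow> 'a) \<Rightarrow> ('k \<Rightarrow> 'h::ab_group_add \<Rightarrow> 'h)
   \<Rightarrow> ('a, 'h, 'k) tens set" where
  "tens_carrier sA sH = range (tens_of sA sH)"

definition tens_scale :: "'k::field \<Rightarrow> ('a, 'h, 'k) tens \<Rightarrow> ('a, 'h, 'k) tens" where
  "tens_scale c X = (\<lambda>\<beta>. c * X \<beta>)"

definition tens_rep ::
  "('k::field \<Rightarrow> 'a::ab_group_add \<Rightarrow> 'a) \<Rightarrow> ('k \<Rightarrow> 'h::ab_group_add \<Rightarrow> 'h)
   \<Rightarrow> ('a, 'h, 'k) tens \<Rightarrow> ('a \<times> 'h) list" where
  "tens_rep sA sH X = (SOME xs. tens_of sA sH xs = X)"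

text \<open>Smash product structure on A (x) H, defined on representatives
(all formulas are multilinear, hence independent of the representative):
 (a (x) h)(b (x) g) = a (h_(1) . b) (x) h_(2) g,  unit 1_A (x) 1_H,
 tensor product coproduct  a_(1) (x) h_(1) (x) a_(2) (x) h_(2),
 counit eps_A(a) eps_H(h),  antipode  S(a (x) h) = R(S_H(h) (x) S_A(a)).\<close>

definition smash_mul where
  "smash_mul sA sH muA muH DH act X Y =
     tens_of sA sH (concat (map (\<lambda>(a,h). concat (map (\<lambda>(b,g).
        map (\<lambda>(p,q). (muA a (act p b), muH q g)) (DH h)) (tens_rep sA sH Y))) (tens_rep sA sH X)))"

definition smash_unit where
  "smash_unit sA sH uA uH = tens_of sA sH [(uA, uH)]"

definition smash_comul where
  "smash_comul sA sH DA DH X =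
     concat (map (\<lambda>(a,h). concat (map (\<lambda>(a1,a2).
        map (\<lambda>(h1,h2). (tens_of sA sH [(a1,h1)], tens_of sA sH [(a2,h2)])) (DH h)) (DA a)))
       (tens_rep sA sH X))"

definition smash_counit where
  "smash_counit sA sH eA eH X = (\<Sum>(a,h)\<leftarrow>tens_rep sA sH X. eA a * eH h)"

definition smash_antipode where
  "smash_antipode sA sH DH SA SH act X =
     tens_of sA sH (concat (map (\<lambda>(a,h). Rmap DH act (SH h) (SA a)) (tens_rep sA sH X)))"

end

theory Submission
  imports Defs
begin

(* All tensors in the statement are formal sums, and two formal sums are equal iff they agree
   under every multilinear form.  We therefore never compute in a tensor product: every identity
   is proved after applying an arbitrary (bi-, tri-, quadri-)linear form, which turns it into an
   identity between scalar-valued Sweedler sums  sw h F = \<Sum> F h(1) h(2).  These are manipulated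
   with the coalgebra axioms (coassociativity, counit), the bialgebra axioms (comul_mul,
   comul_unit) and the antipode axioms, all stated for an arbitrary bilinear F. *)

section \<open>Linear forms\<close>

definition lin_form :: "('k::field \<Rightarrow> 'v::ab_group_add \<Rightarrow> 'v) \<Rightarrow> ('v \<Rightarrow> 'k) \<Rightarrow> bool" where
  "lin_form s f \<longleftrightarrow> (\<forall>x y. f (x + y) = f x + f y) \<and> (\<forall>c x. f (s c x) = c * f x)"

definition bilin_form :: "('k::field \<Rightarrow> 'a::ab_group_add \<Rightarrow> 'a) \<Rightarrow> ('k \<Rightarrow> 'b::ab_group_add \<Rightarrow> 'b)
   \<Rightarrow> ('a \<Rightarrow> 'b \<Rightarrow> 'k) \<Rightarrow> bool" where
  "bilin_form s1 s2 F \<longleftrightarrow> (\<forall>y. lin_form s1 (\<lambda>x. F x y)) \<and> (\<forall>x. lin_form s2 (F x))"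

lemma vector_space_field: "vector_space ((*) :: 'k::field \<Rightarrow> 'k \<Rightarrow> 'k)"
  by unfold_locales (auto simp: algebra_simps)

lemma linear_iff_lin_form: "vector_space s \<Longrightarrow> Vector_Spaces.linear s (*) f \<longleftrightarrow> lin_form s f"
  by (simp add: linear_iff lin_form_def vector_space_field)

lemma bilin_iff_bilin_form: "vector_space s1 \<Longrightarrow> vector_space s2 \<Longrightarrow> bilin s1 s2 F \<longleftrightarrow> bilin_form s1 s2 F"
  by (simp add: bilin_def bilin_form_def linear_iff_lin_form)

lemma trilin_iff: "vector_space s1 \<Longrightarrow> vector_space s2 \<Longrightarrow> vector_space s3 \<Longrightarrow> trilin s1 s2 s3 F \<longleftrightarrow>
   (\<forall>y z. lin_form s1 (\<lambda>x. F x y z)) \<and> (\<forall>x z. lin_form s2 (\<lambda>y. F x y z)) \<and> (\<forall>x y. lin_form s3 (\<lambda>z. F x y z))"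
  by (simp add: trilin_def linear_iff_lin_form)

lemma quadlin_iff: "vector_space s1 \<Longrightarrow> vector_space s2 \<Longrightarrow> vector_space s3 \<Longrightarrow> vector_space s4 \<Longrightarrow>
   quadlin s1 s2 s3 s4 F \<longleftrightarrow>
   (\<forall>y z w. lin_form s1 (\<lambda>x. F x y z w)) \<and> (\<forall>x z w. lin_form s2 (\<lambda>y. F x y z w)) \<and>
   (\<forall>x y w. lin_form s3 (\<lambda>z. F x y z w)) \<and> (\<forall>x y z. lin_form s4 (\<lambda>w. F x y z w))"
  by (simp add: quadlin_def linear_iff_lin_form)

lemma lin_form_add: "lin_form s f \<Longrightarrow> f (x + y) = f x + f y" by (simp add: lin_form_def)
lemma lin_form_scale: "lin_form s f \<Longrightarrow> f (s c x) = c * f x" by (simp add: lin_form_def)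
lemma lin_form_zero: "lin_form s f \<Longrightarrow> f 0 = 0"
proof -
  assume "lin_form s f"
  hence "f 0 = f 0 + f 0" using lin_form_add[of s f 0 0] by simp
  thus ?thesis by (metis add_cancel_right_right)
qed
lemma lin_form_sum_list': "lin_form s f \<Longrightarrow> f (\<Sum>(p,q)\<leftarrow>xs. g p q) = (\<Sum>(p,q)\<leftarrow>xs. f (g p q))"
  by (induction xs) (auto simp: lin_form_zero lin_form_add)

lemma lin_form_I: "(\<And>x y. f (x + y) = f x + f y) \<Longrightarrow> (\<And>c x. f (s c x) = c * f x) \<Longrightarrow> lin_form s f"
  by (simp add: lin_form_def)

lemma lin_form_cmult: "lin_form s f \<Longrightarrow> lin_form s (\<lambda>x. c * f x)"
  by (simp add: lin_form_def algebra_simps)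
lemma lin_form_sumlist2: "(\<And>p q. (p,q) \<in> set ys \<Longrightarrow> lin_form s (F p q)) \<Longrightarrow> lin_form s (\<lambda>x. \<Sum>(p,q)\<leftarrow>ys. F p q x)"
  by (induction ys) (auto simp: lin_form_def algebra_simps sum_list_addf)

lemma bilin_form_add1: "bilin_form s1 s2 F \<Longrightarrow> F (x + y) z = F x z + F y z" by (simp add: bilin_form_def lin_form_def)
lemma bilin_form_add2: "bilin_form s1 s2 F \<Longrightarrow> F z (x + y) = F z x + F z y" by (simp add: bilin_form_def lin_form_def)
lemma bilin_form_scale1: "bilin_form s1 s2 F \<Longrightarrow> F (s1 c x) z = c * F x z" by (simp add: bilin_form_def lin_form_def)
lemma bilin_form_scale2: "bilin_form s1 s2 F \<Longrightarrow> F z (s2 c x) = c * F z x" by (simp add: bilin_form_def lin_form_def)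

lemma bilin_form_simps:
  assumes "bilin_form s1 s2 F"
  shows "F (x + y) z = F x z + F y z" "F z' (x' + y') = F z' x' + F z' y'"
    "F (s1 c x) z = c * F x z" "F z' (s2 c x') = c * F z' x'"
  using assms by (simp_all add: bilin_form_add1 bilin_form_add2 bilin_form_scale1 bilin_form_scale2)

lemma bilin_form_I: "(\<And>y. lin_form s1 (\<lambda>x. F x y)) \<Longrightarrow> (\<And>x. lin_form s2 (F x)) \<Longrightarrow> bilin_form s1 s2 F"
  by (simp add: bilin_form_def)

lemma sum_list_swap: "(\<Sum>x\<leftarrow>xs. \<Sum>y\<leftarrow>ys. f x y) = (\<Sum>y\<leftarrow>ys. \<Sum>x\<leftarrow>xs. (f x y::'a::comm_monoid_add))"
  by (induction xs) (auto simp: sum_list_addf)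

lemma sum_list_concat_map[simp]: "sum_list (map f (concat xss)) = (\<Sum>xs\<leftarrow>xss. sum_list (map f xs))"
  by (induction xss) auto

lemma add_sum_gen:
  fixes g :: "'a::ab_group_add \<Rightarrow> 'b::ab_group_add"
  assumes "\<And>x y. g (x + y) = g x + g y"
  shows "g (\<Sum>(p,q)\<leftarrow>xs. X p q) = (\<Sum>(p,q)\<leftarrow>xs. g (X p q))"
proof -
  have g0: "g 0 = 0" using assms[of 0 0] by (metis add_cancel_right_right add_0)
  show ?thesis by (induction xs) (auto simp: g0 assms)
qed

lemma sum_list_apply: "(\<Sum>(p,q)\<leftarrow>xs. F p q) b = (\<Sum>(p,q)\<leftarrow>xs. F p q b)"
  by (induction xs) auto

(* Linear forms separate the points of a vector space: this turns vector identities into scalar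
   identities, which are the only ones the Sweedler calculus below can prove. *)
lemma separation:
  fixes s :: "'k::field \<Rightarrow> 'v::ab_group_add \<Rightarrow> 'v"
  assumes vsp_s: "vector_space s" and H: "\<And>f. lin_form s f \<Longrightarrow> f x = f y"
  shows "x = y"
proof (rule ccontr)
  assume ne: "x \<noteq> y"
  interpret vsp: vector_space_pair s "(*)" using vsp_s vector_space_field by (simp add: vector_space_pair_def)
  define z where "z = x - y"
  have z: "z \<noteq> 0" using ne by (simp add: z_def)
  have ind: "vsp.vs1.independent {z}" using z by simp
  define g where "g = vsp.construct {z} (\<lambda>_. (1::'k))"
  have lin: "Vector_Spaces.linear s (*) g" unfolding g_def by (rule vsp.linear_construct[OF ind])
  have Lg: "lin_form s g" using lin vsp_s by (simp add: linear_iff_lin_form)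
  have gz: "g z = 1" unfolding g_def by (rule vsp.construct_basis[OF ind]) simp
  have "g x = g y" by (rule H[OF Lg])
  moreover have "g x = g z + g y" using lin_form_add[OF Lg, of z y] by (simp add: z_def)
  ultimately show False using gz by simp
qed

section \<open>Sweedler calculus in a Hopf quasigroup\<close>

locale hqg =
  fixes sc :: "'k::field \<Rightarrow> 'v::ab_group_add \<Rightarrow> 'v" and mu :: "'v \<Rightarrow> 'v \<Rightarrow> 'v" and u :: 'v
    and D :: "'v \<Rightarrow> ('v \<times> 'v) list" and e :: "'v \<Rightarrow> 'k" and S :: "'v \<Rightarrow> 'v"
  assumes hq: "hopf_quasigroup sc UNIV mu u D e S"
begin

lemma is_vector_space: "vector_space sc" using hq by (simp add: hopf_quasigroup_def)

lemma mu_addL[simp]: "mu (x + y) z = mu x z + mu y z" using hq by (simp add: hopf_quasigroup_def)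
lemma mu_addR[simp]: "mu z (x + y) = mu z x + mu z y" using hq by (simp add: hopf_quasigroup_def)
lemma mu_scL[simp]: "mu (sc c x) y = sc c (mu x y)" using hq by (simp add: hopf_quasigroup_def)
lemma mu_scR[simp]: "mu x (sc c y) = sc c (mu x y)" using hq by (simp add: hopf_quasigroup_def)
lemma e_add[simp]: "e (x + y) = e x + e y" using hq by (simp add: hopf_quasigroup_def)
lemma e_sc[simp]: "e (sc c x) = c * e x" using hq by (simp add: hopf_quasigroup_def)
lemma S_add[simp]: "S (x + y) = S x + S y" using hq by (simp add: hopf_quasigroup_def)
lemma S_sc[simp]: "S (sc c x) = sc c (S x)" using hq by (simp add: hopf_quasigroup_def)
lemma mu_uL[simp]: "mu u x = x" using hq by (simp add: hopf_quasigroup_def)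
lemma mu_uR[simp]: "mu x u = x" using hq by (simp add: hopf_quasigroup_def)
lemma e_u[simp]: "e u = 1" using hq by (simp add: hopf_quasigroup_def)
lemma e_mu[simp]: "e (mu x y) = e x * e y" using hq by (simp add: hopf_quasigroup_def)

lemma lin_form_e: "lin_form sc e" by (simp add: lin_form_def)

definition bil :: "('v \<Rightarrow> 'v \<Rightarrow> 'k) \<Rightarrow> bool" where "bil F = bilin_form sc sc F"
definition tri :: "('v \<Rightarrow> 'v \<Rightarrow> 'v \<Rightarrow> 'k) \<Rightarrow> bool" where
  "tri F \<longleftrightarrow> (\<forall>y z. lin_form sc (\<lambda>x. F x y z)) \<and> (\<forall>x z. lin_form sc (\<lambda>y. F x y z)) \<and> (\<forall>x y. lin_form sc (\<lambda>z. F x y z))"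

definition sw :: "'v \<Rightarrow> ('v \<Rightarrow> 'v \<Rightarrow> 'k) \<Rightarrow> 'k" where
  "sw h F = (\<Sum>(p,q)\<leftarrow>D h. F p q)"

lemma teq2_sw: "teq2 sc sc xs ys \<Longrightarrow> bil F \<Longrightarrow> (\<Sum>(p,q)\<leftarrow>xs. F p q) = (\<Sum>(p,q)\<leftarrow>ys. F p q)"
  unfolding teq2_def bil_def using bilin_iff_bilin_form[OF is_vector_space is_vector_space] by blast

lemma sw_add_fun[simp]: "sw h (\<lambda>p q. F p q + G p q) = sw h F + sw h G"
  by (simp add: sw_def sum_list_addf split_def)
lemma sw_cmult[simp]: "sw h (\<lambda>p q. c * F p q) = c * sw h F"
  by (simp add: sw_def sum_list_const_mult split_def)
lemma sw_swap: "sw h (\<lambda>p q. sw g (\<lambda>r s. F p q r s)) = sw g (\<lambda>r s. sw h (\<lambda>p q. F p q r s))"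
  unfolding sw_def split_def by (rule sum_list_swap)
lemma sw_cong: "(\<And>p q. (p,q) \<in> set (D h) \<Longrightarrow> F p q = G p q) \<Longrightarrow> sw h F = sw h G"
  unfolding sw_def by (auto intro!: arg_cong[where f=sum_list] map_cong)
lemma sw_swap_gen: "sw h (\<lambda>p q. (\<Sum>(r,s)\<leftarrow>ys. F p q r s)) = (\<Sum>(r,s)\<leftarrow>ys. sw h (\<lambda>p q. F p q r s))"
  unfolding sw_def split_def by (rule sum_list_swap)

lemma sw_addh: "bil F \<Longrightarrow> sw (x + y) F = sw x F + sw y F"
proof -
  assume b: "bil F"
  have "teq2 sc sc (D (x + y)) (D x @ D y)" using hq by (simp add: hopf_quasigroup_def)
  from teq2_sw[OF this b] show ?thesis by (simp add: sw_def)
qed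

lemma sw_sch: "bil F \<Longrightarrow> sw (sc c x) F = c * sw x F"
proof -
  assume b: "bil F"
  have "teq2 sc sc (D (sc c x)) (map (\<lambda>(p,q). (sc c p, q)) (D x))" using hq by (simp add: hopf_quasigroup_def)
  from teq2_sw[OF this b] have "sw (sc c x) F = (\<Sum>(p,q)\<leftarrow>D x. F (sc c p) q)"
    by (simp add: sw_def o_def split_def)
  also have "\<dots> = (\<Sum>(p,q)\<leftarrow>D x. c * F p q)"
    using b by (simp add: bil_def bilin_form_scale1)
  finally show ?thesis by (simp add: sw_def sum_list_const_mult split_def)
qed

lemma lin_form_sw: "bil F \<Longrightarrow> lin_form sc (\<lambda>h. sw h F)"
  by (simp add: lin_form_def sw_addh sw_sch)

lemma lin_form_sw_comp: "bil F \<Longrightarrow> (\<And>x y. g (x + y) = g x + g y) \<Longrightarrow> (\<And>c x. g (sc c x) = sc c (g x))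
  \<Longrightarrow> lin_form sc (\<lambda>x. sw (g x) F)"
  by (simp add: lin_form_def sw_addh sw_sch)

lemma lin_form_sw_param: "(\<And>p q. lin_form s (\<lambda>t. F t p q)) \<Longrightarrow> lin_form s (\<lambda>t. sw h (F t))"
proof (rule lin_form_I)
  assume A: "\<And>p q. lin_form s (\<lambda>t. F t p q)"
  fix x y c
  have "F (x + y) = (\<lambda>p q. F x p q + F y p q)" by (intro ext) (rule lin_form_add[OF A])
  thus "sw h (F (x + y)) = sw h (F x) + sw h (F y)" by simp
  have "F (s c x) = (\<lambda>p q. c * F x p q)" by (intro ext) (rule lin_form_scale[OF A])
  thus "sw h (F (s c x)) = c * sw h (F x)" by simp
qed

lemma bil_I: "(\<And>y. lin_form sc (\<lambda>x. F x y)) \<Longrightarrow> (\<And>x. lin_form sc (\<lambda>y. F x y)) \<Longrightarrow> bil F"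
  by (simp add: bil_def bilin_form_def)
lemma tri_I: "(\<And>y z. lin_form sc (\<lambda>x. F x y z)) \<Longrightarrow> (\<And>x z. lin_form sc (\<lambda>y. F x y z)) \<Longrightarrow> (\<And>x y. lin_form sc (\<lambda>z. F x y z)) \<Longrightarrow> tri F"
  by (simp add: tri_def)

lemma bil_simps:
  assumes "bil F"
  shows "F (x + y) z = F x z + F y z" "F z (x + y) = F z x + F z y"
    "F (sc c x) z = c * F x z" "F z (sc c x) = c * F z x"
  using assms by (simp_all add: bil_def bilin_form_add1 bilin_form_add2 bilin_form_scale1 bilin_form_scale2)

lemma coassoc: "tri F \<Longrightarrow> sw h (\<lambda>p q. sw p (\<lambda>r s. F r s q)) = sw h (\<lambda>p q. sw q (\<lambda>r s. F p r s))"
proof -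
  assume t: "tri F"
  have "teq3 sc sc sc
        (concat (map (\<lambda>(p,q). map (\<lambda>(r,s). (r,s,q)) (D p)) (D h)))
        (concat (map (\<lambda>(p,q). map (\<lambda>(r,s). (p,r,s)) (D q)) (D h)))"
    using hq by (simp add: hopf_quasigroup_def)
  moreover have "trilin sc sc sc F" using t is_vector_space by (simp add: trilin_iff tri_def)
  ultimately have "(\<Sum>(x,y,z)\<leftarrow>concat (map (\<lambda>(p,q). map (\<lambda>(r,s). (r,s,q)) (D p)) (D h)). F x y z)
     = (\<Sum>(x,y,z)\<leftarrow>concat (map (\<lambda>(p,q). map (\<lambda>(r,s). (p,r,s)) (D q)) (D h)). F x y z)"
    unfolding teq3_def by blast
  thus ?thesis by (simp add: sw_def o_def split_def)
qed

lemma counit_axioms: "(\<Sum>(p,q)\<leftarrow>D x. sc (e p) q) = x \<and> (\<Sum>(p,q)\<leftarrow>D x. sc (e q) p) = x"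
  using hq by (simp add: hopf_quasigroup_def)

lemma counitL: "lin_form sc \<phi> \<Longrightarrow> sw h (\<lambda>p q. e p * \<phi> q) = \<phi> h"
proof -
  assume l: "lin_form sc \<phi>"
  have "\<phi> h = \<phi> (\<Sum>(p,q)\<leftarrow>D h. sc (e p) q)" using counit_axioms by simp
  also have "\<dots> = (\<Sum>(p,q)\<leftarrow>D h. \<phi> (sc (e p) q))" by (rule lin_form_sum_list'[OF l])
  also have "\<dots> = sw h (\<lambda>p q. e p * \<phi> q)" by (simp add: sw_def lin_form_scale[OF l])
  finally show ?thesis by simp
qed

lemma counitR: "lin_form sc \<phi> \<Longrightarrow> sw h (\<lambda>p q. e q * \<phi> p) = \<phi> h"
proof -
  assume l: "lin_form sc \<phi>"
  have "\<phi> h = \<phi> (\<Sum>(p,q)\<leftarrow>D h. sc (e q) p)" using counit_axioms by simp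
  also have "\<dots> = (\<Sum>(p,q)\<leftarrow>D h. \<phi> (sc (e q) p))" by (rule lin_form_sum_list'[OF l])
  also have "\<dots> = sw h (\<lambda>p q. e q * \<phi> p)" by (simp add: sw_def lin_form_scale[OF l])
  finally show ?thesis by simp
qed

lemma comul_unit: "bil F \<Longrightarrow> sw u F = F u u"
proof -
  assume b: "bil F"
  have "teq2 sc sc (D u) [(u, u)]" using hq by (simp add: hopf_quasigroup_def)
  from teq2_sw[OF this b] show ?thesis by (simp add: sw_def)
qed

lemma comul_mul: "bil F \<Longrightarrow> sw (mu x y) F = sw x (\<lambda>p q. sw y (\<lambda>r s. F (mu p r) (mu q s)))"
proof -
  assume b: "bil F"
  have "teq2 sc sc (D (mu x y))
        (concat (map (\<lambda>(p,q). map (\<lambda>(r,s). (mu p r, mu q s)) (D y)) (D x)))"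
    using hq by (simp add: hopf_quasigroup_def)
  from teq2_sw[OF this b] show ?thesis by (simp add: sw_def o_def split_def)
qed

lemma antipode_axioms:
  "(\<Sum>(p,q)\<leftarrow>D h. mu (S p) (mu q g)) = sc (e h) g"
  "(\<Sum>(p,q)\<leftarrow>D h. mu p (mu (S q) g)) = sc (e h) g"
  "(\<Sum>(p,q)\<leftarrow>D h. mu (mu g p) (S q)) = sc (e h) g"
  "(\<Sum>(p,q)\<leftarrow>D h. mu (mu g (S p)) q) = sc (e h) g"
  using hq by (simp_all add: hopf_quasigroup_def)


definition swv :: "'v \<Rightarrow> ('v \<Rightarrow> 'v \<Rightarrow> 'w::ab_group_add) \<Rightarrow> 'w" where
  "swv h X = (\<Sum>(p,q)\<leftarrow>D h. X p q)"

lemma swv_cong: "(\<And>p q. (p,q) \<in> set (D h) \<Longrightarrow> F p q = G p q) \<Longrightarrow> swv h F = swv h G"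
  unfolding swv_def by (auto intro!: arg_cong[where f=sum_list] map_cong)

lemma swv_lin: "(\<And>x y. g (x + y) = g x + g y) \<Longrightarrow> swv h (\<lambda>p q. g (X p q)) = g (swv h X)"
  unfolding swv_def by (rule add_sum_gen[symmetric])

lemma sw_lin: "(\<And>x y. g (x + y) = g x + g y) \<Longrightarrow> sw h (\<lambda>p q. g (X p q)) = g (swv h X)"
  unfolding swv_def sw_def by (rule add_sum_gen[symmetric])

lemma sw_lin_sc: "(\<And>x y. g (x + y) = g x + g y) \<Longrightarrow> (\<And>c x. g (s c x) = c * g x) \<Longrightarrow>
   sw h (\<lambda>p q. c p q * g (X p q)) = g (swv h (\<lambda>p q. s (c p q) (X p q)))"
  unfolding swv_def sw_def by (subst add_sum_gen, assumption, simp)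

lemma swv_muL[simp]: "swv h (\<lambda>p q. mu (X p q) a) = mu (swv h X) a"
  unfolding swv_def by (rule add_sum_gen[symmetric]) simp
lemma swv_sc[simp]: "swv h (\<lambda>p q. sc c (X p q)) = sc c (swv h X)"
  unfolding swv_def by (rule add_sum_gen[symmetric]) (simp add: vector_space.vector_space_assms(1)[OF is_vector_space])
lemma sw_e[simp]: "sw h (\<lambda>p q. e (X p q)) = e (swv h X)"
  unfolding swv_def sw_def by (rule add_sum_gen[symmetric]) simp
lemma swv_antipode[simp]:
  "swv h (\<lambda>p q. mu (S p) (mu q g)) = sc (e h) g"
  "swv h (\<lambda>p q. mu p (mu (S q) g)) = sc (e h) g"
  "swv h (\<lambda>p q. mu (mu g p) (S q)) = sc (e h) g"
  "swv h (\<lambda>p q. mu (mu g (S p)) q) = sc (e h) g"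
  "swv h (\<lambda>p q. mu (S p) q) = sc (e h) u"
  "swv h (\<lambda>p q. mu p (S q)) = sc (e h) u"
  using antipode_axioms[where h=h and g=g] antipode_axioms[where h=h and g=u] by (simp_all add: swv_def)
lemma swv_counit[simp]: "swv h (\<lambda>p q. sc (e p) q) = h" "swv h (\<lambda>p q. sc (e q) p) = h"
  using counit_axioms by (simp_all add: swv_def)

lemma bil_push:
  assumes b: "bil \<beta>"
  shows "sw h (\<lambda>p q. \<beta> (X p q) w) = \<beta> (swv h X) w"
    "sw h (\<lambda>p q. \<beta> w (X p q)) = \<beta> w (swv h X)"
    "sw h (\<lambda>p q. c p q * \<beta> (X p q) w) = \<beta> (swv h (\<lambda>p q. sc (c p q) (X p q))) w"
    "sw h (\<lambda>p q. c p q * \<beta> w (X p q)) = \<beta> w (swv h (\<lambda>p q. sc (c p q) (X p q)))"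
  unfolding sw_def swv_def
  using add_sum_gen[where g="\<lambda>z. \<beta> z w" and xs="D h" and X=X] add_sum_gen[where g="\<lambda>z. \<beta> w z" and xs="D h" and X=X]
    add_sum_gen[where g="\<lambda>z. \<beta> z w" and xs="D h" and X="\<lambda>p q. sc (c p q) (X p q)"]
    add_sum_gen[where g="\<lambda>z. \<beta> w z" and xs="D h" and X="\<lambda>p q. sc (c p q) (X p q)"]
  by (simp_all add: bil_simps[OF b])

lemma lin_form_push:
  assumes b: "lin_form sc \<phi>"
  shows "sw h (\<lambda>p q. \<phi> (X p q)) = \<phi> (swv h X)"
    "sw h (\<lambda>p q. c p q * \<phi> (X p q)) = \<phi> (swv h (\<lambda>p q. sc (c p q) (X p q)))"
  unfolding sw_def swv_def
  using add_sum_gen[where g=\<phi> and xs="D h" and X=X] add_sum_gen[where g=\<phi> and xs="D h" and X="\<lambda>p q. sc (c p q) (X p q)"]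
  by (simp_all add: lin_form_add[OF b] lin_form_scale[OF b])

lemma counit_antipode: "e (S h) = e h"
proof -
  have "sw h (\<lambda>p q. e (mu p (S q))) = e h" by (simp only: sw_e) simp
  hence "sw h (\<lambda>p q. e p * e (S q)) = e h" by simp
  moreover have "sw h (\<lambda>p q. e p * e (S q)) = e (S h)" by (rule counitL) (simp add: lin_form_def)
  ultimately show ?thesis by simp
qed

(* Iterated Sweedler sums: sw_iter n h G = \<Sum> G [h(1), ..., h(n+1)] with a fixed (right-nested)
   bracketing of the iterated coproduct, for G multilinear in its n+1 list entries. *)
fun sw_iter :: "nat \<Rightarrow> 'v \<Rightarrow> ('v list \<Rightarrow> 'k) \<Rightarrow> 'k" where
  "sw_iter 0 h G = G [h]"
| "sw_iter (Suc n) h G = sw h (\<lambda>p q. sw_iter n q (\<lambda>ys. G (p # ys)))"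

definition multilin :: "nat \<Rightarrow> ('v list \<Rightarrow> 'k) \<Rightarrow> bool" where
  "multilin n G \<longleftrightarrow> (\<forall>xs i. length xs = n \<longrightarrow> i < n \<longrightarrow> lin_form sc (\<lambda>x. G (xs[i := x])))"

lemma multilin_Cons: "multilin (Suc n) G \<Longrightarrow> multilin n (\<lambda>ys. G (x # ys))"
  unfolding multilin_def
proof (intro allI impI)
  fix xs :: "'v list" and i assume A: "\<forall>xs i. length xs = Suc n \<longrightarrow> i < Suc n \<longrightarrow> lin_form sc (\<lambda>y. G (xs[i := y]))"
    and l: "length xs = n" and i: "i < n"
  from A[rule_format, of "x # xs" "Suc i"] l i show "lin_form sc (\<lambda>y. G (x # xs[i := y]))" by simp
qed

lemma multilin_head: "multilin (Suc n) G \<Longrightarrow> length ys = n \<Longrightarrow> lin_form sc (\<lambda>x. G (x # ys))"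
  unfolding multilin_def
proof -
  assume A: "\<forall>xs i. length xs = Suc n \<longrightarrow> i < Suc n \<longrightarrow> lin_form sc (\<lambda>x. G (xs[i := x]))" and l: "length ys = n"
  from A[rule_format, of "0 # ys" 0] l show "lin_form sc (\<lambda>x. G (x # ys))" by simp
qed

lemma lin_form_sw_iter_param: "(\<And>ys. length ys = Suc n \<Longrightarrow> lin_form s (\<lambda>t. G t ys)) \<Longrightarrow> lin_form s (\<lambda>t. sw_iter n h (G t))"
proof (induction n arbitrary: h G)
  case 0 thus ?case by simp
next
  case (Suc n)
  show ?case
    by (simp, rule lin_form_sw_param, rule Suc.IH, rule Suc.prems) simp
qed

lemma lin_form_sw_iter: "multilin (Suc n) G \<Longrightarrow> lin_form sc (\<lambda>h. sw_iter n h G)"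
proof (induction n arbitrary: G)
  case 0
  have "lin_form sc (\<lambda>x. G ([0][0 := x]))" using 0 unfolding multilin_def by (metis One_nat_def length_Cons list.size(3) zero_less_one)
  then show ?case by simp
next
  case (Suc n)
  have b: "bil (\<lambda>p q. sw_iter n q (\<lambda>ys. G (p # ys)))"
  proof (rule bil_I)
    fix q show "lin_form sc (\<lambda>p. sw_iter n q (\<lambda>ys. G (p # ys)))"
      by (rule lin_form_sw_iter_param, rule multilin_head[OF Suc.prems]) simp
  next
    fix p show "lin_form sc (\<lambda>q. sw_iter n q (\<lambda>ys. G (p # ys)))"
      by (rule Suc.IH, rule multilin_Cons[OF Suc.prems])
  qed
  show ?case by (simp, rule lin_form_sw[OF b])
qed

lemma sw_iter_sw_swap: "sw_iter n r (\<lambda>ys. sw x (\<lambda>p q. H p q ys)) = sw x (\<lambda>p q. sw_iter n r (H p q))"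
proof (induction n arbitrary: r H)
  case 0 thus ?case by simp
next
  case (Suc n)
  show ?case by (simp add: Suc.IH, rule sw_swap)
qed

lemma sw_iter_cong: "(\<And>ys. length ys = Suc n \<Longrightarrow> G ys = G' ys) \<Longrightarrow> sw_iter n h G = sw_iter n h G'"
proof (induction n arbitrary: h G G')
  case 0 thus ?case by simp
next
  case (Suc n)
  show ?case by (simp, rule sw_cong, rule Suc.IH, rule Suc.prems) simp
qed

(* Generalized coassociativity: splitting the i-th tensor factor of an n-fold coproduct gives the
   (n+1)-fold coproduct.  This is the workhorse for all reassociations below. *)
lemma sw_iter_split: "multilin (Suc (Suc n)) G \<Longrightarrow> i \<le> n \<Longrightarrow>
  sw_iter n h (\<lambda>xs. sw (xs!i) (\<lambda>p q. G (take i xs @ p # q # drop (Suc i) xs))) = sw_iter (Suc n) h G"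
proof (induction n arbitrary: h G i)
  case 0 thus ?case by simp
next
  case (Suc n)
  show ?case
  proof (cases i)
    case 0
    define F where "F = (\<lambda>a b c. sw_iter n c (\<lambda>ys. G (a # b # ys)))"
    have t: "tri F"
    proof (rule tri_I)
      fix y z show "lin_form sc (\<lambda>x. F x y z)" unfolding F_def
        by (rule lin_form_sw_iter_param, rule multilin_head[OF Suc.prems(1)]) simp
    next
      fix x z show "lin_form sc (\<lambda>y. F x y z)" unfolding F_def
        by (rule lin_form_sw_iter_param, rule multilin_head[OF multilin_Cons[OF Suc.prems(1)]]) simp
    next
      fix x y show "lin_form sc (\<lambda>z. F x y z)" unfolding F_def
        by (rule lin_form_sw_iter, rule multilin_Cons, rule multilin_Cons, rule Suc.prems(1))
    qed
    have "sw_iter (Suc n) h (\<lambda>xs. sw (xs!i) (\<lambda>p q. G (take i xs @ p # q # drop (Suc i) xs)))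
        = sw h (\<lambda>x r. sw x (\<lambda>p q. F p q r))"
      using 0 by (simp add: sw_iter_sw_swap F_def)
    also have "\<dots> = sw h (\<lambda>x r. sw r (\<lambda>p q. F x p q))" by (rule coassoc[OF t])
    also have "\<dots> = sw_iter (Suc (Suc n)) h G" by (simp add: F_def)
    finally show ?thesis .
  next
    case (Suc j)
    have "sw_iter (Suc n) h (\<lambda>xs. sw (xs!i) (\<lambda>p q. G (take i xs @ p # q # drop (Suc i) xs)))
       = sw h (\<lambda>x r. sw_iter n r (\<lambda>ys. sw (ys!j) (\<lambda>p q. (\<lambda>zs. G (x # zs)) (take j ys @ p # q # drop (Suc j) ys))))"
      using Suc by simp
    also have "\<dots> = sw h (\<lambda>x r. sw_iter (Suc n) r (\<lambda>zs. G (x # zs)))"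
      using Suc.IH[OF multilin_Cons[OF Suc.prems(1)]] Suc.prems(2) \<open>i = Suc j\<close> by simp
    also have "\<dots> = sw_iter (Suc (Suc n)) h G" by simp
    finally show ?thesis .
  qed
qed

lemma multilin_split:
  assumes m: "multilin (Suc (Suc n)) G" and i: "i \<le> n"
  shows "multilin (Suc n) (\<lambda>l. sw (l!i) (\<lambda>p q. G (take i l @ p # q # drop (Suc i) l)))"
  unfolding multilin_def
proof (intro allI impI)
  fix xs :: "'v list" and j assume l: "length xs = Suc n" and j: "j < Suc n"
  have mm: "lin_form sc (\<lambda>y. G (ys[k := y]))" if "length ys = Suc (Suc n)" "k < Suc (Suc n)" for ys k
    using m that unfolding multilin_def by blast
  have len: "length (take i xs @ p # q # drop (Suc i) xs) = Suc (Suc n)" for p q using l i by simp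
  show "lin_form sc (\<lambda>x. sw (xs[j := x] ! i) (\<lambda>p q. G (take i (xs[j := x]) @ p # q # drop (Suc i) (xs[j := x]))))"
  proof (cases "j = i")
    case True
    have b: "bil (\<lambda>p q. G (take i xs @ p # q # drop (Suc i) xs))"
    proof (rule bil_I)
      fix q show "lin_form sc (\<lambda>p. G (take i xs @ p # q # drop (Suc i) xs))"
        using mm[OF len[of 0 q], of i] l i by (simp add: list_update_append min_def)
    next
      fix p show "lin_form sc (\<lambda>q. G (take i xs @ p # q # drop (Suc i) xs))"
        using mm[OF len[of p 0], of "Suc i"] l i by (simp add: list_update_append min_def)
    qed
    show ?thesis using True l i by (simp add: lin_form_sw[OF b])
  next
    case False
    show ?thesis
    proof (cases "j < i")
      case True
      show ?thesis using True l i
        apply (simp add: take_update_swap)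
        apply (rule lin_form_sw_param)
        using mm[OF len, of j] by (simp add: list_update_append min_def)
    next
      case False
      hence ji: "i < j" using \<open>j \<noteq> i\<close> by simp
      have d1: "Suc j - i = Suc (Suc (j - Suc i))" using ji by simp
      show ?thesis using ji l j
        apply (simp add: drop_update_swap)
        apply (rule lin_form_sw_param)
        using mm[OF len, of "Suc j"] by (simp add: list_update_append min_def d1)
    qed
  qed
qed

lemma multilin3I: "(\<And>b c. lin_form sc (\<lambda>a. f a b c)) \<Longrightarrow> (\<And>a c. lin_form sc (\<lambda>b. f a b c)) \<Longrightarrow> (\<And>a b. lin_form sc (\<lambda>c. f a b c))
  \<Longrightarrow> multilin (Suc (Suc (Suc 0))) (\<lambda>xs. f (xs!0) (xs!1) (xs!2))"
  unfolding multilin_def by (auto simp: length_Suc_conv less_Suc_eq nth_list_update)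

lemma multilin4I: "(\<And>b c d. lin_form sc (\<lambda>a. f a b c d)) \<Longrightarrow> (\<And>a c d. lin_form sc (\<lambda>b. f a b c d))
  \<Longrightarrow> (\<And>a b d. lin_form sc (\<lambda>c. f a b c d)) \<Longrightarrow> (\<And>a b c. lin_form sc (\<lambda>d. f a b c d))
  \<Longrightarrow> multilin (Suc (Suc (Suc (Suc 0)))) (\<lambda>xs. f (xs!0) (xs!1) (xs!2) (xs!3))"
  unfolding multilin_def by (auto simp: length_Suc_conv less_Suc_eq nth_list_update)

lemma multilin5I: "(\<And>b c d g. lin_form sc (\<lambda>a. f a b c d g)) \<Longrightarrow> (\<And>a c d g. lin_form sc (\<lambda>b. f a b c d g))
  \<Longrightarrow> (\<And>a b d g. lin_form sc (\<lambda>c. f a b c d g)) \<Longrightarrow> (\<And>a b c g. lin_form sc (\<lambda>d. f a b c d g))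
  \<Longrightarrow> (\<And>a b c d. lin_form sc (\<lambda>g. f a b c d g))
  \<Longrightarrow> multilin (Suc (Suc (Suc (Suc (Suc 0))))) (\<lambda>xs. f (xs!0) (xs!1) (xs!2) (xs!3) (xs!4))"
  unfolding multilin_def by (auto simp: length_Suc_conv less_Suc_eq nth_list_update)

lemma multilin6I: "(\<And>b c d g k. lin_form sc (\<lambda>a. f a b c d g k)) \<Longrightarrow> (\<And>a c d g k. lin_form sc (\<lambda>b. f a b c d g k))
  \<Longrightarrow> (\<And>a b d g k. lin_form sc (\<lambda>c. f a b c d g k)) \<Longrightarrow> (\<And>a b c g k. lin_form sc (\<lambda>d. f a b c d g k))
  \<Longrightarrow> (\<And>a b c d k. lin_form sc (\<lambda>g. f a b c d g k)) \<Longrightarrow> (\<And>a b c d g. lin_form sc (\<lambda>k. f a b c d g k))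
  \<Longrightarrow> multilin (Suc (Suc (Suc (Suc (Suc (Suc 0)))))) (\<lambda>xs. f (xs!0) (xs!1) (xs!2) (xs!3) (xs!4) (xs!5))"
  unfolding multilin_def by (auto simp: length_Suc_conv less_Suc_eq nth_list_update)

(* The antipode is an anti-coalgebra map: S(h)(1) (x) S(h)(2) = S(h(2)) (x) S(h(1)).
   Both sides are computed from the witness
     \<Sum> \<beta> (S h(2) (h(3) S(h(5))(1))) (S h(1) (h(4) S(h(5))(2))).
   Cancelling h(2),h(3) and then h(1),h(4) by the antipode axioms gives \<Sum> \<beta> S(h)(1) S(h)(2);
   reading h(3) S(h(5))(1) (x) h(4) S(h(5))(2) as the coproduct of h(3) S(h(4)) instead gives
   \<Sum> \<beta> (S h(2)) (S h(1)). *)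
definition anti_comult_witness :: "('v \<Rightarrow> 'v \<Rightarrow> 'k) \<Rightarrow> 'v \<Rightarrow> 'k" where
  "anti_comult_witness \<beta> h = sw_iter (Suc (Suc (Suc (Suc 0)))) h
     (\<lambda>xs. sw (S (xs!4)) (\<lambda>x y. \<beta> (mu (S (xs!1)) (mu (xs!2) x)) (mu (S (xs!0)) (mu (xs!3) y))))"

lemma multilin_anti_comult_witness:
  assumes b: "bil \<beta>"
  shows "multilin (Suc (Suc (Suc (Suc (Suc 0)))))
     (\<lambda>xs. sw (S (xs!4)) (\<lambda>x y. \<beta> (mu (S (xs!1)) (mu (xs!2) x)) (mu (S (xs!0)) (mu (xs!3) y))))"
proof -
  note bs = bil_simps[OF b] distrib_left distrib_right
  have bf: "bil (\<lambda>x y. \<beta> (mu (S b) (mu c x)) (mu (S a) (mu d y)))" for a b c d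
    by (rule bil_I; rule lin_form_I; simp add: bs)
  show ?thesis
    by (rule multilin5I[where f="\<lambda>a b c d g. sw (S g) (\<lambda>x y. \<beta> (mu (S b) (mu c x)) (mu (S a) (mu d y)))"];
        (rule lin_form_sw_comp[OF bf], simp, simp)?; rule lin_form_sw_param; rule lin_form_I; simp add: bs)
qed

lemma anti_comult_witness_left:
  assumes b: "bil \<beta>"
  shows "anti_comult_witness \<beta> h = sw (S h) \<beta>"
proof -
  note bs = bil_simps[OF b] distrib_left distrib_right
  define f5 where "f5 = (\<lambda>a b c d g. sw (S g) (\<lambda>x y. \<beta> (mu (S b) (mu c x)) (mu (S a) (mu d y))))"
  have m5: "multilin (Suc (Suc (Suc (Suc (Suc 0))))) (\<lambda>xs. f5 (xs!0) (xs!1) (xs!2) (xs!3) (xs!4))"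
    using multilin_anti_comult_witness[OF b] by (simp add: f5_def)
  define g4 where "g4 = (\<lambda>a m c d. e m * sw (S d) (\<lambda>x y. \<beta> x (mu (S a) (mu c y))))"
  have bf4: "bil (\<lambda>x y. \<beta> x (mu (S a) (mu c y)))" for a c
    by (rule bil_I; rule lin_form_I; simp add: bs)
  have m4: "multilin (Suc (Suc (Suc (Suc 0)))) (\<lambda>xs. g4 (xs!0) (xs!1) (xs!2) (xs!3))"
    unfolding g4_def
    by (rule multilin4I; (rule lin_form_cmult, rule lin_form_sw_comp[OF bf4], simp, simp)?;
        (rule lin_form_cmult, rule lin_form_sw_param; rule lin_form_I; simp add: bs)?; rule lin_form_I; simp add: bs)
  define g3 where "g3 = (\<lambda>a c d. sw (S d) (\<lambda>x y. \<beta> x (mu (S a) (mu c y))))"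
  have m3: "multilin (Suc (Suc (Suc 0))) (\<lambda>xs. g3 (xs!0) (xs!1) (xs!2))"
    unfolding g3_def
    by (rule multilin3I; (rule lin_form_sw_comp[OF bf4], simp, simp)?; rule lin_form_sw_param; rule lin_form_I; simp add: bs)
  have "anti_comult_witness \<beta> h = sw_iter (Suc (Suc (Suc (Suc 0)))) h (\<lambda>xs. f5 (xs!0) (xs!1) (xs!2) (xs!3) (xs!4))"
    by (simp add: anti_comult_witness_def f5_def)
  \<comment> \<open>cancel S h(2) h(3)\<close>
  also have "\<dots> = sw_iter (Suc (Suc (Suc 0))) h (\<lambda>xs. g4 (xs!0) (xs!1) (xs!2) (xs!3))"
    apply (subst sw_iter_split[OF m5, of "Suc 0", symmetric], simp)
    apply (rule sw_iter_cong)
    apply (clarsimp simp: length_Suc_conv f5_def g4_def)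
    apply (subst sw_swap)
    apply (simp add: bil_push[OF b] bs)
    done
  also have "\<dots> = sw_iter (Suc (Suc 0)) h (\<lambda>xs. g3 (xs!0) (xs!1) (xs!2))"
    apply (subst sw_iter_split[OF m4, of 0, symmetric], simp)
    apply (rule sw_iter_cong)
    apply (clarsimp simp: length_Suc_conv g3_def g4_def)
    apply (subst counitR)
     apply (rule lin_form_sw_param; rule lin_form_I; simp add: bs)
    apply simp
    done
  \<comment> \<open>cancel S h(1) h(2)\<close>
  also have "\<dots> = sw_iter (Suc 0) h (\<lambda>xs. e (xs!0) * sw (S (xs!1)) \<beta>)"
    apply (subst sw_iter_split[OF m3, of 0, symmetric], simp)
    apply (rule sw_iter_cong)
    apply (clarsimp simp: length_Suc_conv g3_def)
    apply (subst sw_swap)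
    apply (simp add: bil_push[OF b] bs)
    done
  also have "\<dots> = sw (S h) \<beta>"
    by (simp, rule counitL, rule lin_form_sw_comp[OF b]; simp)
  finally show ?thesis .
qed

lemma anti_comult_witness_right:
  assumes b: "bil \<beta>"
  shows "anti_comult_witness \<beta> h = sw h (\<lambda>p q. \<beta> (S q) (S p))"
proof -
  note bs = bil_simps[OF b] distrib_left distrib_right
  define f5 where "f5 = (\<lambda>a b c d g. sw (S g) (\<lambda>x y. \<beta> (mu (S b) (mu c x)) (mu (S a) (mu d y))))"
  have m5: "multilin (Suc (Suc (Suc (Suc (Suc 0))))) (\<lambda>xs. f5 (xs!0) (xs!1) (xs!2) (xs!3) (xs!4))"
    using multilin_anti_comult_witness[OF b] by (simp add: f5_def)
  have bf: "bil (\<lambda>x y. \<beta> (mu (S b) (mu c x)) (mu (S a) (mu d y)))" for a b c d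
    by (rule bil_I; rule lin_form_I; simp add: bs)
  have bf2: "bil (\<lambda>d f. f5 a b c d f)" for a b c
    unfolding f5_def
    by (rule bil_I; (rule lin_form_sw_comp[OF bf], simp, simp)?; rule lin_form_sw_param; rule lin_form_I; simp add: bs)
  have m4: "multilin (Suc (Suc (Suc (Suc 0)))) (\<lambda>xs. sw (xs!3) (\<lambda>d f. f5 (xs!0) (xs!1) (xs!2) d f))"
    apply (rule multilin4I[where f="\<lambda>a b c k. sw k (\<lambda>d f. f5 a b c d f)"])
    apply (rule lin_form_sw_param; unfold f5_def; rule lin_form_sw_param; rule lin_form_I; simp add: bs)+
    apply (rule lin_form_sw[OF bf2])
    done
  have bf3: "bil (\<lambda>v w. \<beta> (mu (S b) v) (mu (S a) w))" for a b
    by (rule bil_I; rule lin_form_I; simp add: bs)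
  have t3: "tri (\<lambda>c d f. f5 a b c d f)" for a b
    unfolding f5_def
    by (rule tri_I; (rule lin_form_sw_comp[OF bf], simp, simp)?; rule lin_form_sw_param; rule lin_form_I; simp add: bs)
  have m3: "multilin (Suc (Suc (Suc 0))) (\<lambda>xs. e (xs!2) * \<beta> (S (xs!1)) (S (xs!0)))"
    by (rule multilin3I[where f="\<lambda>a b k. e k * \<beta> (S b) (S a)"]; rule lin_form_I; simp add: bs)
  have "anti_comult_witness \<beta> h = sw_iter (Suc (Suc (Suc (Suc 0)))) h (\<lambda>xs. f5 (xs!0) (xs!1) (xs!2) (xs!3) (xs!4))"
    by (simp add: anti_comult_witness_def f5_def)
  also have "\<dots> = sw_iter (Suc (Suc (Suc 0))) h (\<lambda>xs. sw (xs!3) (\<lambda>d f. f5 (xs!0) (xs!1) (xs!2) d f))"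
    by (subst sw_iter_split[OF m5, of "Suc (Suc (Suc 0))", symmetric], simp)
       (rule sw_iter_cong, clarsimp simp: length_Suc_conv)
  \<comment> \<open>the last two factors form the coproduct of h(3) S(h(4)), which equals e(h(3)) 1\<close>
  also have "\<dots> = sw_iter (Suc (Suc 0)) h (\<lambda>xs. e (xs!2) * \<beta> (S (xs!1)) (S (xs!0)))"
    apply (subst sw_iter_split[OF m4, of "Suc (Suc 0)", symmetric], simp)
    apply (rule sw_iter_cong)
    apply (clarsimp simp: length_Suc_conv)
    apply (subst coassoc[OF t3, symmetric])
    apply (unfold f5_def)
    apply (subst comul_mul[OF bf3, symmetric])
    apply (subst lin_form_push(1)[OF lin_form_sw[OF bf3]])
    apply (simp add: sw_sch[OF bf3] comul_unit[OF bf3])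
    done
  also have "\<dots> = sw_iter (Suc 0) h (\<lambda>xs. \<beta> (S (xs!1)) (S (xs!0)))"
    apply (subst sw_iter_split[OF m3, of "Suc 0", symmetric], simp)
    apply (rule sw_iter_cong)
    apply (clarsimp simp: length_Suc_conv)
    apply (subst counitR)
     apply (rule lin_form_I; simp add: bs)
    apply simp
    done
  also have "\<dots> = sw h (\<lambda>p q. \<beta> (S q) (S p))" by simp
  finally show ?thesis .
qed

lemma antipode_anti_comult:
  assumes b: "bil \<beta>"
  shows "sw (S h) \<beta> = sw h (\<lambda>p q. \<beta> (S q) (S p))"
  using anti_comult_witness_left[OF b] anti_comult_witness_right[OF b] by simp

end

section \<open>Left H-quasimodule Hopf quasigroups\<close>

locale smash =
  H: hqg sH muH uH DH eH SH + A: hqg sA muA uA DA eA SA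
  for sH :: "'k::field \<Rightarrow> 'h::ab_group_add \<Rightarrow> 'h" and muH uH DH eH SH
  and sA :: "'k \<Rightarrow> 'a::ab_group_add \<Rightarrow> 'a" and muA uA DA eA SA +
  fixes act :: "'h \<Rightarrow> 'a \<Rightarrow> 'a"
  assumes M: "quasimodule_hqg sH muH uH DH eH SH sA muA uA DA eA SA act"
    and cocomm: "\<And>h a. teq2 sH sA [(p, act q a). (p,q) \<leftarrow> DH h] [(q, act p a). (p,q) \<leftarrow> DH h]"
    and Sact: "\<And>g h a. act g (act (SH h) a) = act (muH g (SH h)) a"
begin

lemma act_addH[simp]: "act (h + h') a = act h a + act h' a" using M by (simp add: quasimodule_hqg_def)
lemma act_addA[simp]: "act h (a + a') = act h a + act h a'" using M by (simp add: quasimodule_hqg_def)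
lemma act_scH[simp]: "act (sH c h) a = sA c (act h a)" using M by (simp add: quasimodule_hqg_def)
lemma act_scA[simp]: "act h (sA c a) = sA c (act h a)" using M by (simp add: quasimodule_hqg_def)
lemma act_unitH[simp]: "act uH a = a" using M by (simp add: quasimodule_hqg_def)
lemma act_unitA[simp]: "act h uA = sA (eH h) uA" using M by (simp add: quasimodule_hqg_def)
lemma eA_act[simp]: "eA (act h a) = eH h * eA a" using M by (simp add: quasimodule_hqg_def)
lemma qm_axioms:
  "(\<Sum>(p,q)\<leftarrow>DH h. act p (act (SH q) a)) = sA (eH h) a"
  "(\<Sum>(p,q)\<leftarrow>DH h. act (SH p) (act q a)) = sA (eH h) a"
  "(\<Sum>(p,q)\<leftarrow>DH h. muA (act p a) (act q b)) = act h (muA a b)"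
  using M by (simp_all add: quasimodule_hqg_def)

lemma qm_swv[simp]:
  "H.swv h (\<lambda>p q. act p (act (SH q) a)) = sA (eH h) a"
  "H.swv h (\<lambda>p q. act (SH p) (act q a)) = sA (eH h) a"
  "H.swv h (\<lambda>p q. muA (act p a) (act q b)) = act h (muA a b)"
  using qm_axioms by (simp_all add: H.swv_def)

lemma push_simps[simp]:
  "H.swv h (\<lambda>p q. act (X p q) a) = act (H.swv h X) a"
  "H.swv h (\<lambda>p q. act k (Y p q)) = act k (H.swv h Y)"
  "A.swv b (\<lambda>p q. act k (Z p q)) = act k (A.swv b Z)"
  "H.swv h (\<lambda>p q. muA (Y p q) c) = muA (H.swv h Y) c"
  "H.swv h (\<lambda>p q. muA c (Y p q)) = muA c (H.swv h Y)"
  "H.swv h (\<lambda>p q. SA (Y p q)) = SA (H.swv h Y)"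
  "H.swv h (\<lambda>p q. sA t (Y p q)) = sA t (H.swv h Y)"
  by (rule H.swv_lin A.swv_lin; simp add: vector_space.vector_space_assms(1)[OF A.is_vector_space])+

lemma swap_HA: "H.sw h (\<lambda>p q. A.sw a (\<lambda>x y. F p q x y)) = A.sw a (\<lambda>x y. H.sw h (\<lambda>p q. F p q x y))"
  by (simp add: A.sw_def H.sw_swap_gen)

lemma swap_A_sw_iter: "A.sw a (\<lambda>x y. H.sw_iter n h (G x y)) = H.sw_iter n h (\<lambda>l. A.sw a (\<lambda>x y. G x y l))"
proof (induction n arbitrary: h G)
  case 0 thus ?case by simp
next
  case (Suc n)
  have "A.sw a (\<lambda>x y. H.sw_iter (Suc n) h (G x y)) = H.sw h (\<lambda>p q. A.sw a (\<lambda>x y. H.sw_iter n q (\<lambda>l. G x y (p # l))))"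
    by (simp add: swap_HA)
  also have "\<dots> = H.sw_iter (Suc n) h (\<lambda>l. A.sw a (\<lambda>x y. G x y l))" by (simp add: Suc.IH)
  finally show ?case .
qed

lemma multilin_swA: "(\<And>x y. H.multilin n (G x y)) \<Longrightarrow> H.multilin n (\<lambda>l. A.sw a (\<lambda>x y. G x y l))"
  unfolding H.multilin_def by (intro allI impI A.lin_form_sw_param) blast

lemma DA_act: "A.bil F \<Longrightarrow> A.sw (act h a) F = H.sw h (\<lambda>p q. A.sw a (\<lambda>x y. F (act p x) (act q y)))"
proof -
  assume b: "A.bil F"
  have "teq2 sA sA (DA (act h a))
        (concat (map (\<lambda>(p,q). map (\<lambda>(x,y). (act p x, act q y)) (DA a)) (DH h)))"
    using M by (simp add: quasimodule_hqg_def)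
  from A.teq2_sw[OF this b] show ?thesis by (simp add: A.sw_def H.sw_def o_def split_def)
qed

lemma cocomm_bilin: "bilin_form sH sA \<beta> \<Longrightarrow> H.sw h (\<lambda>p q. \<beta> p (act q a)) = H.sw h (\<lambda>p q. \<beta> q (act p a))"
proof -
  assume b: "bilin_form sH sA \<beta>"
  have "bilin sH sA \<beta>" using b H.is_vector_space A.is_vector_space by (simp add: bilin_iff_bilin_form)
  with cocomm[where h=h and a=a] show ?thesis by (simp add: teq2_def H.sw_def o_def split_def)
qed

lemma cocomm_swv:
  assumes a1: "\<And>x y b. \<Phi> (x + y) b = \<Phi> x b + \<Phi> y b" and a2: "\<And>x b b'. \<Phi> x (b + b') = \<Phi> x b + \<Phi> x b'"
    and a3: "\<And>c x b. \<Phi> (sH c x) b = sA c (\<Phi> x b)" and a4: "\<And>c x b. \<Phi> x (sA c b) = sA c (\<Phi> x b)"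
  shows "H.swv h (\<lambda>p q. \<Phi> p (act q a)) = H.swv h (\<lambda>p q. \<Phi> q (act p a))"
proof (rule separation[OF A.is_vector_space])
  fix \<theta> assume t: "lin_form sA \<theta>"
  have b: "bilin_form sH sA (\<lambda>x b. \<theta> (\<Phi> x b))"
    by (rule bilin_form_I; rule lin_form_I; simp add: a1 a2 a3 a4 lin_form_add[OF t] lin_form_scale[OF t])
  have "\<theta> (H.swv h (\<lambda>p q. \<Phi> p (act q a))) = H.sw h (\<lambda>p q. \<theta> (\<Phi> p (act q a)))"
    by (rule H.sw_lin[symmetric], rule lin_form_add[OF t])
  also have "\<dots> = H.sw h (\<lambda>p q. \<theta> (\<Phi> q (act p a)))" by (rule cocomm_bilin[OF b])
  also have "\<dots> = \<theta> (H.swv h (\<lambda>p q. \<Phi> q (act p a)))" by (rule H.sw_lin, rule lin_form_add[OF t])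
  finally show "\<theta> (H.swv h (\<lambda>p q. \<Phi> p (act q a))) = \<theta> (H.swv h (\<lambda>p q. \<Phi> q (act p a)))" .
qed

(* The action commutes with the antipode of A: h.S(a) = S(h.a).  After applying a linear form
   \<theta>, both sides are compared with the witness  \<Sum> \<theta>(S(h(1).a(1)) ((h(2).a(2)) (h(3).S a(3)))),
   which reduces to \<theta>(S(h.a)) by the module-algebra property and the antipode axiom of A, and to
   \<theta>(h.S a) by the H-linearity of \<Delta>_A and the antipode axiom of A. *)
definition act_S_witness :: "('a \<Rightarrow> 'k) \<Rightarrow> 'h \<Rightarrow> 'a \<Rightarrow> 'k" where
  "act_S_witness \<theta> h a = A.sw_iter (Suc (Suc 0)) a (\<lambda>as. H.sw_iter (Suc (Suc 0)) h (\<lambda>hs.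
     \<theta> (muA (SA (act (hs!0) (as!0))) (muA (act (hs!1) (as!1)) (act (hs!2) (SA (as!2)))))))"

lemma act_S_witness_left:
  assumes t: "lin_form sA \<theta>"
  shows "act_S_witness \<theta> h a = \<theta> (SA (act h a))"
proof -
  note ts = lin_form_add[OF t] lin_form_scale[OF t] distrib_left distrib_right
  define f where "f = (\<lambda>a1 a2 a3 h1 h2 h3. \<theta> (muA (SA (act h1 a1)) (muA (act h2 a2) (act h3 (SA a3)))))"
  have mH: "H.multilin (Suc (Suc (Suc 0))) (\<lambda>hs. f a1 a2 a3 (hs!0) (hs!1) (hs!2))" for a1 a2 a3
    by (rule H.multilin3I[where f="f a1 a2 a3"]; unfold f_def; rule lin_form_I; simp add: ts)
  have witness: "act_S_witness \<theta> h a = A.sw_iter (Suc (Suc 0)) a (\<lambda>as. H.sw_iter (Suc (Suc 0)) h (\<lambda>hs. f (as!0) (as!1) (as!2) (hs!0) (hs!1) (hs!2)))"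
    by (simp only: act_S_witness_def f_def)
  define g where "g = (\<lambda>a1 a2 a3 h1 h2. \<theta> (muA (SA (act h1 a1)) (act h2 (muA a2 (SA a3)))))"
  have mA2: "A.multilin (Suc (Suc (Suc 0))) (\<lambda>as. H.sw_iter (Suc 0) h (\<lambda>hs. g (as!0) (as!1) (as!2) (hs!0) (hs!1)))"
    by (rule A.multilin3I[where f="\<lambda>a1 a2 a3. H.sw_iter (Suc 0) h (\<lambda>hs. g a1 a2 a3 (hs!0) (hs!1))"];
        unfold g_def; rule H.lin_form_sw_iter_param; rule lin_form_I; simp add: ts)
  have "act_S_witness \<theta> h a = A.sw_iter (Suc (Suc 0)) a (\<lambda>as. H.sw_iter (Suc 0) h (\<lambda>hs. g (as!0) (as!1) (as!2) (hs!0) (hs!1)))"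
    unfolding witness
    apply (rule A.sw_iter_cong)
    apply (subst H.sw_iter_split[OF mH, of "Suc 0", symmetric], simp)
    apply (rule H.sw_iter_cong)
    apply (clarsimp simp: length_Suc_conv f_def g_def)
    apply (subst H.sw_lin, rule ts)
    apply simp
    done
  also have "\<dots> = A.sw_iter (Suc 0) a (\<lambda>as. eA (as!1) * \<theta> (SA (act h (as!0))))"
    apply (subst A.sw_iter_split[OF mA2, of "Suc 0", symmetric], simp)
    apply (rule A.sw_iter_cong)
    apply (clarsimp simp: length_Suc_conv g_def)
    apply (subst swap_HA[symmetric])
    apply (subst A.sw_lin[where g="\<lambda>z. \<theta> (muA (SA (act p x)) (act q z))" for p q x], simp add: ts)
    apply (simp add: ts)
    apply (subst H.counitR)
     apply (rule lin_form_I; simp add: ts)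
    apply simp
    done
  also have "\<dots> = \<theta> (SA (act h a))"
    by (simp, rule A.counitR, rule lin_form_I; simp add: ts)
  finally show ?thesis .
qed

lemma act_S_witness_right:
  assumes t: "lin_form sA \<theta>"
  shows "act_S_witness \<theta> h a = \<theta> (act h (SA a))"
proof -
  note ts = lin_form_add[OF t] lin_form_scale[OF t] distrib_left distrib_right
  define f where "f = (\<lambda>a1 a2 a3 h1 h2 h3. \<theta> (muA (SA (act h1 a1)) (muA (act h2 a2) (act h3 (SA a3)))))"
  have mH: "H.multilin (Suc (Suc (Suc 0))) (\<lambda>hs. f a1 a2 a3 (hs!0) (hs!1) (hs!2))" for a1 a2 a3
    by (rule H.multilin3I[where f="f a1 a2 a3"]; unfold f_def; rule lin_form_I; simp add: ts)
  have witness: "act_S_witness \<theta> h a = A.sw_iter (Suc (Suc 0)) a (\<lambda>as. H.sw_iter (Suc (Suc 0)) h (\<lambda>hs. f (as!0) (as!1) (as!2) (hs!0) (hs!1) (hs!2)))"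
    by (simp only: act_S_witness_def f_def)
  have key: "H.sw k (\<lambda>p q. A.sw b (\<lambda>x y. \<theta> (muA (SA (act p x)) (muA (act q y) W)))) = eH k * eA b * \<theta> W" for k b W
  proof -
    have bF: "A.bil (\<lambda>c d. \<theta> (muA (SA c) (muA d W)))" by (rule A.bil_I; rule lin_form_I; simp add: ts)
    show ?thesis
      apply (subst DA_act[OF bF, symmetric])
      apply (subst A.sw_lin, rule ts)
      apply (simp add: ts)
      done
  qed
  define k where "k = (\<lambda>a1 a2 a3. H.sw_iter (Suc 0) h (\<lambda>hs. H.sw (hs!0) (\<lambda>p q. f a1 a2 a3 p q (hs!1))))"
  have mA3: "A.multilin (Suc (Suc (Suc 0))) (\<lambda>as. k (as!0) (as!1) (as!2))"
    by (rule A.multilin3I[where f=k]; unfold k_def f_def; rule H.lin_form_sw_iter_param; rule H.lin_form_sw_param; rule lin_form_I; simp add: ts)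
  have "act_S_witness \<theta> h a = A.sw_iter (Suc (Suc 0)) a (\<lambda>as. k (as!0) (as!1) (as!2))"
    unfolding witness k_def
    apply (rule A.sw_iter_cong)
    apply (subst H.sw_iter_split[OF mH, of 0, symmetric], simp)
    apply (rule H.sw_iter_cong)
    apply (clarsimp simp: length_Suc_conv)
    done
  also have "\<dots> = A.sw_iter (Suc 0) a (\<lambda>as. eA (as!0) * \<theta> (act h (SA (as!1))))"
    apply (subst A.sw_iter_split[OF mA3, of 0, symmetric], simp)
    apply (rule A.sw_iter_cong)
    apply (clarsimp simp: length_Suc_conv k_def f_def)
    apply (subst swap_HA[symmetric])
    apply (subst swap_HA[symmetric])
    apply (simp add: key mult.assoc)
    apply (subst H.counitL)
     apply (rule lin_form_I; simp add: ts)
    apply simp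
    done
  also have "\<dots> = \<theta> (act h (SA a))"
    by (simp, rule A.counitL, rule lin_form_I; simp add: ts)
  finally show ?thesis .
qed

lemma act_S: "act h (SA a) = SA (act h a)"
proof (rule separation[OF A.is_vector_space])
  fix \<theta> assume "lin_form sA \<theta>"
  thus "\<theta> (act h (SA a)) = \<theta> (SA (act h a))"
    using act_S_witness_left act_S_witness_right by metis
qed
lemma act_antipode_left:
  assumes t: "lin_form sA \<theta>"
  shows "H.sw k (\<lambda>p q. A.sw a (\<lambda>x y. \<theta> (muA (act (SH q) (SA x)) (muA (act (SH p) y) W)))) = eH k * eA a * \<theta> W"
proof -
  note ts = lin_form_add[OF t] lin_form_scale[OF t] distrib_left distrib_right
  have b1: "H.bil (\<lambda>c1 c2. A.sw a (\<lambda>x y. \<theta> (muA (act c1 (SA x)) (muA (act c2 y) W))))"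
    by (rule H.bil_I; rule A.lin_form_sw_param; rule lin_form_I; simp add: ts)
  have b2: "A.bil (\<lambda>z1 z2. \<theta> (muA (SA z1) (muA z2 W)))"
    by (rule A.bil_I; rule lin_form_I; simp add: ts)
  have "H.sw k (\<lambda>p q. A.sw a (\<lambda>x y. \<theta> (muA (act (SH q) (SA x)) (muA (act (SH p) y) W))))
      = H.sw (SH k) (\<lambda>c1 c2. A.sw a (\<lambda>x y. \<theta> (muA (act c1 (SA x)) (muA (act c2 y) W))))"
    by (rule H.antipode_anti_comult[OF b1, symmetric])
  also have "\<dots> = A.sw (act (SH k) a) (\<lambda>z1 z2. \<theta> (muA (SA z1) (muA z2 W)))"
    by (simp add: DA_act[OF b2] act_S)
  also have "\<dots> = eH k * eA a * \<theta> W"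
    by (subst A.sw_lin, rule ts, simp add: ts H.counit_antipode)
  finally show ?thesis .
qed

lemma act_antipode_right:
  assumes t: "lin_form sA \<theta>"
  shows "H.sw k (\<lambda>p q. A.sw a (\<lambda>x y. \<theta> (muA (muA c (act p x)) (act q (SA y))))) = eH k * eA a * \<theta> c"
proof -
  note ts = lin_form_add[OF t] lin_form_scale[OF t] distrib_left distrib_right
  have b2: "A.bil (\<lambda>z1 z2. \<theta> (muA (muA c z1) (SA z2)))"
    by (rule A.bil_I; rule lin_form_I; simp add: ts)
  have "H.sw k (\<lambda>p q. A.sw a (\<lambda>x y. \<theta> (muA (muA c (act p x)) (act q (SA y)))))
      = H.sw k (\<lambda>p q. A.sw a (\<lambda>x y. \<theta> (muA (muA c (act p x)) (SA (act q y)))))" by (simp add: act_S)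
  also have "\<dots> = A.sw (act k a) (\<lambda>z1 z2. \<theta> (muA (muA c z1) (SA z2)))"
    by (rule DA_act[OF b2, symmetric])
  also have "\<dots> = eH k * eA a * \<theta> c"
    by (subst A.sw_lin, rule ts, simp add: ts)
  finally show ?thesis .
qed

lemma act_antipode_right_S:
  assumes t: "lin_form sA \<theta>"
  shows "H.sw k (\<lambda>p q. A.sw a (\<lambda>x y. \<theta> (muA (muA c (act p (SA x))) (act q y)))) = eH k * eA a * \<theta> c"
proof -
  note ts = lin_form_add[OF t] lin_form_scale[OF t] distrib_left distrib_right
  have b2: "A.bil (\<lambda>z1 z2. \<theta> (muA (muA c (SA z1)) z2))"
    by (rule A.bil_I; rule lin_form_I; simp add: ts)
  have "H.sw k (\<lambda>p q. A.sw a (\<lambda>x y. \<theta> (muA (muA c (act p (SA x))) (act q y))))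
      = H.sw k (\<lambda>p q. A.sw a (\<lambda>x y. \<theta> (muA (muA c (SA (act p x))) (act q y))))" by (simp add: act_S)
  also have "\<dots> = A.sw (act k a) (\<lambda>z1 z2. \<theta> (muA (muA c (SA z1)) z2))"
    by (rule DA_act[OF b2, symmetric])
  also have "\<dots> = eH k * eA a * \<theta> c"
    by (subst A.sw_lin, rule ts, simp add: ts)
  finally show ?thesis .
qed

lemma act_mul_split:
  assumes t: "lin_form sA \<theta>"
  shows "\<theta> (act k (muA X Z)) = H.sw k (\<lambda>c1 c2. \<theta> (muA (act c1 X) (act c2 Z)))"
proof -
  have "\<theta> (act k (muA X Z)) = \<theta> (H.swv k (\<lambda>c1 c2. muA (act c1 X) (act c2 Z)))" by simp
  also have "\<dots> = H.sw k (\<lambda>c1 c2. \<theta> (muA (act c1 X) (act c2 Z)))"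
    by (rule H.sw_lin[symmetric], rule lin_form_add[OF t])
  finally show ?thesis .
qed

section \<open>The properties of R\<close>

lemma R_counit: "(\<Sum>(x,y)\<leftarrow>Rmap DH act h a. eA x * eH y) = eH h * eA a"
proof -
  have "(\<Sum>(x,y)\<leftarrow>Rmap DH act h a. eA x * eH y) = H.sw h (\<lambda>p q. eA a * (eH p * eH q))"
    by (simp add: Rmap_def H.sw_def o_def split_def mult.commute mult.left_commute sum_list_const_mult)
  also have "\<dots> = eA a * eH h" using H.counitL[OF H.lin_form_e, of h] by simp
  finally show ?thesis by simp
qed

lemma R_normal1: "teq2 sA sH (Rmap DH act h uA) [(uA, h)]"
  unfolding teq2_def
proof (intro allI impI)
  fix \<beta> assume "bilin sA sH \<beta>"
  hence b: "bilin_form sA sH \<beta>" using bilin_iff_bilin_form[OF A.is_vector_space H.is_vector_space] by simp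
  have "(\<Sum>(x,y)\<leftarrow>Rmap DH act h uA. \<beta> x y) = H.sw h (\<lambda>p q. eH p * \<beta> uA q)"
    by (simp add: Rmap_def H.sw_def o_def split_def bilin_form_scale1[OF b])
  also have "\<dots> = \<beta> uA h" by (rule H.counitL) (simp add: b[unfolded bilin_form_def])
  finally show "(\<Sum>(x,y)\<leftarrow>Rmap DH act h uA. \<beta> x y) = (\<Sum>(x,y)\<leftarrow>[(uA, h)]. \<beta> x y)" by simp
qed

lemma R_normal2: "teq2 sA sH (Rmap DH act uH a) [(a, uH)]"
  unfolding teq2_def
proof (intro allI impI)
  fix \<beta> assume "bilin sA sH \<beta>"
  hence b: "bilin_form sA sH \<beta>" using bilin_iff_bilin_form[OF A.is_vector_space H.is_vector_space] by simp
  have bb: "H.bil (\<lambda>p q. \<beta> (act p a) q)"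
    by (rule H.bil_I; rule lin_form_I; simp add: bilin_form_add1[OF b] bilin_form_add2[OF b] bilin_form_scale1[OF b] bilin_form_scale2[OF b])
  have "(\<Sum>(x,y)\<leftarrow>Rmap DH act uH a. \<beta> x y) = H.sw uH (\<lambda>p q. \<beta> (act p a) q)"
    by (simp add: Rmap_def H.sw_def o_def split_def)
  also have "\<dots> = \<beta> a uH" by (simp add: H.comul_unit[OF bb])
  finally show "(\<Sum>(x,y)\<leftarrow>Rmap DH act uH a. \<beta> x y) = (\<Sum>(x,y)\<leftarrow>[(a, uH)]. \<beta> x y)" by simp
qed

lemma R_conormal: "(\<Sum>(x,y)\<leftarrow>Rmap DH act h a. sH (eA x) y) = sH (eA a) h"
proof -
  have "(\<Sum>(x,y)\<leftarrow>Rmap DH act h a. sH (eA x) y) = H.swv h (\<lambda>p q. sH (eA a * eH p) q)"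
    by (simp add: Rmap_def H.swv_def o_def split_def mult.commute)
  also have "\<dots> = H.swv h (\<lambda>p q. sH (eA a) (sH (eH p) q))"
    by (rule H.swv_cong) (simp add: vector_space.vector_space_assms(3)[OF H.is_vector_space])
  also have "\<dots> = sH (eA a) h" by simp
  finally show ?thesis .
qed

lemma swv_counit_act[simp]: "H.swv k (\<lambda>p q. sA (eH q) (act p x)) = act k x"
proof -
  have "H.swv k (\<lambda>p q. sA (eH q) (act p x)) = H.swv k (\<lambda>p q. act (sH (eH q) p) x)" by simp
  also have "\<dots> = act k x" by (simp only: push_simps H.swv_counit)
  finally show ?thesis .
qed

lemma swv_counit_mu[simp]: "H.swv w (\<lambda>p q. sH (eH p) (muH q z)) = muH w z"
proof -
  have "H.swv w (\<lambda>p q. sH (eH p) (muH q z)) = H.swv w (\<lambda>p q. muH (sH (eH p) q) z)" by simp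
  also have "\<dots> = muH w z" by (simp only: H.swv_muL H.swv_counit)
  finally show ?thesis .
qed

(* Right S_H-conormality follows from cocommutativity and the quasimodule axiom. *)
lemma R_Sconormal: "(\<Sum>(u,v)\<leftarrow>Rmap DH act h a. \<Sum>(u',v')\<leftarrow>Rmap DH act (SH v) u. sA (eH v') u') = sA (eH h) a"
proof -
  have "(\<Sum>(u,v)\<leftarrow>Rmap DH act h a. \<Sum>(u',v')\<leftarrow>Rmap DH act (SH v) u. sA (eH v') u')
     = H.swv h (\<lambda>p q. H.swv (SH q) (\<lambda>p' q'. sA (eH q') (act p' (act p a))))"
    unfolding Rmap_def H.swv_def by (simp add: o_def split_def)
  also have "\<dots> = H.swv h (\<lambda>p q. act (SH q) (act p a))" apply (simp only: swv_counit_act) done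
  also have "\<dots> = H.swv h (\<lambda>p q. act (SH p) (act q a))"
    by (rule cocomm_swv[where \<Phi>="\<lambda>x b. act (SH x) b", symmetric]) simp_all
  also have "\<dots> = sA (eH h) a" by simp
  finally show ?thesis .
qed

(* Left multiplicativity is the module-algebra axiom after one reassociation. *)
lemma R_leftmult: "teq2 sA sH (Rmap DH act h (muA a b))
        [(muA u u', v'). (u,v) \<leftarrow> Rmap DH act h a, (u',v') \<leftarrow> Rmap DH act v b]"
  unfolding teq2_def
proof (intro allI impI)
  fix \<beta> assume "bilin sA sH \<beta>"
  hence b: "bilin_form sA sH \<beta>" using bilin_iff_bilin_form[OF A.is_vector_space H.is_vector_space] by simp
  note bs = bilin_form_simps[OF b] distrib_left distrib_right
  have m: "H.multilin (Suc (Suc (Suc 0))) (\<lambda>l. \<beta> (muA (act (l!0) a) (act (l!1) b)) (l!2))"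
    by (rule H.multilin3I[where f="\<lambda>x y z. \<beta> (muA (act x a) (act y b)) z"]; rule lin_form_I; simp add: bs)
  have "(\<Sum>(x,y)\<leftarrow>[(muA u u', v'). (u,v) \<leftarrow> Rmap DH act h a, (u',v') \<leftarrow> Rmap DH act v b]. \<beta> x y)
     = H.sw_iter (Suc (Suc 0)) h (\<lambda>l. \<beta> (muA (act (l!0) a) (act (l!1) b)) (l!2))"
    by (simp add: Rmap_def H.sw_def o_def split_def)
  also have "\<dots> = H.sw_iter (Suc 0) h (\<lambda>l. \<beta> (act (l!0) (muA a b)) (l!1))"
    apply (subst H.sw_iter_split[OF m, of 0, symmetric], simp)
    apply (rule H.sw_iter_cong)
    apply (clarsimp simp: length_Suc_conv)
    apply (subst H.sw_lin[where g="\<lambda>z. \<beta> z y" for y], simp add: bs)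
    apply simp
    done
  also have "\<dots> = (\<Sum>(x,y)\<leftarrow>Rmap DH act h (muA a b). \<beta> x y)"
    by (simp add: Rmap_def H.sw_def o_def split_def)
  finally show "(\<Sum>(x,y)\<leftarrow>Rmap DH act h (muA a b). \<beta> x y) =
     (\<Sum>(x,y)\<leftarrow>[(muA u u', v'). (u,v) \<leftarrow> Rmap DH act h a, (u',v') \<leftarrow> Rmap DH act v b]. \<beta> x y)" by simp
qed

(* Right S_H-multiplicativity uses multiplicativity of \<Delta>_H, that S_H is an anti-coalgebra map
   (twice), and the hypothesis g.(S h . a) = (g S h).a. *)
lemma R_Smult: "teq2 sA sH (Rmap DH act (muH g (SH h)) a)
        [(u', muH v' v). (u,v) \<leftarrow> Rmap DH act (SH h) a, (u',v') \<leftarrow> Rmap DH act g u]"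
  unfolding teq2_def
proof (intro allI impI)
  fix \<beta> assume "bilin sA sH \<beta>"
  hence b: "bilin_form sA sH \<beta>" using bilin_iff_bilin_form[OF A.is_vector_space H.is_vector_space] by simp
  note bs = bilin_form_simps[OF b] distrib_left distrib_right
  have b1: "H.bil (\<lambda>p q. \<beta> (act p a) q)" by (rule H.bil_I; rule lin_form_I; simp add: bs)
  have b2: "H.bil (\<lambda>s1 s2. H.sw g (\<lambda>g1 g2. \<beta> (act (muH g1 s1) a) (muH g2 s2)))"
    by (rule H.bil_I; rule H.lin_form_sw_param; rule lin_form_I; simp add: bs)
  have b3: "H.bil (\<lambda>s1 s2. H.sw g (\<lambda>g1 g2. \<beta> (act g1 (act s1 a)) (muH g2 s2)))"
    by (rule H.bil_I; rule H.lin_form_sw_param; rule lin_form_I; simp add: bs)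
  have "(\<Sum>(x,y)\<leftarrow>Rmap DH act (muH g (SH h)) a. \<beta> x y) = H.sw (muH g (SH h)) (\<lambda>p q. \<beta> (act p a) q)"
    by (simp add: Rmap_def H.sw_def o_def split_def)
  also have "\<dots> = H.sw (SH h) (\<lambda>s1 s2. H.sw g (\<lambda>g1 g2. \<beta> (act (muH g1 s1) a) (muH g2 s2)))"
    by (simp add: H.comul_mul[OF b1], rule H.sw_swap)
  also have "\<dots> = H.sw h (\<lambda>p q. H.sw g (\<lambda>g1 g2. \<beta> (act (muH g1 (SH q)) a) (muH g2 (SH p))))"
    by (rule H.antipode_anti_comult[OF b2])
  also have "\<dots> = H.sw h (\<lambda>p q. H.sw g (\<lambda>g1 g2. \<beta> (act g1 (act (SH q) a)) (muH g2 (SH p))))"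
    by (simp add: Sact)
  also have "\<dots> = H.sw (SH h) (\<lambda>s1 s2. H.sw g (\<lambda>g1 g2. \<beta> (act g1 (act s1 a)) (muH g2 s2)))"
    by (rule H.antipode_anti_comult[OF b3, symmetric])
  also have "\<dots> = (\<Sum>(x,y)\<leftarrow>[(u', muH v' v). (u,v) \<leftarrow> Rmap DH act (SH h) a, (u',v') \<leftarrow> Rmap DH act g u]. \<beta> x y)"
    by (simp add: Rmap_def H.sw_def o_def split_def)
  finally show "(\<Sum>(x,y)\<leftarrow>Rmap DH act (muH g (SH h)) a. \<beta> x y) =
     (\<Sum>(x,y)\<leftarrow>[(u', muH v' v). (u,v) \<leftarrow> Rmap DH act (SH h) a, (u',v') \<leftarrow> Rmap DH act g u]. \<beta> x y)" .
qed

(* In the fourfold coproduct h(1)(1) (x) h(1)(2) (x) h(2)(1) (x) h(2)(2) the two middle factors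
   may be exchanged when the second of them acts on A: coassociativity plus cocommutativity of
   the action. *)
lemma comul_act_cocomm:
  assumes l1: "\<And>y1 z y2. lin_form sH (\<lambda>x1. \<Psi> x1 y1 z y2)" and l2: "\<And>x1 z y2. lin_form sH (\<lambda>y1. \<Psi> x1 y1 z y2)"
    and l3: "\<And>x1 y1 y2. lin_form sA (\<lambda>z. \<Psi> x1 y1 z y2)" and l4: "\<And>x1 y1 z. lin_form sH (\<lambda>y2. \<Psi> x1 y1 z y2)"
  shows "H.sw h (\<lambda>p q. H.sw p (\<lambda>p1 p2. H.sw q (\<lambda>q1 q2. \<Psi> p1 q1 (act p2 b) q2)))
       = H.sw h (\<lambda>h1 h2. H.sw h1 (\<lambda>p q. H.sw h2 (\<lambda>p' q'. \<Psi> p q (act p' b) q')))"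
proof -
  have ds: "\<Psi> (x + x') y z w = \<Psi> x y z w + \<Psi> x' y z w" "\<Psi> (sH c x) y z w = c * \<Psi> x y z w"
    "\<Psi> x (y + y') z w = \<Psi> x y z w + \<Psi> x y' z w" "\<Psi> x (sH c y) z w = c * \<Psi> x y z w"
    "\<Psi> x y (z + z') w = \<Psi> x y z w + \<Psi> x y z' w" "\<Psi> x y (sA c z) w = c * \<Psi> x y z w"
    "\<Psi> x y z (w + w') = \<Psi> x y z w + \<Psi> x y z w'" "\<Psi> x y z (sH c w) = c * \<Psi> x y z w"
    for x x' y y' z z' w w' c
    using l1 l2 l3 l4 by (simp_all add: lin_form_def)
  note bs = ds distrib_left distrib_right
  define G where "G = (\<lambda>l. \<Psi> (l!0) (l!1) (act (l!2) b) (l!3))"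
  define G' where "G' = (\<lambda>l. \<Psi> (l!0) (l!2) (act (l!1) b) (l!3))"
  have mG: "H.multilin (Suc (Suc (Suc (Suc 0)))) G"
    unfolding G_def by (rule H.multilin4I[where f="\<lambda>x y z w. \<Psi> x y (act z b) w"]; rule lin_form_I; simp add: bs)
  have mG': "H.multilin (Suc (Suc (Suc (Suc 0)))) G'"
    unfolding G'_def by (rule H.multilin4I[where f="\<lambda>x z y w. \<Psi> x y (act z b) w"]; rule lin_form_I; simp add: bs)
  have "H.sw h (\<lambda>p q. H.sw p (\<lambda>p1 p2. H.sw q (\<lambda>q1 q2. \<Psi> p1 q1 (act p2 b) q2)))
      = H.sw_iter (Suc (Suc (Suc 0))) h G'"
  proof -
    have "H.sw_iter (Suc (Suc (Suc 0))) h G' = H.sw h (\<lambda>p q. H.sw q (\<lambda>y1 y2. H.sw p (\<lambda>p1 p2. \<Psi> p1 y1 (act p2 b) y2)))"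
      by (subst H.sw_iter_split[OF mG', of 0, symmetric], simp_all add: G'_def)
    also have "\<dots> = H.sw h (\<lambda>p q. H.sw p (\<lambda>p1 p2. H.sw q (\<lambda>y1 y2. \<Psi> p1 y1 (act p2 b) y2)))"
      by (rule H.sw_cong, rule H.sw_swap[symmetric])
    finally show ?thesis by simp
  qed
  also have "\<dots> = H.sw_iter (Suc (Suc (Suc 0))) h G"
    apply (subst H.sw_iter_split[OF mG', of "Suc 0", symmetric], simp)
    apply (subst H.sw_iter_split[OF mG, of "Suc 0", symmetric], simp)
    apply (rule H.sw_iter_cong)
    apply (clarsimp simp: length_Suc_conv G_def G'_def)
    apply (rule cocomm_bilin[symmetric])
    apply (rule bilin_form_I; rule lin_form_I; simp add: bs)
    done
  also have "\<dots> = H.sw h (\<lambda>h1 h2. H.sw h1 (\<lambda>p q. H.sw h2 (\<lambda>p' q'. \<Psi> p q (act p' b) q')))"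
  proof -
    have "H.sw_iter (Suc (Suc (Suc 0))) h G = H.sw h (\<lambda>h1 h2. H.sw h2 (\<lambda>p' q'. H.sw h1 (\<lambda>p q. \<Psi> p q (act p' b) q')))"
      by (subst H.sw_iter_split[OF mG, of 0, symmetric], simp_all add: G_def)
    also have "\<dots> = H.sw h (\<lambda>h1 h2. H.sw h1 (\<lambda>p q. H.sw h2 (\<lambda>p' q'. \<Psi> p q (act p' b) q')))"
      by (rule H.sw_cong, rule H.sw_swap[symmetric])
    finally show ?thesis .
  qed
  finally show ?thesis .
qed

lemma R_coalg: "teq4 sA sH sA sH
        [(x1, y1, x2, y2). (x,y) \<leftarrow> Rmap DH act h a, (x1,x2) \<leftarrow> DA x, (y1,y2) \<leftarrow> DH y]
        [(u, v, u', v'). (a1,a2) \<leftarrow> DA a, (h1,h2) \<leftarrow> DH h,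
                         (u,v) \<leftarrow> Rmap DH act h1 a1, (u',v') \<leftarrow> Rmap DH act h2 a2]"
  unfolding teq4_def
proof (intro allI impI)
  fix \<delta> assume "quadlin sA sH sA sH \<delta>"
  hence q: "(\<forall>y z w. lin_form sA (\<lambda>x. \<delta> x y z w)) \<and> (\<forall>x z w. lin_form sH (\<lambda>y. \<delta> x y z w)) \<and>
   (\<forall>x y w. lin_form sA (\<lambda>z. \<delta> x y z w)) \<and> (\<forall>x y z. lin_form sH (\<lambda>w. \<delta> x y z w))"
    using quadlin_iff[OF A.is_vector_space H.is_vector_space A.is_vector_space H.is_vector_space] by simp
  have ds: "\<delta> (x + x') y z w = \<delta> x y z w + \<delta> x' y z w" "\<delta> (sA c x) y z w = c * \<delta> x y z w"
    "\<delta> x (y + y') z w = \<delta> x y z w + \<delta> x y' z w" "\<delta> x (sH c y) z w = c * \<delta> x y z w"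
    "\<delta> x y (z + z') w = \<delta> x y z w + \<delta> x y z' w" "\<delta> x y (sA c z) w = c * \<delta> x y z w"
    "\<delta> x y z (w + w') = \<delta> x y z w + \<delta> x y z w'" "\<delta> x y z (sH c w) = c * \<delta> x y z w"
    for x x' y y' z z' w w' c
    using q by (simp_all add: lin_form_def)
  have bF: "A.bil (\<lambda>x1 x2. H.sw q (\<lambda>y1 y2. \<delta> x1 y1 x2 y2))" for q
    by (rule A.bil_I; rule H.lin_form_sw_param; rule lin_form_I; simp add: ds)
  have "(\<Sum>(x1,y1,x2,y2)\<leftarrow>[(x1, y1, x2, y2). (x,y) \<leftarrow> Rmap DH act h a, (x1,x2) \<leftarrow> DA x, (y1,y2) \<leftarrow> DH y]. \<delta> x1 y1 x2 y2)
     = H.sw h (\<lambda>p q. A.sw (act p a) (\<lambda>x1 x2. H.sw q (\<lambda>y1 y2. \<delta> x1 y1 x2 y2)))"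
    unfolding Rmap_def H.sw_def A.sw_def by (simp add: o_def split_def)
  \<comment> \<open>the coproduct of A is H-linear\<close>
  also have "\<dots> = A.sw a (\<lambda>a1 a2. H.sw h (\<lambda>p q. H.sw p (\<lambda>p1 p2. H.sw q (\<lambda>y1 y2.
      \<delta> (act p1 a1) y1 (act p2 a2) y2))))"
    by (simp add: DA_act[OF bF] swap_HA)
  \<comment> \<open>reorder the coproduct of h using cocommutativity of the action\<close>
  also have "\<dots> = A.sw a (\<lambda>a1 a2. H.sw h (\<lambda>h1 h2. H.sw h1 (\<lambda>p q. H.sw h2 (\<lambda>p' q'.
      \<delta> (act p a1) q (act p' a2) q'))))"
    by (rule A.sw_cong, rule comul_act_cocomm; rule lin_form_I; simp add: ds)
  also have "\<dots> = (\<Sum>(x1,y1,x2,y2)\<leftarrow>[(u, v, u', v'). (a1,a2) \<leftarrow> DA a, (h1,h2) \<leftarrow> DH h,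
                         (u,v) \<leftarrow> Rmap DH act h1 a1, (u',v') \<leftarrow> Rmap DH act h2 a2]. \<delta> x1 y1 x2 y2)"
    unfolding Rmap_def H.sw_def A.sw_def by (simp add: o_def split_def)
  finally show "(\<Sum>(x1,y1,x2,y2)\<leftarrow>[(x1, y1, x2, y2). (x,y) \<leftarrow> Rmap DH act h a, (x1,x2) \<leftarrow> DA x, (y1,y2) \<leftarrow> DH y]. \<delta> x1 y1 x2 y2) =
    (\<Sum>(x1,y1,x2,y2)\<leftarrow>[(u, v, u', v'). (a1,a2) \<leftarrow> DA a, (h1,h2) \<leftarrow> DH h,
                         (u,v) \<leftarrow> Rmap DH act h1 a1, (u',v') \<leftarrow> Rmap DH act h2 a2]. \<delta> x1 y1 x2 y2)" .
qed

section \<open>The tensor model of A (x) H\<close>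

lemma vector_space_tens: "vector_space (tens_scale :: 'k::field \<Rightarrow> ('a, 'h, 'k) tens \<Rightarrow> _)"
  by unfold_locales (auto simp: tens_scale_def fun_eq_iff algebra_simps)

abbreviation \<iota> :: "('a \<times> 'h) list \<Rightarrow> ('a, 'h, 'k) tens" where "\<iota> \<equiv> tens_of sA sH"

lemma bilin_iff: "bilin sA sH \<beta> \<longleftrightarrow> bilin_form sA sH \<beta>" using bilin_iff_bilin_form[OF A.is_vector_space H.is_vector_space] .

lemma iota_app: "\<iota> xs \<beta> = (if bilin_form sA sH \<beta> then (\<Sum>(a,h)\<leftarrow>xs. \<beta> a h) else 0)"
  by (simp add: tens_of_def bilin_iff)

lemma iota_eqI: "(\<And>\<beta>. bilin_form sA sH \<beta> \<Longrightarrow> (\<Sum>(a,h)\<leftarrow>xs. \<beta> a h) = (\<Sum>(a,h)\<leftarrow>ys. \<beta> a h)) \<Longrightarrow> \<iota> xs = \<iota> ys"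
  by (rule ext) (simp add: iota_app)

lemma rep_ok: "\<iota> (tens_rep sA sH (\<iota> xs)) = \<iota> xs"
  unfolding tens_rep_def by (rule someI_ex) blast

lemma rep_sum: "bilin_form sA sH \<Phi> \<Longrightarrow> (\<Sum>(a,h)\<leftarrow>tens_rep sA sH (\<iota> xs). \<Phi> a h) = (\<Sum>(a,h)\<leftarrow>xs. \<Phi> a h)"
  using fun_cong[OF rep_ok[where xs=xs], where x=\<Phi>] by (simp add: iota_app)

lemma iota_add: "\<iota> xs + \<iota> ys = \<iota> (xs @ ys)"
  by (rule ext) (simp add: iota_app)
lemma iota_scale: "tens_scale c (\<iota> xs) = \<iota> (map (\<lambda>(a,h). (sA c a, h)) xs)"
  by (rule ext) (auto simp: iota_app tens_scale_def o_def split_def bilin_form_scale1 sum_list_const_mult)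
lemma iota_nil: "\<iota> [] = 0"
  by (rule ext) (simp add: iota_app)

lemma carrier_iff: "X \<in> tens_carrier sA sH \<longleftrightarrow> (\<exists>xs. X = \<iota> xs)"
  by (auto simp: tens_carrier_def)

lemma iota1_add1: "\<iota> [(a + a', h)] = \<iota> [(a, h)] + \<iota> [(a', h)]"
  by (rule ext) (simp add: iota_app bilin_form_add1)
lemma iota1_add2: "\<iota> [(a, h + h')] = \<iota> [(a, h)] + \<iota> [(a, h')]"
  by (rule ext) (simp add: iota_app bilin_form_add2)
lemma iota1_sc1: "\<iota> [(sA c a, h)] = tens_scale c (\<iota> [(a, h)])"
  by (rule ext) (simp add: iota_app bilin_form_scale1 tens_scale_def)
lemma iota1_sc2: "\<iota> [(a, sH c h)] = tens_scale c (\<iota> [(a, h)])"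
  by (rule ext) (simp add: iota_app bilin_form_scale2 tens_scale_def)

definition mul_list :: "('a \<times> 'h) list \<Rightarrow> ('a \<times> 'h) list \<Rightarrow> ('a \<times> 'h) list" where
  "mul_list xs ys = concat (map (\<lambda>(a,h). concat (map (\<lambda>(b,g).
        map (\<lambda>(p,q). (muA a (act p b), muH q g)) (DH h)) ys)) xs)"

lemma mul_list_sum: "(\<Sum>(x,y)\<leftarrow>mul_list xs ys. \<beta> x y) = (\<Sum>(a,h)\<leftarrow>xs. \<Sum>(b,g)\<leftarrow>ys. H.sw h (\<lambda>p q. \<beta> (muA a (act p b)) (muH q g)))"
  by (simp add: mul_list_def H.sw_def o_def split_def)

lemma mul_list_single: "mul_list [(a,h)] [(b,g)] = map (\<lambda>(p,q). (muA a (act p b), muH q g)) (DH h)"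
  by (simp add: mul_list_def)

lemma smash_mul_iota: "smash_mul sA sH muA muH DH act (\<iota> xs) (\<iota> ys) = \<iota> (mul_list xs ys)"
proof (rule ext)
  fix \<beta>
  show "smash_mul sA sH muA muH DH act (\<iota> xs) (\<iota> ys) \<beta> = \<iota> (mul_list xs ys) \<beta>"
  proof (cases "bilin_form sA sH \<beta>")
    case False thus ?thesis by (simp add: smash_mul_def iota_app)
  next
    case True
    note bs = bilin_form_simps[OF True] distrib_left distrib_right
    have b1: "bilin_form sA sH (\<lambda>b g. H.sw h (\<lambda>p q. \<beta> (muA a (act p b)) (muH q g)))" for a h
      by (rule bilin_form_I; rule H.lin_form_sw_param; rule lin_form_I; simp add: bs)
    have b2: "H.bil (\<lambda>p q. \<beta> (muA a (act p b)) (muH q g))" for a b g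
      by (rule H.bil_I; rule lin_form_I; simp add: bs)
    have b3: "bilin_form sA sH (\<lambda>a h. \<Sum>(b,g)\<leftarrow>ys. H.sw h (\<lambda>p q. \<beta> (muA a (act p b)) (muH q g)))"
      by (rule bilin_form_I; rule lin_form_sumlist2; (rule H.lin_form_sw_param; rule lin_form_I; simp add: bs)?; rule H.lin_form_sw[OF b2])
    have "smash_mul sA sH muA muH DH act (\<iota> xs) (\<iota> ys) \<beta> =
      (\<Sum>(a,h)\<leftarrow>tens_rep sA sH (\<iota> xs). \<Sum>(b,g)\<leftarrow>tens_rep sA sH (\<iota> ys). H.sw h (\<lambda>p q. \<beta> (muA a (act p b)) (muH q g)))"
      using True by (simp add: smash_mul_def iota_app H.sw_def o_def split_def)
    also have "\<dots> = (\<Sum>(a,h)\<leftarrow>xs. \<Sum>(b,g)\<leftarrow>ys. H.sw h (\<lambda>p q. \<beta> (muA a (act p b)) (muH q g)))"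
      by (simp add: rep_sum[OF b1] rep_sum[OF b3])
    finally show ?thesis using True by (simp add: iota_app mul_list_sum)
  qed
qed

definition antipode_list :: "('a \<times> 'h) list \<Rightarrow> ('a \<times> 'h) list" where "antipode_list xs = concat (map (\<lambda>(a,h). Rmap DH act (SH h) (SA a)) xs)"

lemma antipode_list_sum: "(\<Sum>(x,y)\<leftarrow>antipode_list xs. \<beta> x y) = (\<Sum>(a,h)\<leftarrow>xs. H.sw (SH h) (\<lambda>p q. \<beta> (act p (SA a)) q))"
  by (simp add: antipode_list_def Rmap_def H.sw_def o_def split_def)

lemma antipode_list_append: "antipode_list (xs @ ys) = antipode_list xs @ antipode_list ys" by (simp add: antipode_list_def)
lemma antipode_list_scale: "antipode_list (map (\<lambda>(a,h). (sA c a, h)) xs) = map (\<lambda>(a,h). (sA c a, h)) (antipode_list xs)"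
  by (simp add: antipode_list_def Rmap_def map_concat o_def split_def act_S)

lemma smash_antipode_iota: "smash_antipode sA sH DH SA SH act (\<iota> xs) = \<iota> (antipode_list xs)"
proof (rule ext)
  fix \<beta>
  show "smash_antipode sA sH DH SA SH act (\<iota> xs) \<beta> = \<iota> (antipode_list xs) \<beta>"
  proof (cases "bilin_form sA sH \<beta>")
    case False thus ?thesis by (simp add: smash_antipode_def iota_app)
  next
    case True
    note bs = bilin_form_simps[OF True] distrib_left distrib_right
    have b2: "H.bil (\<lambda>p q. \<beta> (act p (SA a)) q)" for a
      by (rule H.bil_I; rule lin_form_I; simp add: bs)
    have b1: "bilin_form sA sH (\<lambda>a h. H.sw (SH h) (\<lambda>p q. \<beta> (act p (SA a)) q))"
      by (rule bilin_form_I; (rule H.lin_form_sw_param; rule lin_form_I; simp add: bs)?; rule H.lin_form_sw_comp[OF b2]; simp)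
    have "smash_antipode sA sH DH SA SH act (\<iota> xs) \<beta> = (\<Sum>(x,y)\<leftarrow>antipode_list (tens_rep sA sH (\<iota> xs)). \<beta> x y)"
      using True by (simp add: smash_antipode_def iota_app antipode_list_def)
    also have "\<dots> = (\<Sum>(a,h)\<leftarrow>xs. H.sw (SH h) (\<lambda>p q. \<beta> (act p (SA a)) q))"
      by (simp add: antipode_list_sum rep_sum[OF b1])
    finally show ?thesis using True by (simp add: iota_app antipode_list_sum)
  qed
qed

lemma smash_counit_iota: "smash_counit sA sH eA eH (\<iota> xs) = (\<Sum>(a,h)\<leftarrow>xs. eA a * eH h)"
proof -
  have b: "bilin_form sA sH (\<lambda>a h. eA a * eH h)" by (rule bilin_form_I; rule lin_form_I; simp add: distrib_left distrib_right)
  show ?thesis by (simp add: smash_counit_def rep_sum[OF b])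
qed

lemma smash_comul_sum_rep:
  assumes "bilin_form sA sH (\<lambda>a h. A.sw a (\<lambda>a1 a2. H.sw h (\<lambda>h1 h2. K (\<iota> [(a1,h1)]) (\<iota> [(a2,h2)]))))"
  shows "(\<Sum>(P,Q)\<leftarrow>smash_comul sA sH DA DH (\<iota> zs). K P Q)
       = (\<Sum>(a,h)\<leftarrow>zs. A.sw a (\<lambda>a1 a2. H.sw h (\<lambda>h1 h2. K (\<iota> [(a1,h1)]) (\<iota> [(a2,h2)]))))"
proof -
  have "(\<Sum>(P,Q)\<leftarrow>smash_comul sA sH DA DH (\<iota> zs). K P Q)
      = (\<Sum>(a,h)\<leftarrow>tens_rep sA sH (\<iota> zs). A.sw a (\<lambda>a1 a2. H.sw h (\<lambda>h1 h2. K (\<iota> [(a1,h1)]) (\<iota> [(a2,h2)]))))"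
    by (simp add: smash_comul_def A.sw_def H.sw_def o_def split_def)
  also have "\<dots> = (\<Sum>(a,h)\<leftarrow>zs. A.sw a (\<lambda>a1 a2. H.sw h (\<lambda>h1 h2. K (\<iota> [(a1,h1)]) (\<iota> [(a2,h2)]))))"
    by (rule rep_sum[OF assms])
  finally show ?thesis .
qed

lemma bilin_form_comul_sum:
  assumes "\<And>h1 a2 h2. lin_form sA (\<lambda>a1. k a1 h1 a2 h2)" "\<And>a1 a2 h2. lin_form sH (\<lambda>h1. k a1 h1 a2 h2)"
    "\<And>a1 h1 h2. lin_form sA (\<lambda>a2. k a1 h1 a2 h2)" "\<And>a1 h1 a2. lin_form sH (\<lambda>h2. k a1 h1 a2 h2)"
  shows "bilin_form sA sH (\<lambda>a h. A.sw a (\<lambda>a1 a2. H.sw h (\<lambda>h1 h2. k a1 h1 a2 h2)))"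
proof (rule bilin_form_I)
  fix h
  have "A.bil (\<lambda>a1 a2. H.sw h (\<lambda>h1 h2. k a1 h1 a2 h2))"
    by (rule A.bil_I; rule H.lin_form_sw_param; rule assms)
  thus "lin_form sA (\<lambda>a. A.sw a (\<lambda>a1 a2. H.sw h (\<lambda>h1 h2. k a1 h1 a2 h2)))" by (rule A.lin_form_sw)
next
  fix a
  have "H.bil (\<lambda>h1 h2. k a1 h1 a2 h2)" for a1 a2 by (rule H.bil_I; rule assms)
  thus "lin_form sH (\<lambda>h. A.sw a (\<lambda>a1 a2. H.sw h (\<lambda>h1 h2. k a1 h1 a2 h2)))"
    by (intro A.lin_form_sw_param H.lin_form_sw)
qed

lemma tens_bilin_form_lin:
  assumes F: "bilin_form tens_scale tens_scale F"
  shows "lin_form sA (\<lambda>a1. F (\<iota> [(a1,h1)]) Y)" "lin_form sH (\<lambda>h1. F (\<iota> [(a1,h1)]) Y)"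
    "lin_form sA (\<lambda>a2. F Y (\<iota> [(a2,h2)]))" "lin_form sH (\<lambda>h2. F Y (\<iota> [(a2,h2)]))"
  using F by (simp_all add: lin_form_def iota1_add1 iota1_add2 iota1_sc1 iota1_sc2 bilin_form_simps)

lemma tens_bilin_form_sum1:
  assumes F: "bilin_form tens_scale tens_scale F"
  shows "F (\<iota> xs) Y = (\<Sum>(a,h)\<leftarrow>xs. F (\<iota> [(a,h)]) Y)"
proof (induction xs)
  case Nil
  have "F 0 Y = 0" using bilin_form_scale1[OF F, of 0 0 Y] by (simp add: tens_scale_def zero_fun_def[symmetric])
  thus ?case by (simp only: iota_nil list.map sum_list.Nil)
next
  case (Cons x xs)
  have "\<iota> (x # xs) = \<iota> [x] + \<iota> xs" by (simp only: iota_add append_Cons append_Nil)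
  hence "F (\<iota> (x # xs)) Y = F (\<iota> [x]) Y + F (\<iota> xs) Y" by (simp only: bilin_form_add1[OF F])
  thus ?case using Cons by (simp add: split_def)
qed

lemma tens_bilin_form_sum2:
  assumes F: "bilin_form tens_scale tens_scale F"
  shows "F Y (\<iota> xs) = (\<Sum>(a,h)\<leftarrow>xs. F Y (\<iota> [(a,h)]))"
proof (induction xs)
  case Nil
  have "F Y 0 = 0" using bilin_form_scale2[OF F, of Y 0 0] by (simp add: tens_scale_def zero_fun_def[symmetric])
  thus ?case by (simp only: iota_nil list.map sum_list.Nil)
next
  case (Cons x xs)
  have "\<iota> (x # xs) = \<iota> [x] + \<iota> xs" by (simp only: iota_add append_Cons append_Nil)
  hence "F Y (\<iota> (x # xs)) = F Y (\<iota> [x]) + F Y (\<iota> xs)" by (simp only: bilin_form_add2[OF F])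
  thus ?case using Cons by (simp add: split_def)
qed

lemma tens_bilin_form_sum:
  assumes F: "bilin_form tens_scale tens_scale F"
  shows "F (\<iota> xs) (\<iota> ys) = (\<Sum>(a,h)\<leftarrow>xs. \<Sum>(b,g)\<leftarrow>ys. F (\<iota> [(a,h)]) (\<iota> [(b,g)]))"
  by (subst tens_bilin_form_sum1[OF F], simp only: tens_bilin_form_sum2[OF F, where xs=ys])

abbreviation mulT :: "('a, 'h, 'k) tens \<Rightarrow> ('a, 'h, 'k) tens \<Rightarrow> ('a, 'h, 'k) tens"
  where "mulT \<equiv> smash_mul sA sH muA muH DH act"
abbreviation uT :: "('a, 'h, 'k) tens" where "uT \<equiv> smash_unit sA sH uA uH"
abbreviation DT :: "('a, 'h, 'k) tens \<Rightarrow> (('a, 'h, 'k) tens \<times> ('a, 'h, 'k) tens) list"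
  where "DT \<equiv> smash_comul sA sH DA DH"
abbreviation eT :: "('a, 'h, 'k) tens \<Rightarrow> 'k" where "eT \<equiv> smash_counit sA sH eA eH"
abbreviation ST :: "('a, 'h, 'k) tens \<Rightarrow> ('a, 'h, 'k) tens" where "ST \<equiv> smash_antipode sA sH DH SA SH act"
abbreviation VT :: "('a, 'h, 'k) tens set" where "VT \<equiv> tens_carrier sA sH"

lemma smash_comul_sum:
  assumes F: "bilin_form tens_scale tens_scale F"
  shows "(\<Sum>(P,Q)\<leftarrow>DT (\<iota> zs). F P Q) = (\<Sum>(a,h)\<leftarrow>zs. A.sw a (\<lambda>a1 a2. H.sw h (\<lambda>h1 h2. F (\<iota> [(a1,h1)]) (\<iota> [(a2,h2)]))))"
  by (rule smash_comul_sum_rep, rule bilin_form_comul_sum; rule tens_bilin_form_lin[OF F])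

lemma smash_comul_nonbilin: "\<not> bilin_form sA sH \<beta> \<Longrightarrow> (\<Sum>(p,q)\<leftarrow>DT X. f p q * q \<beta>) = 0"
  "\<not> bilin_form sA sH \<beta> \<Longrightarrow> (\<Sum>(p,q)\<leftarrow>DT X. f q p * p \<beta>) = 0"
  by (simp_all add: smash_comul_def iota_app o_def split_def)

lemma sum_scale_map: "(\<Sum>(x,y)\<leftarrow>map (\<lambda>(a,h). (sA c a, h)) l. \<beta> x y) = (\<Sum>(x,y)\<leftarrow>l. \<beta> (sA c x) y)"
  by (simp add: o_def split_def)

lemma bilin_form_push:
  assumes b: "bilin_form sA sH \<beta>"
  shows "H.sw h (\<lambda>p q. \<beta> w (Y p q)) = \<beta> w (H.swv h Y)"
    "H.sw h (\<lambda>p q. c p q * \<beta> w (Y p q)) = \<beta> w (H.swv h (\<lambda>p q. sH (c p q) (Y p q)))"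
    "H.sw h (\<lambda>p q. \<beta> (Z p q) w') = \<beta> (H.swv h Z) w'"
    "H.sw h (\<lambda>p q. c p q * \<beta> (Z p q) w') = \<beta> (H.swv h (\<lambda>p q. sA (c p q) (Z p q))) w'"
    "A.sw a (\<lambda>p q. \<beta> (Z' p q) w') = \<beta> (A.swv a Z') w'"
    "A.sw a (\<lambda>p q. c' p q * \<beta> (Z' p q) w') = \<beta> (A.swv a (\<lambda>p q. sA (c' p q) (Z' p q))) w'"
    "A.sw a (\<lambda>p q. \<beta> w (Y' p q)) = \<beta> w (A.swv a Y')"
    "A.sw a (\<lambda>p q. c' p q * \<beta> w (Y' p q)) = \<beta> w (A.swv a (\<lambda>p q. sH (c' p q) (Y' p q)))"
  using b by (intro H.sw_lin H.sw_lin_sc A.sw_lin A.sw_lin_sc; simp add: bilin_form_simps)+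

section \<open>A (x) H is a Hopf quasigroup\<close>

lemma smash_subspace: "module.subspace tens_scale VT"
  unfolding module.subspace_def[OF vector_space_tens[unfolded module_iff_vector_space[symmetric]]]
  by (auto simp: carrier_iff iota_nil[symmetric] iota_add iota_scale) blast+

lemma smash_closed: "uT \<in> VT" "\<And>X Y. X \<in> VT \<Longrightarrow> Y \<in> VT \<Longrightarrow> mulT X Y \<in> VT" "\<And>X. X \<in> VT \<Longrightarrow> ST X \<in> VT"
  "\<And>X. \<forall>(p,q)\<in>set (DT X). p \<in> VT \<and> q \<in> VT"
  by (auto simp: carrier_iff smash_unit_def smash_mul_iota smash_antipode_iota smash_comul_def)

lemma smash_mul_linear:
  assumes "X \<in> VT" "Y \<in> VT" "Z \<in> VT"
  shows "mulT (X + Y) Z = mulT X Z + mulT Y Z \<and> mulT Z (X + Y) = mulT Z X + mulT Z Y \<and>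
        mulT (tens_scale c X) Y = tens_scale c (mulT X Y) \<and> mulT X (tens_scale c Y) = tens_scale c (mulT X Y)"
proof -
  obtain xs ys zs where X: "X = \<iota> xs" and Y: "Y = \<iota> ys" and Z: "Z = \<iota> zs" using assms by (auto simp: carrier_iff)
  have 1: "mulT (X + Y) Z = mulT X Z + mulT Y Z"
    by (simp add: X Y Z iota_add smash_mul_iota, simp add: mul_list_def)
  have 2: "mulT Z (X + Y) = mulT Z X + mulT Z Y"
    by (simp add: X Y Z iota_add smash_mul_iota, rule iota_eqI, simp only: map_append sum_list_append mul_list_sum, simp add: sum_list_addf split_def)
  have 3: "mulT (tens_scale c X) Y = tens_scale c (mulT X Y)"
    by (simp add: X Y iota_scale smash_mul_iota, rule iota_eqI,
        simp only: mul_list_sum sum_scale_map, simp add: bilin_form_simps sum_list_const_mult split_def)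
  have 4: "mulT X (tens_scale c Y) = tens_scale c (mulT X Y)"
    by (simp add: X Y iota_scale smash_mul_iota, rule iota_eqI,
        simp only: mul_list_sum sum_scale_map, simp add: bilin_form_simps sum_list_const_mult split_def)
  show ?thesis using 1 2 3 4 by blast
qed

lemma smash_comul_linear:
  assumes "X \<in> VT" "Y \<in> VT"
  shows "teq2 tens_scale tens_scale (DT (X + Y)) (DT X @ DT Y) \<and>
         teq2 tens_scale tens_scale (DT (tens_scale c X)) (map (\<lambda>(p,q). (tens_scale c p, q)) (DT X))"
proof -
  obtain xs ys where X: "X = \<iota> xs" and Y: "Y = \<iota> ys" using assms by (auto simp: carrier_iff)
  have bF: "bilin_form sA sH (\<lambda>a h. A.sw a (\<lambda>a1 a2. H.sw h (\<lambda>h1 h2. F (\<iota> [(a1,h1)]) (\<iota> [(a2,h2)]))))"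
    if F: "bilin_form tens_scale tens_scale F" for F
    by (rule bilin_form_comul_sum; rule tens_bilin_form_lin[OF F])
  show ?thesis unfolding teq2_def
  proof (intro conjI allI impI)
    fix F :: "('a, 'h, 'k) tens \<Rightarrow> ('a, 'h, 'k) tens \<Rightarrow> 'k" assume "bilin tens_scale tens_scale F"
    hence F: "bilin_form tens_scale tens_scale F" by (rule bilin_iff_bilin_form[OF vector_space_tens vector_space_tens, THEN iffD1])
    show "(\<Sum>(x,y)\<leftarrow>DT (X + Y). F x y) = (\<Sum>(x,y)\<leftarrow>DT X @ DT Y. F x y)"
      by (simp add: X Y iota_add smash_comul_sum[OF F])
    show "(\<Sum>(x,y)\<leftarrow>DT (tens_scale c X). F x y) = (\<Sum>(x,y)\<leftarrow>map (\<lambda>(p,q). (tens_scale c p, q)) (DT X). F x y)"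
      by (simp only: X iota_scale smash_comul_sum[OF F] sum_scale_map bilin_form_scale1[OF bF[OF F]])
         (simp add: o_def split_def bilin_form_scale1[OF F] sum_list_const_mult smash_comul_sum[OF F, unfolded split_def])
  qed
qed

lemma smash_counit_antipode_linear:
  assumes "X \<in> VT" "Y \<in> VT"
  shows "eT (X + Y) = eT X + eT Y \<and> eT (tens_scale c X) = c * eT X \<and>
         ST (X + Y) = ST X + ST Y \<and> ST (tens_scale c X) = tens_scale c (ST X)"
proof -
  obtain xs ys where X: "X = \<iota> xs" and Y: "Y = \<iota> ys" using assms by (auto simp: carrier_iff)
  have 1: "ST (X + Y) = ST X + ST Y" by (simp add: X Y iota_add smash_antipode_iota antipode_list_append)
  have 2: "ST (tens_scale c X) = tens_scale c (ST X)" by (simp only: X iota_scale smash_antipode_iota antipode_list_scale)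
  show ?thesis using 1 2
    by (simp add: X Y iota_add iota_scale smash_counit_iota o_def split_def sum_list_const_mult mult.assoc)
qed

lemma smash_unital:
  assumes "X \<in> VT"
  shows "mulT uT X = X \<and> mulT X uT = X"
proof -
  obtain xs where X: "X = \<iota> xs" using assms by (auto simp: carrier_iff)
  have 1: "mulT uT X = X"
  proof -
    have "\<iota> (mul_list [(uA, uH)] xs) = \<iota> xs"
    proof (rule iota_eqI)
      fix \<beta> assume b: "bilin_form sA sH \<beta>"
      have bb: "H.bil (\<lambda>p q. \<beta> (act p a) (muH q g))" for a g
        by (rule H.bil_I; rule lin_form_I; simp add: bilin_form_simps[OF b] distrib_left distrib_right)
      show "(\<Sum>(a,h)\<leftarrow>mul_list [(uA, uH)] xs. \<beta> a h) = (\<Sum>(a,h)\<leftarrow>xs. \<beta> a h)"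
        by (simp add: mul_list_sum H.comul_unit[OF bb])
    qed
    thus ?thesis by (simp add: X smash_unit_def smash_mul_iota)
  qed
  have 2: "mulT X uT = X"
  proof -
    have "\<iota> (mul_list xs [(uA, uH)]) = \<iota> xs"
    proof (rule iota_eqI)
      fix \<beta> assume b: "bilin_form sA sH \<beta>"
      show "(\<Sum>(a,h)\<leftarrow>mul_list xs [(uA, uH)]. \<beta> a h) = (\<Sum>(a,h)\<leftarrow>xs. \<beta> a h)"
        using b by (simp add: mul_list_sum bilin_form_simps[OF b] bilin_form_push[OF b])
    qed
    thus ?thesis by (simp add: X smash_unit_def smash_mul_iota)
  qed
  show ?thesis using 1 2 by simp
qed

lemma comul_tensor_coassoc:
  fixes g6 :: "'a \<Rightarrow> 'h \<Rightarrow> 'a \<Rightarrow> 'h \<Rightarrow> 'a \<Rightarrow> 'h \<Rightarrow> 'k"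
  assumes "\<And>u y v z w. lin_form sA (\<lambda>x. g6 x u y v z w)" "\<And>x y v z w. lin_form sH (\<lambda>u. g6 x u y v z w)"
    "\<And>x u v z w. lin_form sA (\<lambda>y. g6 x u y v z w)" "\<And>x u y z w. lin_form sH (\<lambda>v. g6 x u y v z w)"
    "\<And>x u y v w. lin_form sA (\<lambda>z. g6 x u y v z w)" "\<And>x u y v z. lin_form sH (\<lambda>w. g6 x u y v z w)"
  shows "A.sw a (\<lambda>a1 a2. H.sw h (\<lambda>h1 h2. A.sw a1 (\<lambda>x y. H.sw h1 (\<lambda>u v. g6 x u y v a2 h2))))
      = A.sw a (\<lambda>a1 a2. H.sw h (\<lambda>h1 h2. A.sw a2 (\<lambda>x y. H.sw h2 (\<lambda>u v. g6 a1 h1 x u y v))))"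
proof -
  have tA: "A.tri (\<lambda>x y z. H.sw h (\<lambda>h1 h2. H.sw h1 (\<lambda>u v. g6 x u y v z h2)))"
    by (rule A.tri_I; rule H.lin_form_sw_param; rule H.lin_form_sw_param; rule assms)
  have tH: "H.tri (\<lambda>u v w. g6 a1 u x v y w)" for a1 x y
    by (rule H.tri_I; rule assms)
  have "A.sw a (\<lambda>a1 a2. H.sw h (\<lambda>h1 h2. A.sw a1 (\<lambda>x y. H.sw h1 (\<lambda>u v. g6 x u y v a2 h2))))
     = A.sw a (\<lambda>a1 a2. A.sw a1 (\<lambda>x y. H.sw h (\<lambda>h1 h2. H.sw h1 (\<lambda>u v. g6 x u y v a2 h2))))"
    by (simp only: swap_HA)
  also have "\<dots> = A.sw a (\<lambda>a1 a2. A.sw a2 (\<lambda>x y. H.sw h (\<lambda>h1 h2. H.sw h1 (\<lambda>u v. g6 a1 u x v y h2))))"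
    by (rule A.coassoc[OF tA])
  also have "\<dots> = A.sw a (\<lambda>a1 a2. A.sw a2 (\<lambda>x y. H.sw h (\<lambda>h1 h2. H.sw h2 (\<lambda>u v. g6 a1 h1 x u y v))))"
    by (simp only: H.coassoc[OF tH])
  also have "\<dots> = A.sw a (\<lambda>a1 a2. H.sw h (\<lambda>h1 h2. A.sw a2 (\<lambda>x y. H.sw h2 (\<lambda>u v. g6 a1 h1 x u y v))))"
    by (simp only: swap_HA)
  finally show ?thesis .
qed

lemma smash_coassoc:
  assumes "X \<in> VT"
  shows "teq3 tens_scale tens_scale tens_scale
        (concat (map (\<lambda>(p,q). map (\<lambda>(r,s). (r,s,q)) (DT p)) (DT X)))
        (concat (map (\<lambda>(p,q). map (\<lambda>(r,s). (p,r,s)) (DT q)) (DT X)))"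
  unfolding teq3_def
proof (intro allI impI)
  obtain xs where X: "X = \<iota> xs" using assms by (auto simp: carrier_iff)
  fix \<gamma> :: "('a, 'h, 'k) tens \<Rightarrow> ('a, 'h, 'k) tens \<Rightarrow> ('a, 'h, 'k) tens \<Rightarrow> 'k"
  assume "trilin tens_scale tens_scale tens_scale \<gamma>"
  hence t: "(\<forall>y z. lin_form tens_scale (\<lambda>x. \<gamma> x y z)) \<and> (\<forall>x z. lin_form tens_scale (\<lambda>y. \<gamma> x y z)) \<and> (\<forall>x y. lin_form tens_scale (\<lambda>z. \<gamma> x y z))"
    by (rule trilin_iff[OF vector_space_tens vector_space_tens vector_space_tens, THEN iffD1])
  have F1: "bilin_form tens_scale tens_scale (\<lambda>x y. \<gamma> x y z)" for z using t by (simp add: bilin_form_def)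
  have F3: "bilin_form tens_scale tens_scale (\<lambda>y z. \<gamma> x y z)" for x using t by (simp add: bilin_form_def)
  have gs: "\<gamma> (x + x') y z = \<gamma> x y z + \<gamma> x' y z" "\<gamma> (tens_scale c x) y z = c * \<gamma> x y z"
    "\<gamma> x (y + y') z = \<gamma> x y z + \<gamma> x y' z" "\<gamma> x (tens_scale c y) z = c * \<gamma> x y z"
    "\<gamma> x y (z + z') = \<gamma> x y z + \<gamma> x y z'" "\<gamma> x y (tens_scale c z) = c * \<gamma> x y z"
    for x x' y y' z z' c using t by (simp_all add: lin_form_def)
  note bs = gs iota1_add1 iota1_add2 iota1_sc1 iota1_sc2 distrib_left distrib_right
  define g6 where "g6 = (\<lambda>x u y v z w. \<gamma> (\<iota> [(x,u)]) (\<iota> [(y,v)]) (\<iota> [(z,w)]))"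
  have inL: "(\<Sum>(R,T)\<leftarrow>DT (\<iota> [(a1,h1)]). \<gamma> R T (\<iota> [(a2,h2)])) = A.sw a1 (\<lambda>x y. H.sw h1 (\<lambda>u v. g6 x u y v a2 h2))"
    for a1 h1 a2 h2 by (simp add: smash_comul_sum[OF F1] g6_def)
  have inR: "(\<Sum>(R,T)\<leftarrow>DT (\<iota> [(a2,h2)]). \<gamma> (\<iota> [(a1,h1)]) R T) = A.sw a2 (\<lambda>x y. H.sw h2 (\<lambda>u v. g6 a1 h1 x u y v))"
    for a1 h1 a2 h2 by (simp add: smash_comul_sum[OF F3] g6_def)
  have bL: "bilin_form sA sH (\<lambda>a h. A.sw a (\<lambda>a1 a2. H.sw h (\<lambda>h1 h2. (\<lambda>P Q. \<Sum>(R,T)\<leftarrow>DT P. \<gamma> R T Q) (\<iota> [(a1,h1)]) (\<iota> [(a2,h2)]))))"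
    unfolding inL[unfolded g6_def]
    by (rule bilin_form_comul_sum; (rule A.lin_form_sw, rule A.bil_I)?; (rule A.lin_form_sw_param)?; (rule H.lin_form_sw, rule H.bil_I)?;
        (rule H.lin_form_sw_param)?; rule lin_form_I; simp add: bs)
  have bR: "bilin_form sA sH (\<lambda>a h. A.sw a (\<lambda>a1 a2. H.sw h (\<lambda>h1 h2. (\<lambda>P Q. \<Sum>(R,T)\<leftarrow>DT Q. \<gamma> P R T) (\<iota> [(a1,h1)]) (\<iota> [(a2,h2)]))))"
    unfolding inR[unfolded g6_def]
    by (rule bilin_form_comul_sum; (rule A.lin_form_sw, rule A.bil_I)?; (rule A.lin_form_sw_param)?; (rule H.lin_form_sw, rule H.bil_I)?;
        (rule H.lin_form_sw_param)?; rule lin_form_I; simp add: bs)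
  have lhs: "(\<Sum>(x,y,z)\<leftarrow>concat (map (\<lambda>(p,q). map (\<lambda>(r,s). (r,s,q)) (DT p)) (DT X)). \<gamma> x y z)
     = (\<Sum>(a,h)\<leftarrow>xs. A.sw a (\<lambda>a1 a2. H.sw h (\<lambda>h1 h2. A.sw a1 (\<lambda>x y. H.sw h1 (\<lambda>u v. g6 x u y v a2 h2)))))"
  proof -
    have "(\<Sum>(x,y,z)\<leftarrow>concat (map (\<lambda>(p,q). map (\<lambda>(r,s). (r,s,q)) (DT p)) (DT X)). \<gamma> x y z)
        = (\<Sum>(P,Q)\<leftarrow>DT (\<iota> xs). (\<lambda>P Q. \<Sum>(R,T)\<leftarrow>DT P. \<gamma> R T Q) P Q)"
      by (simp add: X o_def split_def)
    also note smash_comul_sum_rep[OF bL]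
    finally show ?thesis by (simp only: inL)
  qed
  have rhs: "(\<Sum>(x,y,z)\<leftarrow>concat (map (\<lambda>(p,q). map (\<lambda>(r,s). (p,r,s)) (DT q)) (DT X)). \<gamma> x y z)
     = (\<Sum>(a,h)\<leftarrow>xs. A.sw a (\<lambda>a1 a2. H.sw h (\<lambda>h1 h2. A.sw a2 (\<lambda>x y. H.sw h2 (\<lambda>u v. g6 a1 h1 x u y v)))))"
  proof -
    have "(\<Sum>(x,y,z)\<leftarrow>concat (map (\<lambda>(p,q). map (\<lambda>(r,s). (p,r,s)) (DT q)) (DT X)). \<gamma> x y z)
        = (\<Sum>(P,Q)\<leftarrow>DT (\<iota> xs). (\<lambda>P Q. \<Sum>(R,T)\<leftarrow>DT Q. \<gamma> P R T) P Q)"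
      by (simp add: X o_def split_def)
    also note smash_comul_sum_rep[OF bR]
    finally show ?thesis by (simp only: inR)
  qed
  have elem: "A.sw a (\<lambda>a1 a2. H.sw h (\<lambda>h1 h2. A.sw a1 (\<lambda>x y. H.sw h1 (\<lambda>u v. g6 x u y v a2 h2))))
      = A.sw a (\<lambda>a1 a2. H.sw h (\<lambda>h1 h2. A.sw a2 (\<lambda>x y. H.sw h2 (\<lambda>u v. g6 a1 h1 x u y v))))" for a h
    by (rule comul_tensor_coassoc; unfold g6_def; rule lin_form_I; simp add: bs)
  show "(\<Sum>(x,y,z)\<leftarrow>concat (map (\<lambda>(p,q). map (\<lambda>(r,s). (r,s,q)) (DT p)) (DT X)). \<gamma> x y z) =
        (\<Sum>(x,y,z)\<leftarrow>concat (map (\<lambda>(p,q). map (\<lambda>(r,s). (p,r,s)) (DT q)) (DT X)). \<gamma> x y z)"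
    by (simp only: lhs rhs elem)
qed

lemma smash_counital:
  assumes "X \<in> VT"
  shows "(\<Sum>(p,q)\<leftarrow>DT X. tens_scale (eT p) q) = X \<and> (\<Sum>(p,q)\<leftarrow>DT X. tens_scale (eT q) p) = X"
proof -
  obtain xs where X: "X = \<iota> xs" using assms by (auto simp: carrier_iff)
  have 1: "(\<Sum>(p,q)\<leftarrow>DT X. tens_scale (eT p) q) \<beta> = X \<beta>" for \<beta>
  proof (cases "bilin_form sA sH \<beta>")
    case False thus ?thesis by (simp add: sum_list_apply tens_scale_def smash_comul_nonbilin X iota_app)
  next
    case True
    note bs = bilin_form_simps[OF True] distrib_left distrib_right
    have bK: "bilin_form sA sH (\<lambda>a h. A.sw a (\<lambda>a1 a2. H.sw h (\<lambda>h1 h2. eT (\<iota> [(a1,h1)]) * \<iota> [(a2,h2)] \<beta>)))"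
      by (rule bilin_form_comul_sum; rule lin_form_I; simp add: smash_counit_iota iota_app True bs)
    show ?thesis
      by (simp only: sum_list_apply tens_scale_def X smash_comul_sum_rep[OF bK] smash_counit_iota,
          simp add: iota_app True mult.assoc bilin_form_push[OF True])
  qed
  have 2: "(\<Sum>(p,q)\<leftarrow>DT X. tens_scale (eT q) p) \<beta> = X \<beta>" for \<beta>
  proof (cases "bilin_form sA sH \<beta>")
    case False thus ?thesis by (simp add: sum_list_apply tens_scale_def smash_comul_nonbilin X iota_app)
  next
    case True
    note bs = bilin_form_simps[OF True] distrib_left distrib_right
    have bK: "bilin_form sA sH (\<lambda>a h. A.sw a (\<lambda>a1 a2. H.sw h (\<lambda>h1 h2. eT (\<iota> [(a2,h2)]) * \<iota> [(a1,h1)] \<beta>)))"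
      by (rule bilin_form_comul_sum; rule lin_form_I; simp add: smash_counit_iota iota_app True bs)
    show ?thesis
      by (simp only: sum_list_apply tens_scale_def X smash_comul_sum_rep[where K="\<lambda>P Q. eT Q * P \<beta>", OF bK] smash_counit_iota,
          simp add: iota_app True mult.assoc bilin_form_push[OF True])
  qed
  show ?thesis using 1 2 by (simp add: fun_eq_iff)
qed

lemma smash_comul_unit: "teq2 tens_scale tens_scale (DT uT) [(uT, uT)]"
  unfolding teq2_def
proof (intro allI impI)
  fix F :: "('a, 'h, 'k) tens \<Rightarrow> ('a, 'h, 'k) tens \<Rightarrow> 'k" assume "bilin tens_scale tens_scale F"
  hence F: "bilin_form tens_scale tens_scale F" by (rule bilin_iff_bilin_form[OF vector_space_tens vector_space_tens, THEN iffD1])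
  have b1: "H.bil (\<lambda>h1 h2. F (\<iota> [(a1,h1)]) (\<iota> [(a2,h2)]))" for a1 a2
    by (rule H.bil_I; rule tens_bilin_form_lin[OF F])
  have b2: "A.bil (\<lambda>a1 a2. F (\<iota> [(a1,uH)]) (\<iota> [(a2,uH)]))"
    by (rule A.bil_I; rule tens_bilin_form_lin[OF F])
  show "(\<Sum>(x,y)\<leftarrow>DT uT. F x y) = (\<Sum>(x,y)\<leftarrow>[(uT, uT)]. F x y)"
    by (simp add: smash_unit_def smash_comul_sum[OF F] H.comul_unit[OF b1] A.comul_unit[OF b2])
qed

(* It uses multiplicativity of \<Delta>_A and \<Delta>_H, H-linearity of \<Delta>_A and cocommutativity of the action. *)
lemma smash_comul_mul_elem:
  fixes k4 :: "'a \<Rightarrow> 'h \<Rightarrow> 'a \<Rightarrow> 'h \<Rightarrow> 'k"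
  assumes l1: "\<And>y z w. lin_form sA (\<lambda>x. k4 x y z w)" and l2: "\<And>x z w. lin_form sH (\<lambda>y. k4 x y z w)"
    and l3: "\<And>x y w. lin_form sA (\<lambda>z. k4 x y z w)" and l4: "\<And>x y z. lin_form sH (\<lambda>w. k4 x y z w)"
  shows "H.sw h (\<lambda>p q. A.sw (muA a (act p b)) (\<lambda>c1 c2. H.sw (muH q g) (\<lambda>d1 d2. k4 c1 d1 c2 d2)))
    = A.sw a (\<lambda>a1 a2. H.sw h (\<lambda>h1 h2. A.sw b (\<lambda>b1 b2. H.sw g (\<lambda>g1 g2.
        H.sw h1 (\<lambda>p q. H.sw h2 (\<lambda>p' q'. k4 (muA a1 (act p b1)) (muH q g1) (muA a2 (act p' b2)) (muH q' g2)))))))"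
proof -
  have ks: "k4 (x + x') y z w = k4 x y z w + k4 x' y z w" "k4 (sA c x) y z w = c * k4 x y z w"
    "k4 x (y + y') z w = k4 x y z w + k4 x y' z w" "k4 x (sH c y) z w = c * k4 x y z w"
    "k4 x y (z + z') w = k4 x y z w + k4 x y z' w" "k4 x y (sA c z) w = c * k4 x y z w"
    "k4 x y z (w + w') = k4 x y z w + k4 x y z w'" "k4 x y z (sH c w) = c * k4 x y z w"
    for x x' y y' z z' w w' c
    using l1 l2 l3 l4 by (simp_all add: lin_form_def)
  note bs = ks distrib_left distrib_right
  have bilA1: "A.bil (\<lambda>c1 c2. H.sw d (\<lambda>d1 d2. k4 c1 d1 c2 d2))" for d
    by (rule A.bil_I; rule H.lin_form_sw_param; rule lin_form_I; simp add: bs)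
  have bilA2: "A.bil (\<lambda>x y. H.sw d (\<lambda>d1 d2. k4 (muA a1 x) d1 (muA a2 y) d2))" for d a1 a2
    by (rule A.bil_I; rule H.lin_form_sw_param; rule lin_form_I; simp add: bs)
  have bilH: "H.bil (\<lambda>d1 d2. k4 X d1 Y d2)" for X Y
    by (rule H.bil_I; rule lin_form_I; simp add: bs)
  have "H.sw h (\<lambda>p q. A.sw (muA a (act p b)) (\<lambda>c1 c2. H.sw (muH q g) (\<lambda>d1 d2. k4 c1 d1 c2 d2)))
      = A.sw a (\<lambda>a1 a2. A.sw b (\<lambda>b1 b2. H.sw h (\<lambda>p q. H.sw p (\<lambda>p1 p2. H.sw q (\<lambda>q1 q2.
          H.sw g (\<lambda>g1 g2. k4 (muA a1 (act p1 b1)) (muH q1 g1) (muA a2 (act p2 b2)) (muH q2 g2)))))))"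
    by (simp only: A.comul_mul[OF bilA1], simp only: DA_act[OF bilA2], simp only: H.comul_mul[OF bilH] swap_HA)
  also have "\<dots> = A.sw a (\<lambda>a1 a2. A.sw b (\<lambda>b1 b2. H.sw h (\<lambda>h1 h2. H.sw h1 (\<lambda>p q. H.sw h2 (\<lambda>p' q'.
          H.sw g (\<lambda>g1 g2. k4 (muA a1 (act p b1)) (muH q g1) (muA a2 (act p' b2)) (muH q' g2)))))))"
    apply (rule A.sw_cong)+
    apply (rule comul_act_cocomm[where \<Psi>="\<lambda>x1 y1 z y2. H.sw g (\<lambda>g1 g2. k4 (muA _ (act x1 _)) (muH y1 g1) (muA _ z) (muH y2 g2))"])
    apply (rule H.lin_form_sw_param; rule lin_form_I; simp add: bs)+
    done
  also have "\<dots> = A.sw a (\<lambda>a1 a2. A.sw b (\<lambda>b1 b2. H.sw h (\<lambda>h1 h2. H.sw g (\<lambda>g1 g2. H.sw h1 (\<lambda>p q. H.sw h2 (\<lambda>p' q'. k4 (muA a1 (act p b1)) (muH q g1) (muA a2 (act p' b2)) (muH q' g2)))))))"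
    apply (rule A.sw_cong)+
    apply (rule H.sw_cong)
    apply (rule sym)
    apply (subst H.sw_swap)
    apply (rule H.sw_cong)
    apply (subst H.sw_swap)
    apply (rule refl)
    done
  also have "\<dots> = A.sw a (\<lambda>a1 a2. H.sw h (\<lambda>h1 h2. A.sw b (\<lambda>b1 b2. H.sw g (\<lambda>g1 g2. H.sw h1 (\<lambda>p q. H.sw h2 (\<lambda>p' q'. k4 (muA a1 (act p b1)) (muH q g1) (muA a2 (act p' b2)) (muH q' g2)))))))"
    by (simp only: swap_HA)
  finally show ?thesis .
qed

lemma smash_comul_mul:
  assumes "X \<in> VT" "Y \<in> VT"
  shows "teq2 tens_scale tens_scale (DT (mulT X Y))
        (concat (map (\<lambda>(p,q). map (\<lambda>(r,s). (mulT p r, mulT q s)) (DT Y)) (DT X)))"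
  unfolding teq2_def
proof (intro allI impI)
  obtain xs ys where X: "X = \<iota> xs" and Y: "Y = \<iota> ys" using assms by (auto simp: carrier_iff)
  fix F :: "('a, 'h, 'k) tens \<Rightarrow> ('a, 'h, 'k) tens \<Rightarrow> 'k" assume "bilin tens_scale tens_scale F"
  hence F: "bilin_form tens_scale tens_scale F" by (rule bilin_iff_bilin_form[OF vector_space_tens vector_space_tens, THEN iffD1])
  define k4 where "k4 = (\<lambda>a1 h1 a2 h2. F (\<iota> [(a1,h1)]) (\<iota> [(a2,h2)]))"
  have ks: "k4 (x + x') y z w = k4 x y z w + k4 x' y z w" "k4 (sA c x) y z w = c * k4 x y z w"
    "k4 x (y + y') z w = k4 x y z w + k4 x y' z w" "k4 x (sH c y) z w = c * k4 x y z w"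
    "k4 x y (z + z') w = k4 x y z w + k4 x y z' w" "k4 x y (sA c z) w = c * k4 x y z w"
    "k4 x y z (w + w') = k4 x y z w + k4 x y z w'" "k4 x y z (sH c w) = c * k4 x y z w"
    for x x' y y' z z' w w' c
    using tens_bilin_form_lin[OF F] unfolding k4_def by (simp_all add: lin_form_def)
  note bs = ks distrib_left distrib_right
  have inner: "F (mulT (\<iota> [(a1,h1)]) (\<iota> [(b1,g1)])) (mulT (\<iota> [(a2,h2)]) (\<iota> [(b2,g2)]))
     = H.sw h1 (\<lambda>p q. H.sw h2 (\<lambda>p' q'. k4 (muA a1 (act p b1)) (muH q g1) (muA a2 (act p' b2)) (muH q' g2)))"
    for a1 h1 a2 h2 b1 g1 b2 g2
    by (simp only: smash_mul_iota mul_list_single, subst tens_bilin_form_sum[OF F], simp add: k4_def H.sw_def o_def split_def)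
  define M where "M = (\<lambda>a1 h1 a2 h2 b1 g1 b2 g2. H.sw h1 (\<lambda>p q. H.sw h2 (\<lambda>p' q'. k4 (muA a1 (act p b1)) (muH q g1) (muA a2 (act p' b2)) (muH q' g2))))"
  have bM: "bilin_form sA sH (\<lambda>b g. A.sw b (\<lambda>b1 b2. H.sw g (\<lambda>g1 g2. (\<lambda>R T. F (mulT (\<iota> [(a1,h1)]) R) (mulT (\<iota> [(a2,h2)]) T)) (\<iota> [(b1,g1)]) (\<iota> [(b2,g2)]))))"
    for a1 h1 a2 h2
    unfolding inner
    by (rule bilin_form_comul_sum; rule H.lin_form_sw_param; rule H.lin_form_sw_param; rule lin_form_I; simp add: bs)
  have inDT: "(\<Sum>(R,T)\<leftarrow>DT (\<iota> ys). F (mulT (\<iota> [(a1,h1)]) R) (mulT (\<iota> [(a2,h2)]) T))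
     = (\<Sum>(b,g)\<leftarrow>ys. A.sw b (\<lambda>b1 b2. H.sw g (\<lambda>g1 g2. M a1 h1 a2 h2 b1 g1 b2 g2)))" for a1 h1 a2 h2
    using smash_comul_sum_rep[OF bM[of a1 h1 a2 h2]] by (simp add: inner M_def)
  have bil1: "H.bil (\<lambda>p q. H.sw h2 (\<lambda>p' q'. k4 (muA a1 (act p b1)) (muH q g1) (muA a2 (act p' b2)) (muH q' g2)))"
    for a1 h2 a2 b1 g1 b2 g2
    by (rule H.bil_I; rule H.lin_form_sw_param; rule lin_form_I; simp add: bs)
  have bil2: "H.bil (\<lambda>p' q'. k4 X Y (muA a2 (act p' b2)) (muH q' g2))" for X Y a2 b2 g2
    by (rule H.bil_I; rule lin_form_I; simp add: bs)
  have bK: "bilin_form sA sH (\<lambda>a h. A.sw a (\<lambda>a1 a2. H.sw h (\<lambda>h1 h2. (\<lambda>P Q. \<Sum>(R,T)\<leftarrow>DT (\<iota> ys). F (mulT P R) (mulT Q T)) (\<iota> [(a1,h1)]) (\<iota> [(a2,h2)]))))"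
    unfolding inDT M_def
    by (rule bilin_form_comul_sum; rule lin_form_sumlist2; rule A.lin_form_sw_param; rule H.lin_form_sw_param;
        (rule H.lin_form_sw[OF bil1])?; (rule H.lin_form_sw_param)?; (rule H.lin_form_sw_param)?; rule lin_form_I;
        simp add: bs H.sw_addh[OF bil2] H.sw_sch[OF bil2])
  have rhs: "(\<Sum>(x,y)\<leftarrow>concat (map (\<lambda>(p,q). map (\<lambda>(r,s). (mulT p r, mulT q s)) (DT Y)) (DT X)). F x y)
     = (\<Sum>(a,h)\<leftarrow>xs. \<Sum>(b,g)\<leftarrow>ys. A.sw a (\<lambda>a1 a2. H.sw h (\<lambda>h1 h2. A.sw b (\<lambda>b1 b2. H.sw g (\<lambda>g1 g2. M a1 h1 a2 h2 b1 g1 b2 g2)))))"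
  proof -
    have "(\<Sum>(x,y)\<leftarrow>concat (map (\<lambda>(p,q). map (\<lambda>(r,s). (mulT p r, mulT q s)) (DT Y)) (DT X)). F x y)
        = (\<Sum>(P,Q)\<leftarrow>DT (\<iota> xs). (\<lambda>P Q. \<Sum>(R,T)\<leftarrow>DT (\<iota> ys). F (mulT P R) (mulT Q T)) P Q)"
      by (simp add: X Y o_def split_def)
    also note smash_comul_sum_rep[OF bK]
    finally show ?thesis by (simp only: inDT H.sw_swap_gen A.sw_swap_gen)
  qed
  define \<Phi> where "\<Phi> = (\<lambda>c d. A.sw c (\<lambda>c1 c2. H.sw d (\<lambda>d1 d2. k4 c1 d1 c2 d2)))"
  have lhs: "(\<Sum>(x,y)\<leftarrow>DT (mulT X Y). F x y)
     = (\<Sum>(a,h)\<leftarrow>xs. \<Sum>(b,g)\<leftarrow>ys. H.sw h (\<lambda>p q. \<Phi> (muA a (act p b)) (muH q g)))"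
    by (simp only: X Y smash_mul_iota smash_comul_sum[OF F] mul_list_sum \<Phi>_def k4_def)
  have elem: "H.sw h (\<lambda>p q. \<Phi> (muA a (act p b)) (muH q g))
      = A.sw a (\<lambda>a1 a2. H.sw h (\<lambda>h1 h2. A.sw b (\<lambda>b1 b2. H.sw g (\<lambda>g1 g2. M a1 h1 a2 h2 b1 g1 b2 g2))))" for a h b g
    unfolding \<Phi>_def M_def by (rule smash_comul_mul_elem; unfold k4_def; rule tens_bilin_form_lin[OF F])
  show "(\<Sum>(x,y)\<leftarrow>DT (mulT X Y). F x y) =
    (\<Sum>(x,y)\<leftarrow>concat (map (\<lambda>(p,q). map (\<lambda>(r,s). (mulT p r, mulT q s)) (DT Y)) (DT X)). F x y)"
    by (simp only: lhs rhs elem)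
qed

lemma smash_counit_mul:
  assumes "X \<in> VT" "Y \<in> VT"
  shows "eT uT = 1" "eT (mulT X Y) = eT X * eT Y"
proof -
  show "eT uT = 1" by (simp add: smash_unit_def smash_counit_iota)
  obtain xs ys where X: "X = \<iota> xs" and Y: "Y = \<iota> ys" using assms by (auto simp: carrier_iff)
  have e: "H.sw h (\<lambda>p q. eA (muA a (act p b)) * eH (muH q g)) = eA a * eH h * (eA b * eH g)" for a h b g
  proof -
    have "H.sw h (\<lambda>p q. eA (muA a (act p b)) * eH (muH q g)) = H.sw h (\<lambda>p q. (eA a * eA b * eH g) * (eH p * eH q))"
      by (rule H.sw_cong) (simp add: ac_simps)
    also have "\<dots> = eA a * eA b * eH g * eH h" by (simp only: H.sw_cmult H.counitL[OF H.lin_form_e])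
    finally show ?thesis by (simp add: ac_simps)
  qed
  have "eT (mulT X Y) = (\<Sum>(a,h)\<leftarrow>xs. \<Sum>(b,g)\<leftarrow>ys. eA a * eH h * (eA b * eH g))"
    by (simp only: X Y smash_mul_iota smash_counit_iota mul_list_sum e)
  also have "\<dots> = eT X * eT Y"
    by (simp add: X Y smash_counit_iota sum_list_const_mult sum_list_mult_const split_def)
  finally show "eT (mulT X Y) = eT X * eT Y" .
qed

lemma smash_mul_nonbilin: "\<not> bilin_form sA sH \<beta> \<Longrightarrow> mulT X Y \<beta> = 0"
  by (simp add: smash_mul_def iota_app)

(* Reduction of an antipode axiom of A (x) H to pure tensors: if T is bilinear on the carrier and,
   on pure tensors a1 (x) h1, a2 (x) h2 and Y = \<Sum> b (x) g, evaluates to \<Sum> \<kappa> a1 h1 a2 h2 b g, then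
   \<Sum> T X(1) X(2) = \<epsilon>(X) Y follows from the elementwise identity
   \<Sum> \<kappa> a(1) h(1) a(2) h(2) b g = \<epsilon>(a) \<epsilon>(h) \<beta>(b, g). *)
lemma smash_antipode_axiom:
  fixes T :: "('a, 'h, 'k) tens \<Rightarrow> ('a, 'h, 'k) tens \<Rightarrow> ('a, 'h, 'k) tens"
  assumes X: "X \<in> VT" and Y: "Y = \<iota> ys"
    and add1: "\<And>P P' Q. P \<in> VT \<Longrightarrow> P' \<in> VT \<Longrightarrow> Q \<in> VT \<Longrightarrow> T (P + P') Q = T P Q + T P' Q"
    and add2: "\<And>P Q Q'. P \<in> VT \<Longrightarrow> Q \<in> VT \<Longrightarrow> Q' \<in> VT \<Longrightarrow> T P (Q + Q') = T P Q + T P Q'"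
    and scale1: "\<And>c P Q. P \<in> VT \<Longrightarrow> Q \<in> VT \<Longrightarrow> T (tens_scale c P) Q = tens_scale c (T P Q)"
    and scale2: "\<And>c P Q. P \<in> VT \<Longrightarrow> Q \<in> VT \<Longrightarrow> T P (tens_scale c Q) = tens_scale c (T P Q)"
    and vanish: "\<And>\<beta> P Q. \<not> bilin_form sA sH \<beta> \<Longrightarrow> T P Q \<beta> = 0"
    and pure: "\<And>\<beta> a1 h1 a2 h2. bilin_form sA sH \<beta> \<Longrightarrow>
       T (\<iota> [(a1,h1)]) (\<iota> [(a2,h2)]) \<beta> = (\<Sum>(b,g)\<leftarrow>ys. \<kappa> \<beta> a1 h1 a2 h2 b g)"
    and elem: "\<And>\<beta> a h b g. bilin_form sA sH \<beta> \<Longrightarrow>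
       A.sw a (\<lambda>a1 a2. H.sw h (\<lambda>h1 h2. \<kappa> \<beta> a1 h1 a2 h2 b g)) = eA a * eH h * \<beta> b g"
  shows "(\<Sum>(p,q)\<leftarrow>DT X. T p q) = tens_scale (eT X) Y"
proof (rule ext)
  obtain xs where xs: "X = \<iota> xs" using X by (auto simp: carrier_iff)
  have pure_in: "\<iota> [(a,h)] \<in> VT" for a h by (auto simp: carrier_iff)
  fix \<beta>
  show "(\<Sum>(p,q)\<leftarrow>DT X. T p q) \<beta> = tens_scale (eT X) Y \<beta>"
  proof (cases "bilin_form sA sH \<beta>")
    case False
    thus ?thesis by (simp add: sum_list_apply tens_scale_def vanish Y iota_app, simp add: split_def)
  next
    case True
    have app: "tens_scale c Z \<beta> = c * Z \<beta>" for c and Z :: "('a, 'h, 'k) tens"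
      by (simp add: tens_scale_def)
    have lin: "lin_form sA (\<lambda>a1. T (\<iota> [(a1,h1)]) (\<iota> [(a2,h2)]) \<beta>)"
      "lin_form sH (\<lambda>h1. T (\<iota> [(a1,h1)]) (\<iota> [(a2,h2)]) \<beta>)"
      "lin_form sA (\<lambda>a2. T (\<iota> [(a1,h1)]) (\<iota> [(a2,h2)]) \<beta>)"
      "lin_form sH (\<lambda>h2. T (\<iota> [(a1,h1)]) (\<iota> [(a2,h2)]) \<beta>)" for a1 h1 a2 h2
      by (auto intro!: lin_form_I simp: iota1_add1 iota1_add2 iota1_sc1 iota1_sc2 pure_in
          add1 add2 scale1 scale2 app)
    have bK: "bilin_form sA sH (\<lambda>a h. A.sw a (\<lambda>a1 a2. H.sw h (\<lambda>h1 h2.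
                 T (\<iota> [(a1,h1)]) (\<iota> [(a2,h2)]) \<beta>)))"
      by (rule bilin_form_comul_sum; rule lin)
    have "(\<Sum>(p,q)\<leftarrow>DT X. T p q) \<beta> = (\<Sum>(P,Q)\<leftarrow>DT (\<iota> xs). T P Q \<beta>)"
      by (simp add: sum_list_apply xs)
    also have "\<dots> = (\<Sum>(a,h)\<leftarrow>xs. A.sw a (\<lambda>a1 a2. H.sw h (\<lambda>h1 h2.
                 T (\<iota> [(a1,h1)]) (\<iota> [(a2,h2)]) \<beta>)))"
      by (rule smash_comul_sum_rep[OF bK])
    also have "\<dots> = (\<Sum>(a,h)\<leftarrow>xs. \<Sum>(b,g)\<leftarrow>ys. eA a * eH h * \<beta> b g)"
      by (simp only: pure[OF True] H.sw_swap_gen A.sw_swap_gen elem[OF True])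
    also have "\<dots> = tens_scale (eT X) Y \<beta>"
      by (simp add: xs Y True tens_scale_def smash_counit_iota iota_app sum_list_const_mult
          sum_list_mult_const split_def)
    finally show ?thesis .
  qed
qed

lemma antipode_SxY_normal_form:
  assumes b: "bilin_form sA sH \<beta>"
  shows "H.sw h (\<lambda>h1 h2. H.sw (SH h1) (\<lambda>s1 s2. H.sw h2 (\<lambda>r t. H.sw s2 (\<lambda>p q.
     \<beta> (muA (act s1 (SA a1)) (act p (muA a2 (act r b')))) (muH q (muH t g))))))
   = H.sw_iter (Suc (Suc (Suc (Suc (Suc 0))))) h (\<lambda>l. \<beta> (muA (act (SH (l!3)) (SA a1))
       (muA (act (SH (l!2)) a2) (act (SH (l!1)) (act (l!4) b')))) (muH (SH (l!0)) (muH (l!5) g)))"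
proof -
  note bs = bilin_form_simps[OF b] distrib_left distrib_right
  define \<Gamma> where "\<Gamma> = (\<lambda>l. \<beta> (muA (act (SH (l!3)) (SA a1)) (muA (act (SH (l!2)) a2) (act (SH (l!1)) (act (l!4) b'))))
      (muH (SH (l!0)) (muH (l!5) g)))"
  have m\<Gamma>: "H.multilin (Suc (Suc (Suc (Suc (Suc (Suc 0)))))) \<Gamma>"
    unfolding \<Gamma>_def
    by (rule H.multilin6I[where f="\<lambda>m0 m1 m2 m3 m4 m5. \<beta> (muA (act (SH m3) (SA a1)) (muA (act (SH m2) a2) (act (SH m1) (act m4 b'))))
      (muH (SH m0) (muH m5 g))"]; rule lin_form_I; simp add: bs)
  have b0: "H.bil (\<lambda>p q. \<beta> (muA X (act p Y)) (muH q Z))" for X Y Z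
    by (rule H.bil_I; rule lin_form_I; simp add: bs)
  have bF: "H.bil (\<lambda>s1 s2. H.sw h2 (\<lambda>r t. H.sw s2 (\<lambda>p q. \<beta> (muA (act s1 (SA a1)) (act p (muA a2 (act r b')))) (muH q (muH t g)))))" for h2
    by (rule H.bil_I; (rule H.lin_form_sw_param; rule H.lin_form_sw_param; rule lin_form_I; simp add: bs)?;
        rule H.lin_form_sw_param; rule H.lin_form_sw[OF b0])
  have bG: "H.bil (\<lambda>p q. \<beta> (muA X (act p (muA a2 Y))) (muH q Z))" for X Y Z
    by (rule H.bil_I; rule lin_form_I; simp add: bs)
  have bQ: "H.bil (\<lambda>c1 c2. \<beta> (muA W (muA (act c1 X) (act c2 Z))) Q)" for W X Z Q
    by (rule H.bil_I; rule lin_form_I; simp add: bs)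
  have qs: "\<beta> (muA W (act k (muA X Z))) Q = H.sw k (\<lambda>c1 c2. \<beta> (muA W (muA (act c1 X) (act c2 Z))) Q)" for W k X Z Q
    by (rule act_mul_split[where \<theta>="\<lambda>z. \<beta> (muA W z) Q", simplified]) (rule lin_form_I; simp add: bs)
  define G4 where "G4 = (\<lambda>l. H.sw (l!Suc 0) (\<lambda>p q. \<Gamma> (take (Suc 0) l @ p # q # drop (Suc (Suc 0)) l)))"
  define G3 where "G3 = (\<lambda>l. H.sw (l!0) (\<lambda>p q. G4 (take 0 l @ p # q # drop (Suc 0) l)))"
  define G2 where "G2 = (\<lambda>l. H.sw (l!Suc (Suc 0)) (\<lambda>p q. G3 (take (Suc (Suc 0)) l @ p # q # drop (Suc (Suc (Suc 0))) l)))"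
  define G1 where "G1 = (\<lambda>l. H.sw (l!0) (\<lambda>p q. G2 (take 0 l @ p # q # drop (Suc 0) l)))"
  have m4: "H.multilin (Suc (Suc (Suc (Suc (Suc 0))))) G4" unfolding G4_def by (rule H.multilin_split[OF m\<Gamma>]) simp
  have m3: "H.multilin (Suc (Suc (Suc (Suc 0)))) G3" unfolding G3_def by (rule H.multilin_split[OF m4]) simp
  have m2: "H.multilin (Suc (Suc (Suc 0))) G2" unfolding G2_def by (rule H.multilin_split[OF m3]) simp
  have "H.sw_iter (Suc (Suc (Suc (Suc (Suc 0))))) h \<Gamma> = H.sw_iter (Suc (Suc (Suc (Suc 0)))) h G4"
    unfolding G4_def by (rule H.sw_iter_split[OF m\<Gamma>, symmetric]) simp
  also have "\<dots> = H.sw_iter (Suc (Suc (Suc 0))) h G3"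
    unfolding G3_def by (rule H.sw_iter_split[OF m4, symmetric]) simp
  also have "\<dots> = H.sw_iter (Suc (Suc 0)) h G2"
    unfolding G2_def by (rule H.sw_iter_split[OF m3, symmetric]) simp
  also have "\<dots> = H.sw_iter (Suc 0) h G1"
    unfolding G1_def by (rule H.sw_iter_split[OF m2, symmetric]) simp
  also have "\<dots> = H.sw h (\<lambda>h1 h2. H.sw h1 (\<lambda>x y. H.sw h2 (\<lambda>r t. H.sw x (\<lambda>x1 x2. H.sw x2 (\<lambda>u v.
      \<beta> (muA (act (SH y) (SA a1)) (muA (act (SH v) a2) (act (SH u) (act r b')))) (muH (SH x1) (muH t g)))))))"
    by (simp add: G1_def G2_def G3_def G4_def \<Gamma>_def)
  finally have reassoc: "H.sw_iter (Suc (Suc (Suc (Suc (Suc 0))))) h \<Gamma> = \<dots>" .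
  show ?thesis unfolding \<Gamma>_def[symmetric] reassoc
    by (simp only: H.antipode_anti_comult[OF bF], simp only: H.antipode_anti_comult[OF bG],
        simp only: qs, simp only: H.antipode_anti_comult[OF bQ])
qed

(* Cancelling the antipodes in the normal form, first in A (via the twisted coproduct) and then
   in H, leaves only the counits. *)
lemma antipode_SxY_collapse:
  assumes b: "bilin_form sA sH \<beta>"
  shows "A.sw a (\<lambda>a1 a2. H.sw_iter (Suc (Suc (Suc (Suc (Suc 0))))) h (\<lambda>l. \<beta> (muA (act (SH (l!3)) (SA a1))
       (muA (act (SH (l!2)) a2) (act (SH (l!1)) (act (l!4) b')))) (muH (SH (l!0)) (muH (l!5) g))))
    = eA a * eH h * \<beta> b' g"
proof -
  note bs = bilin_form_simps[OF b] distrib_left distrib_right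
  define \<Gamma> where "\<Gamma> = (\<lambda>a1 a2 l. \<beta> (muA (act (SH (l!3)) (SA a1)) (muA (act (SH (l!2)) a2) (act (SH (l!1)) (act (l!4) b'))))
      (muH (SH (l!0)) (muH (l!5) g)))"
  have m\<Gamma>: "H.multilin (Suc (Suc (Suc (Suc (Suc (Suc 0)))))) (\<Gamma> a1 a2)" for a1 a2
    unfolding \<Gamma>_def
    by (rule H.multilin6I[where f="\<lambda>m0 m1 m2 m3 m4 m5. \<beta> (muA (act (SH m3) (SA a1)) (muA (act (SH m2) a2) (act (SH m1) (act m4 b'))))
      (muH (SH m0) (muH m5 g))"]; rule lin_form_I; simp add: bs)
  define \<Psi> where "\<Psi> = (\<lambda>l. A.sw a (\<lambda>a1 a2. \<Gamma> a1 a2 l))"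
  have m\<Psi>: "H.multilin (Suc (Suc (Suc (Suc (Suc (Suc 0)))))) \<Psi>" unfolding \<Psi>_def by (rule multilin_swA, rule m\<Gamma>)
  define \<Psi>4 where "\<Psi>4 = (\<lambda>l. eH (l!2) * eA a * \<beta> (act (SH (l!1)) (act (l!3) b')) (muH (SH (l!0)) (muH (l!4) g)))"
  have m4: "H.multilin (Suc (Suc (Suc (Suc (Suc 0))))) \<Psi>4"
    unfolding \<Psi>4_def
    by (rule H.multilin5I[where f="\<lambda>m0 m1 k m4 m5. eH k * eA a * \<beta> (act (SH m1) (act m4 b')) (muH (SH m0) (muH m5 g))"];
        rule lin_form_I; simp add: bs)
  define \<Psi>3 where "\<Psi>3 = (\<lambda>l. eA a * \<beta> (act (SH (l!1)) (act (l!2) b')) (muH (SH (l!0)) (muH (l!3) g)))"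
  have m3: "H.multilin (Suc (Suc (Suc (Suc 0)))) \<Psi>3"
    unfolding \<Psi>3_def
    by (rule H.multilin4I[where f="\<lambda>m0 m1 m4 m5. eA a * \<beta> (act (SH m1) (act m4 b')) (muH (SH m0) (muH m5 g))"];
        rule lin_form_I; simp add: bs)
  define \<Psi>2 where "\<Psi>2 = (\<lambda>l. eA a * (eH (l!1) * \<beta> b' (muH (SH (l!0)) (muH (l!2) g))))"
  have m2: "H.multilin (Suc (Suc (Suc 0))) \<Psi>2"
    unfolding \<Psi>2_def
    by (rule H.multilin3I[where f="\<lambda>m0 k m5. eA a * (eH k * \<beta> b' (muH (SH m0) (muH m5 g)))"]; rule lin_form_I; simp add: bs)
  have cu: "H.sw k (\<lambda>p q. eH q * \<beta> b' (muH (SH p) (muH m g))) = \<beta> b' (muH (SH k) (muH m g))" for k m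
    by (rule H.counitR) (rule lin_form_I; simp add: bs)
  have "A.sw a (\<lambda>a1 a2. H.sw_iter (Suc (Suc (Suc (Suc (Suc 0))))) h (\<Gamma> a1 a2))
     = H.sw_iter (Suc (Suc (Suc (Suc (Suc 0))))) h \<Psi>"
    by (simp only: swap_A_sw_iter \<Psi>_def)
  also have "\<dots> = H.sw_iter (Suc (Suc (Suc (Suc 0)))) h \<Psi>4"
    apply (subst H.sw_iter_split[OF m\<Psi>, of 2, symmetric], simp)
    apply (rule H.sw_iter_cong)
    apply (clarsimp simp: length_Suc_conv \<Psi>_def \<Psi>4_def \<Gamma>_def)
    apply (rule act_antipode_left[where \<theta>="\<lambda>z. \<beta> z Q" for Q, simplified])
    apply (rule lin_form_I; simp add: bs)
    done
  also have "\<dots> = H.sw_iter (Suc (Suc (Suc 0))) h \<Psi>3"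
    apply (subst H.sw_iter_split[OF m4, of 1, symmetric], simp)
    apply (rule H.sw_iter_cong)
    apply (clarsimp simp: length_Suc_conv \<Psi>4_def \<Psi>3_def)
    apply (subst H.counitR[symmetric, where \<phi>="\<lambda>z. eA a * \<beta> (act (SH z) (act m4 b')) Q" for m4 Q])
     apply (rule lin_form_I; simp add: bs)
    apply (rule H.sw_cong)
    apply (simp add: ac_simps)
    done
  also have "\<dots> = H.sw_iter (Suc (Suc 0)) h \<Psi>2"
    apply (subst H.sw_iter_split[OF m3, of 1, symmetric], simp)
    apply (rule H.sw_iter_cong)
    apply (clarsimp simp: length_Suc_conv \<Psi>3_def \<Psi>2_def)
    apply (simp add: bilin_form_push[OF b] bs)
    done
  also have "\<dots> = H.sw_iter (Suc 0) h (\<lambda>l. eA a * \<beta> b' (muH (SH (l!0)) (muH (l!1) g)))"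
    apply (subst H.sw_iter_split[OF m2, of 0, symmetric], simp)
    apply (rule H.sw_iter_cong)
    apply (clarsimp simp: length_Suc_conv \<Psi>2_def cu)
    done
  also have "\<dots> = eA a * eH h * \<beta> b' g"
    by (simp add: bilin_form_push[OF b] bs)
  finally show ?thesis unfolding \<Gamma>_def .
qed

lemma antipode_SxY_elem:
  assumes b: "bilin_form sA sH \<beta>"
  shows "A.sw a (\<lambda>a1 a2. H.sw h (\<lambda>h1 h2. H.sw (SH h1) (\<lambda>s1 s2. H.sw h2 (\<lambda>r t. H.sw s2 (\<lambda>p q.
     \<beta> (muA (act s1 (SA a1)) (act p (muA a2 (act r b')))) (muH q (muH t g)))))))
    = eA a * eH h * \<beta> b' g"
  by (simp only: antipode_SxY_normal_form[OF b] antipode_SxY_collapse[OF b])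

lemma smash_antipode_SxY:
  assumes X: "X \<in> VT" and Y: "Y \<in> VT"
  shows "(\<Sum>(p,q)\<leftarrow>DT X. mulT (ST p) (mulT q Y)) = tens_scale (eT X) Y"
proof -
  obtain ys where ys: "Y = \<iota> ys" using Y by (auto simp: carrier_iff)
  show ?thesis
  proof (rule smash_antipode_axiom[OF X ys, where T="\<lambda>P Q. mulT (ST P) (mulT Q Y)"
      and \<kappa>="\<lambda>\<beta> a1 h1 a2 h2 b g. H.sw (SH h1) (\<lambda>s1 s2. H.sw h2 (\<lambda>r t. H.sw s2 (\<lambda>p q.
         \<beta> (muA (act s1 (SA a1)) (act p (muA a2 (act r b)))) (muH q (muH t g)))))"])
    fix \<beta> a1 h1 a2 h2 assume "bilin_form sA sH \<beta>"
    thus "mulT (ST (\<iota> [(a1, h1)])) (mulT (\<iota> [(a2, h2)]) Y) \<beta> = (\<Sum>(b,g)\<leftarrow>ys. H.sw (SH h1) (\<lambda>s1 s2.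
        H.sw h2 (\<lambda>r t. H.sw s2 (\<lambda>p q. \<beta> (muA (act s1 (SA a1)) (act p (muA a2 (act r b)))) (muH q (muH t g))))))"
      by (simp only: ys smash_antipode_iota smash_mul_iota iota_app if_True mul_list_sum antipode_list_sum,
          simp add: H.sw_swap_gen)
  qed (auto simp: Y smash_mul_linear smash_counit_antipode_linear smash_closed smash_mul_nonbilin
        intro: antipode_SxY_elem)
qed

(* The sum of the second antipode axiom (x S(y) z) for pure tensors, rewritten as an iterated
   coproduct of h: the antipode is moved through the coproduct (it is an anti-coalgebra map)
   and the action on a product is split by the quasimodule axiom. *)
lemma antipode_xSY_normal_form:
  assumes b: "bilin_form sA sH \<beta>"
  shows "H.sw h (\<lambda>h1 h2. H.sw (SH h2) (\<lambda>s1 s2. H.sw s2 (\<lambda>p q. H.sw h1 (\<lambda>r s.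
     \<beta> (muA a1 (act r (muA (act s1 (SA a2)) (act p b')))) (muH s (muH q g))))))
   = H.sw_iter (Suc (Suc (Suc (Suc (Suc 0))))) h (\<lambda>l. \<beta> (muA a1 (muA (act (l!0) (act (SH (l!5)) (SA a2)))
       (act (l!1) (act (SH (l!4)) b')))) (muH (l!2) (muH (SH (l!3)) g)))"
proof -
  note bs = bilin_form_simps[OF b] distrib_left distrib_right
  define \<Gamma> where "\<Gamma> = (\<lambda>l. \<beta> (muA a1 (muA (act (l!0) (act (SH (l!5)) (SA a2))) (act (l!1) (act (SH (l!4)) b'))))
      (muH (l!2) (muH (SH (l!3)) g)))"
  have m\<Gamma>: "H.multilin (Suc (Suc (Suc (Suc (Suc (Suc 0)))))) \<Gamma>"
    unfolding \<Gamma>_def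
    by (rule H.multilin6I[where f="\<lambda>m0 m1 m2 m3 m4 m5. \<beta> (muA a1 (muA (act m0 (act (SH m5) (SA a2))) (act m1 (act (SH m4) b'))))
      (muH m2 (muH (SH m3) g))"]; rule lin_form_I; simp add: bs)
  have bG: "H.bil (\<lambda>p q. H.sw h1 (\<lambda>r s. \<beta> (muA a1 (act r (muA X (act p b')))) (muH s (muH q g))))" for h1 X
    by (rule H.bil_I; rule H.lin_form_sw_param; rule lin_form_I; simp add: bs)
  have bF: "H.bil (\<lambda>s1 s2. H.sw s2 (\<lambda>p q. H.sw h1 (\<lambda>r s. \<beta> (muA a1 (act r (muA (act s1 (SA a2)) (act p b')))) (muH s (muH q g)))))" for h1
    by (rule H.bil_I; (rule H.lin_form_sw_param; rule H.lin_form_sw_param; rule lin_form_I; simp add: bs)?; rule H.lin_form_sw[OF bG])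
  have qs: "\<beta> (muA W (act k (muA X Z))) Q = H.sw k (\<lambda>c1 c2. \<beta> (muA W (muA (act c1 X) (act c2 Z))) Q)" for W k X Z Q
    by (rule act_mul_split[where \<theta>="\<lambda>z. \<beta> (muA W z) Q", simplified]) (rule lin_form_I; simp add: bs)
  define G4 where "G4 = (\<lambda>l. H.sw (l!0) (\<lambda>p q. \<Gamma> (take 0 l @ p # q # drop (Suc 0) l)))"
  define G3 where "G3 = (\<lambda>l. H.sw (l!0) (\<lambda>p q. G4 (take 0 l @ p # q # drop (Suc 0) l)))"
  define G2 where "G2 = (\<lambda>l. H.sw (l!Suc 0) (\<lambda>p q. G3 (take (Suc 0) l @ p # q # drop (Suc (Suc 0)) l)))"
  define G1 where "G1 = (\<lambda>l. H.sw (l!Suc 0) (\<lambda>p q. G2 (take (Suc 0) l @ p # q # drop (Suc (Suc 0)) l)))"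
  have m4: "H.multilin (Suc (Suc (Suc (Suc (Suc 0))))) G4" unfolding G4_def by (rule H.multilin_split[OF m\<Gamma>]) simp
  have m3: "H.multilin (Suc (Suc (Suc (Suc 0)))) G3" unfolding G3_def by (rule H.multilin_split[OF m4]) simp
  have m2: "H.multilin (Suc (Suc (Suc 0))) G2" unfolding G2_def by (rule H.multilin_split[OF m3]) simp
  have "H.sw_iter (Suc (Suc (Suc (Suc (Suc 0))))) h \<Gamma> = H.sw_iter (Suc (Suc (Suc (Suc 0)))) h G4"
    unfolding G4_def by (rule H.sw_iter_split[OF m\<Gamma>, symmetric]) simp
  also have "\<dots> = H.sw_iter (Suc (Suc (Suc 0))) h G3"
    unfolding G3_def by (rule H.sw_iter_split[OF m4, symmetric]) simp
  also have "\<dots> = H.sw_iter (Suc (Suc 0)) h G2"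
    unfolding G2_def by (rule H.sw_iter_split[OF m3, symmetric]) simp
  also have "\<dots> = H.sw_iter (Suc 0) h G1"
    unfolding G1_def by (rule H.sw_iter_split[OF m2, symmetric]) simp
  also have "\<dots> = H.sw h (\<lambda>h1 h2. H.sw h2 (\<lambda>x y. H.sw x (\<lambda>x1 x2. H.sw h1 (\<lambda>r s. H.sw r (\<lambda>r1 r2.
      \<beta> (muA a1 (muA (act r1 (act (SH y) (SA a2))) (act r2 (act (SH x2) b')))) (muH s (muH (SH x1) g)))))))"
    by (simp add: G1_def G2_def G3_def G4_def \<Gamma>_def)
  finally have reassoc: "H.sw_iter (Suc (Suc (Suc (Suc (Suc 0))))) h \<Gamma> = \<dots>" .
  show ?thesis unfolding \<Gamma>_def[symmetric] reassoc
    by (simp only: H.antipode_anti_comult[OF bF], simp only: H.antipode_anti_comult[OF bG], simp only: qs)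
qed

lemma antipode_xSY_collapse:
  assumes b: "bilin_form sA sH \<beta>"
  shows "H.sw_iter (Suc (Suc (Suc (Suc (Suc 0))))) h (\<lambda>l. \<beta> (muA a1 (muA (act (l!0) (act (SH (l!5)) (SA a2)))
       (act (l!1) (act (SH (l!4)) b')))) (muH (l!2) (muH (SH (l!3)) g)))
    = eH h * \<beta> (muA a1 (muA (SA a2) b')) g"
proof -
  note bs = bilin_form_simps[OF b] distrib_left distrib_right
  define \<Gamma> where "\<Gamma> = (\<lambda>l. \<beta> (muA a1 (muA (act (l!0) (act (SH (l!5)) (SA a2))) (act (l!1) (act (SH (l!4)) b'))))
      (muH (l!2) (muH (SH (l!3)) g)))"
  have m\<Gamma>: "H.multilin (Suc (Suc (Suc (Suc (Suc (Suc 0)))))) \<Gamma>"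
    unfolding \<Gamma>_def
    by (rule H.multilin6I[where f="\<lambda>m0 m1 m2 m3 m4 m5. \<beta> (muA a1 (muA (act m0 (act (SH m5) (SA a2))) (act m1 (act (SH m4) b'))))
      (muH m2 (muH (SH m3) g))"]; rule lin_form_I; simp add: bs)
  define \<Psi>4 where "\<Psi>4 = (\<lambda>l. eH (l!2) * \<beta> (muA a1 (muA (act (l!0) (act (SH (l!4)) (SA a2))) (act (l!1) (act (SH (l!3)) b')))) g)"
  have m4: "H.multilin (Suc (Suc (Suc (Suc (Suc 0))))) \<Psi>4"
    unfolding \<Psi>4_def
    by (rule H.multilin5I[where f="\<lambda>m0 m1 k m4 m5. eH k * \<beta> (muA a1 (muA (act m0 (act (SH m5) (SA a2))) (act m1 (act (SH m4) b')))) g"];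
        rule lin_form_I; simp add: bs)
  define \<Psi>3 where "\<Psi>3 = (\<lambda>l. \<beta> (muA a1 (muA (act (l!0) (act (SH (l!3)) (SA a2))) (act (l!1) (act (SH (l!2)) b')))) g)"
  have m3: "H.multilin (Suc (Suc (Suc (Suc 0)))) \<Psi>3"
    unfolding \<Psi>3_def
    by (rule H.multilin4I[where f="\<lambda>m0 m1 m4 m5. \<beta> (muA a1 (muA (act m0 (act (SH m5) (SA a2))) (act m1 (act (SH m4) b')))) g"];
        rule lin_form_I; simp add: bs)
  define \<Psi>2 where "\<Psi>2 = (\<lambda>l. eH (l!1) * \<beta> (muA a1 (muA (act (l!0) (act (SH (l!2)) (SA a2))) b')) g)"
  have m2: "H.multilin (Suc (Suc (Suc 0))) \<Psi>2"
    unfolding \<Psi>2_def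
    by (rule H.multilin3I[where f="\<lambda>m0 k m5. eH k * \<beta> (muA a1 (muA (act m0 (act (SH m5) (SA a2))) b')) g"]; rule lin_form_I; simp add: bs)
  have cu1: "H.sw k (\<lambda>p q. eH p * \<beta> (muA a1 (muA (act m0 (act (SH m4) (SA a2))) (act m1 (act (SH q) b')))) g)
     = \<beta> (muA a1 (muA (act m0 (act (SH m4) (SA a2))) (act m1 (act (SH k) b')))) g" for k m0 m1 m4
    by (rule H.counitL) (rule lin_form_I; simp add: bs)
  have cu2: "H.sw k (\<lambda>p q. eH p * \<beta> (muA a1 (muA (act m0 (act (SH q) (SA a2))) b')) g)
     = \<beta> (muA a1 (muA (act m0 (act (SH k) (SA a2))) b')) g" for k m0
    by (rule H.counitL) (rule lin_form_I; simp add: bs)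
  \<comment> \<open>h(3) S(h(4)) collapses to the counit\<close>
  have "H.sw_iter (Suc (Suc (Suc (Suc (Suc 0))))) h \<Gamma> = H.sw_iter (Suc (Suc (Suc (Suc 0)))) h \<Psi>4"
    apply (subst H.sw_iter_split[OF m\<Gamma>, of 2, symmetric], simp)
    apply (rule H.sw_iter_cong)
    apply (clarsimp simp: length_Suc_conv \<Gamma>_def \<Psi>4_def)
    apply (simp add: bilin_form_push[OF b] bs)
    done
  also have "\<dots> = H.sw_iter (Suc (Suc (Suc 0))) h \<Psi>3"
    apply (subst H.sw_iter_split[OF m4, of 2, symmetric], simp)
    apply (rule H.sw_iter_cong)
    apply (clarsimp simp: length_Suc_conv \<Psi>4_def \<Psi>3_def cu1)
    done
  \<comment> \<open>the pair h(2), S(h(3)) acting on b' collapses by the quasimodule axiom\<close>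
  also have "\<dots> = H.sw_iter (Suc (Suc 0)) h \<Psi>2"
    apply (subst H.sw_iter_split[OF m3, of 1, symmetric], simp)
    apply (rule H.sw_iter_cong)
    apply (clarsimp simp: length_Suc_conv \<Psi>3_def \<Psi>2_def)
    apply (simp add: bilin_form_push[OF b] bs)
    done
  also have "\<dots> = H.sw_iter (Suc 0) h (\<lambda>l. \<beta> (muA a1 (muA (act (l!0) (act (SH (l!1)) (SA a2))) b')) g)"
    apply (subst H.sw_iter_split[OF m2, of 1, symmetric], simp)
    apply (rule H.sw_iter_cong)
    apply (clarsimp simp: length_Suc_conv \<Psi>2_def cu2)
    done
  also have "\<dots> = eH h * \<beta> (muA a1 (muA (SA a2) b')) g"
    by (simp add: bilin_form_push[OF b] bs)
  finally show ?thesis unfolding \<Gamma>_def .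
qed

lemma antipode_xSY_elem:
  assumes b: "bilin_form sA sH \<beta>"
  shows "A.sw a (\<lambda>a1 a2. H.sw h (\<lambda>h1 h2. H.sw (SH h2) (\<lambda>s1 s2. H.sw s2 (\<lambda>p q. H.sw h1 (\<lambda>r s.
     \<beta> (muA a1 (act r (muA (act s1 (SA a2)) (act p b')))) (muH s (muH q g)))))))
    = eA a * eH h * \<beta> b' g"
  by (simp only: antipode_xSY_normal_form[OF b] antipode_xSY_collapse[OF b])
     (simp add: bilin_form_push[OF b] bilin_form_simps[OF b] distrib_left distrib_right ac_simps)

lemma smash_antipode_xSY:
  assumes X: "X \<in> VT" and Y: "Y \<in> VT"
  shows "(\<Sum>(p,q)\<leftarrow>DT X. mulT p (mulT (ST q) Y)) = tens_scale (eT X) Y"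
proof -
  obtain ys where ys: "Y = \<iota> ys" using Y by (auto simp: carrier_iff)
  show ?thesis
  proof (rule smash_antipode_axiom[OF X ys, where T="\<lambda>P Q. mulT P (mulT (ST Q) Y)"
      and \<kappa>="\<lambda>\<beta> a1 h1 a2 h2 b g. H.sw (SH h2) (\<lambda>s1 s2. H.sw s2 (\<lambda>p q. H.sw h1 (\<lambda>r s.
     \<beta> (muA a1 (act r (muA (act s1 (SA a2)) (act p b)))) (muH s (muH q g)))))"])
    fix \<beta> a1 h1 a2 h2 assume "bilin_form sA sH \<beta>"
    thus "mulT (\<iota> [(a1, h1)]) (mulT (ST (\<iota> [(a2, h2)])) Y) \<beta> = (\<Sum>(b,g)\<leftarrow>ys. H.sw (SH h2) (\<lambda>s1 s2. H.sw s2 (\<lambda>p q. H.sw h1 (\<lambda>r s.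
     \<beta> (muA a1 (act r (muA (act s1 (SA a2)) (act p b)))) (muH s (muH q g))))))"
      by (simp only: ys smash_antipode_iota smash_mul_iota iota_app if_True mul_list_sum antipode_list_sum,
          simp add: H.sw_swap_gen)
  qed (auto simp: Y smash_mul_linear smash_counit_antipode_linear smash_closed smash_mul_nonbilin
        intro: antipode_xSY_elem)
qed

(* The sum of the third antipode axiom ((y x) S(z)) for pure tensors: the coproduct of h and the
   inner coproduct of q h(1) are combined into an iterated coproduct of h, using that the coproduct
   is multiplicative, that S_H is an anti-coalgebra map and the hypothesis g.(S h . a) = (g S h).a. *)
lemma antipode_YxS_normal_form:
  assumes b: "bilin_form sA sH \<beta>"
  shows "H.sw h (\<lambda>h1 h2. H.sw (SH h2) (\<lambda>s1 s2. H.sw (muH q h1) (\<lambda>r t. \<beta> (muA W (act r (act s1 (SA a2)))) (muH t s2))))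
    = H.sw q (\<lambda>q1 q2. H.sw_iter (Suc (Suc (Suc 0))) h (\<lambda>l. \<beta> (muA W (act (muH (muH q1 (l!0)) (SH (l!3))) (SA a2))) (muH (muH q2 (l!1)) (SH (l!2)))))"
proof -
  note bs = bilin_form_simps[OF b] distrib_left distrib_right
  define \<Gamma> where "\<Gamma> = (\<lambda>q1 q2 l. \<beta> (muA W (act (muH (muH q1 (l!0)) (SH (l!3))) (SA a2))) (muH (muH q2 (l!1)) (SH (l!2))))"
  have m\<Gamma>: "H.multilin (Suc (Suc (Suc (Suc 0)))) (\<Gamma> q1 q2)" for q1 q2
    unfolding \<Gamma>_def
    by (rule H.multilin4I[where f="\<lambda>l0 l1 l2 l3. \<beta> (muA W (act (muH (muH q1 l0) (SH l3)) (SA a2))) (muH (muH q2 l1) (SH l2))"];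
        rule lin_form_I; simp add: bs)
  have bF: "H.bil (\<lambda>s1 s2. H.sw (muH q h1) (\<lambda>r t. \<beta> (muA W (act r (act s1 (SA a2)))) (muH t s2)))" for q h1 W a2
    by (rule H.bil_I; rule H.lin_form_sw_param; rule lin_form_I; simp add: bs)
  have bG: "H.bil (\<lambda>r t. \<beta> (muA W (act r Z)) (muH t Y))" for W Z Y
    by (rule H.bil_I; rule lin_form_I; simp add: bs)
  define G3 where "G3 = (\<lambda>l. H.sw q (\<lambda>q1 q2. \<Gamma> q1 q2 l))"
  have m3: "H.multilin (Suc (Suc (Suc (Suc 0)))) G3"
    unfolding G3_def \<Gamma>_def
    by (rule H.multilin4I[where f="\<lambda>l0 l1 l2 l3. H.sw q (\<lambda>q1 q2. \<beta> (muA W (act (muH (muH q1 l0) (SH l3)) (SA a2))) (muH (muH q2 l1) (SH l2)))"];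
      rule H.lin_form_sw_param; rule lin_form_I; simp add: bs)
  define G2 where "G2 = (\<lambda>l. H.sw (l!0) (\<lambda>p q. G3 (take 0 l @ p # q # drop (Suc 0) l)))"
  define G1 where "G1 = (\<lambda>l. H.sw (l!Suc 0) (\<lambda>p q. G2 (take (Suc 0) l @ p # q # drop (Suc (Suc 0)) l)))"
  have m2: "H.multilin (Suc (Suc (Suc 0))) G2" unfolding G2_def by (rule H.multilin_split[OF m3]) simp
  have "H.sw q (\<lambda>q1 q2. H.sw_iter (Suc (Suc (Suc 0))) h (\<Gamma> q1 q2)) = H.sw_iter (Suc (Suc (Suc 0))) h G3"
    unfolding G3_def by (rule H.sw_iter_sw_swap[symmetric])
  also have "\<dots> = H.sw_iter (Suc (Suc 0)) h G2"
    unfolding G2_def by (rule H.sw_iter_split[OF m3, symmetric]) simp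
  also have "\<dots> = H.sw_iter (Suc 0) h G1"
    unfolding G1_def by (rule H.sw_iter_split[OF m2, symmetric]) simp
  also have "\<dots> = H.sw h (\<lambda>h1 h2. H.sw h2 (\<lambda>x y. H.sw h1 (\<lambda>u v. H.sw q (\<lambda>q1 q2.
       \<beta> (muA W (act (muH (muH q1 u) (SH y)) (SA a2))) (muH (muH q2 v) (SH x))))))"
    by (simp add: G1_def G2_def G3_def \<Gamma>_def)
  finally have reassoc: "H.sw q (\<lambda>q1 q2. H.sw_iter (Suc (Suc (Suc 0))) h (\<Gamma> q1 q2)) = \<dots>" .
  show ?thesis unfolding reassoc[unfolded \<Gamma>_def]
    apply (simp only: H.antipode_anti_comult[OF bF])
    apply (simp only: H.comul_mul[OF bG])
    apply (simp only: Sact)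
    apply (rule H.sw_cong)+
    apply (rule H.sw_swap)
    done
qed

lemma antipode_YxS_collapse:
  assumes b: "bilin_form sA sH \<beta>"
  shows "H.sw_iter (Suc (Suc (Suc 0))) h (\<lambda>l. \<beta> (muA W (act (muH (muH q1 (l!0)) (SH (l!3))) (SA a2))) (muH (muH q2 (l!1)) (SH (l!2)))) = eH h * \<beta> (muA W (act q1 (SA a2))) q2"
proof -
  note bs = bilin_form_simps[OF b] distrib_left distrib_right
  define \<Gamma> where "\<Gamma> = (\<lambda>q1 q2 l. \<beta> (muA W (act (muH (muH q1 (l!0)) (SH (l!3))) (SA a2))) (muH (muH q2 (l!1)) (SH (l!2))))"
  have m\<Gamma>: "H.multilin (Suc (Suc (Suc (Suc 0)))) (\<Gamma> q1 q2)" for q1 q2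
    unfolding \<Gamma>_def
    by (rule H.multilin4I[where f="\<lambda>l0 l1 l2 l3. \<beta> (muA W (act (muH (muH q1 l0) (SH l3)) (SA a2))) (muH (muH q2 l1) (SH l2))"];
        rule lin_form_I; simp add: bs)
  have cu: "H.sw k (\<lambda>p q. eH p * \<beta> (muA W (act (muH (muH q1 l0) (SH q)) (SA a2))) q2)
     = \<beta> (muA W (act (muH (muH q1 l0) (SH k)) (SA a2))) q2" for k W q1 l0 a2 q2
    by (rule H.counitL) (rule lin_form_I; simp add: bs)
  define \<Psi>2 where "\<Psi>2 = (\<lambda>l. eH (l!1) * \<beta> (muA W (act (muH (muH q1 (l!0)) (SH (l!2))) (SA a2))) q2)"
  have m2: "H.multilin (Suc (Suc (Suc 0))) \<Psi>2"
    unfolding \<Psi>2_def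
    by (rule H.multilin3I[where f="\<lambda>l0 k l2. eH k * \<beta> (muA W (act (muH (muH q1 l0) (SH l2)) (SA a2))) q2"]; rule lin_form_I; simp add: bs)
  have "H.sw_iter (Suc (Suc (Suc 0))) h (\<Gamma> q1 q2) = H.sw_iter (Suc (Suc 0)) h \<Psi>2"
    apply (subst H.sw_iter_split[OF m\<Gamma>, of 1, symmetric], simp)
    apply (rule H.sw_iter_cong)
    apply (clarsimp simp: length_Suc_conv \<Gamma>_def \<Psi>2_def)
    apply (simp add: bilin_form_push[OF b] bs)
    done
  also have "\<dots> = H.sw_iter (Suc 0) h (\<lambda>l. \<beta> (muA W (act (muH (muH q1 (l!0)) (SH (l!1))) (SA a2))) q2)"
    apply (subst H.sw_iter_split[OF m2, of 1, symmetric], simp)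
    apply (rule H.sw_iter_cong)
    apply (clarsimp simp: length_Suc_conv \<Psi>2_def cu)
    done
  also have "\<dots> = eH h * \<beta> (muA W (act q1 (SA a2))) q2"
    by (simp add: bilin_form_push[OF b] bs)
  finally show ?thesis unfolding \<Gamma>_def .
qed

lemma antipode_YxS_elem:
  assumes b: "bilin_form sA sH \<beta>"
  shows "A.sw a (\<lambda>a1 a2. H.sw h (\<lambda>h1 h2. H.sw g (\<lambda>p q. H.sw (SH h2) (\<lambda>s1 s2. H.sw (muH q h1) (\<lambda>r t.
     \<beta> (muA (muA b' (act p a1)) (act r (act s1 (SA a2)))) (muH t s2))))))
    = eA a * eH h * \<beta> b' g"
proof -
  note bs = bilin_form_simps[OF b] distrib_left distrib_right
  have m3: "H.multilin (Suc (Suc (Suc 0))) (\<lambda>l. A.sw a (\<lambda>a1 a2. \<beta> (muA (muA b' (act (l!0) a1)) (act (l!1) (SA a2))) (l!2)))"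
    by (rule H.multilin3I[where f="\<lambda>p q1 q2. A.sw a (\<lambda>a1 a2. \<beta> (muA (muA b' (act p a1)) (act q1 (SA a2))) q2)"];
        rule A.lin_form_sw_param; rule lin_form_I; simp add: bs)
  have "A.sw a (\<lambda>a1 a2. H.sw h (\<lambda>h1 h2. H.sw g (\<lambda>p q. H.sw (SH h2) (\<lambda>s1 s2. H.sw (muH q h1) (\<lambda>r t.
     \<beta> (muA (muA b' (act p a1)) (act r (act s1 (SA a2)))) (muH t s2))))))
     = A.sw a (\<lambda>a1 a2. H.sw g (\<lambda>p q. H.sw q (\<lambda>q1 q2. eH h * \<beta> (muA (muA b' (act p a1)) (act q1 (SA a2))) q2)))"
    apply (rule A.sw_cong)
    apply (subst H.sw_swap)
    apply (simp only: antipode_YxS_normal_form[OF b] antipode_YxS_collapse[OF b])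
    done
  also have "\<dots> = eH h * H.sw_iter (Suc (Suc 0)) g (\<lambda>l. A.sw a (\<lambda>a1 a2. \<beta> (muA (muA b' (act (l!0) a1)) (act (l!1) (SA a2))) (l!2)))"
    by (simp add: swap_A_sw_iter[symmetric])
  also have "\<dots> = eH h * H.sw_iter (Suc 0) g (\<lambda>l. eH (l!0) * eA a * \<beta> b' (l!1))"
    apply (subst H.sw_iter_split[OF m3, of 0, symmetric], simp)
    apply (rule arg_cong[where f="\<lambda>z. eH h * z"])
    apply (rule H.sw_iter_cong)
    apply (clarsimp simp: length_Suc_conv)
    apply (rule act_antipode_right[where \<theta>="\<lambda>z. \<beta> z Q" for Q, simplified])
    apply (rule lin_form_I; simp add: bs)
    done
  also have "\<dots> = eA a * eH h * \<beta> b' g"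
    by (simp add: bilin_form_push[OF b] bs mult.assoc mult.left_commute)
  finally show ?thesis .
qed

lemma smash_antipode_YxS:
  assumes X: "X \<in> VT" and Y: "Y \<in> VT"
  shows "(\<Sum>(p,q)\<leftarrow>DT X. mulT (mulT Y p) (ST q)) = tens_scale (eT X) Y"
proof -
  obtain ys where ys: "Y = \<iota> ys" using Y by (auto simp: carrier_iff)
  show ?thesis
  proof (rule smash_antipode_axiom[OF X ys, where T="\<lambda>P Q. mulT (mulT Y P) (ST Q)"
      and \<kappa>="\<lambda>\<beta> a1 h1 a2 h2 b g. H.sw g (\<lambda>p q. H.sw (SH h2) (\<lambda>s1 s2. H.sw (muH q h1) (\<lambda>r t.
     \<beta> (muA (muA b (act p a1)) (act r (act s1 (SA a2)))) (muH t s2))))"])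
    fix \<beta> a1 h1 a2 h2 assume "bilin_form sA sH \<beta>"
    thus "mulT (mulT Y (\<iota> [(a1, h1)])) (ST (\<iota> [(a2, h2)])) \<beta> = (\<Sum>(b,g)\<leftarrow>ys. H.sw g (\<lambda>p q. H.sw (SH h2) (\<lambda>s1 s2. H.sw (muH q h1) (\<lambda>r t.
     \<beta> (muA (muA b (act p a1)) (act r (act s1 (SA a2)))) (muH t s2)))))"
      by (simp only: ys smash_antipode_iota smash_mul_iota iota_app if_True mul_list_sum antipode_list_sum,
          simp add: H.sw_swap_gen)
  qed (auto simp: Y smash_mul_linear smash_counit_antipode_linear smash_closed smash_mul_nonbilin
        intro: antipode_YxS_elem)
qed

(* The sum of the fourth antipode axiom ((y S(x)) z) for pure tensors: the inner sums combine
   into an iterated coproduct of g S(h(1)), by multiplicativity of the coproduct, the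
   anti-coalgebra property of S_H and the hypothesis g.(S h . a) = (g S h).a. *)
lemma antipode_YSx_normal_form:
  assumes b: "bilin_form sA sH \<beta>"
  shows "H.sw (SH h1) (\<lambda>s1 s2. H.sw g (\<lambda>p q. H.sw (muH q s2) (\<lambda>r t.
     \<beta> (muA (muA b' (act p (act s1 (SA a1)))) (act r a2)) (muH t h2))))
     = H.sw_iter (Suc (Suc 0)) (muH g (SH h1)) (\<lambda>l. \<beta> (muA (muA b' (act (l!0) (SA a1))) (act (l!1) a2)) (muH (l!2) h2))"
proof -
  note bs = bilin_form_simps[OF b] distrib_left distrib_right
  define Z where "Z = (\<lambda>l. \<beta> (muA (muA b' (act (l!0) (SA a1))) (act (l!1) a2)) (muH (l!2) h2))"
  have bR: "H.bil (\<lambda>z1 r. H.sw r (\<lambda>z2 z3. Z [z1, z2, z3]))"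
  proof -
    have b0: "H.bil (\<lambda>z2 z3. \<beta> (muA X (act z2 a2)) (muH z3 h2))" for X a2 h2
      by (rule H.bil_I; rule lin_form_I; simp add: bs)
    show ?thesis unfolding Z_def
      by (simp, rule H.bil_I; (rule H.lin_form_sw_param; rule lin_form_I; simp add: bs)?; rule H.lin_form_sw[OF b0])
  qed
  have bF1: "H.bil (\<lambda>s1 s2. H.sw g (\<lambda>p q. H.sw (muH q s2) (\<lambda>r t. \<beta> (muA (muA b' (act p (act s1 (SA a1)))) (act r a2)) (muH t h2))))"
    for a1 a2 h2
  proof -
    have b0: "H.bil (\<lambda>r t. \<beta> (muA X (act r a2)) (muH t h2))" for X a2 h2
      by (rule H.bil_I; rule lin_form_I; simp add: bs)
    show ?thesis
      by (rule H.bil_I; rule H.lin_form_sw_param; (rule H.lin_form_sw_param; rule lin_form_I; simp add: bs)?; rule H.lin_form_sw_comp[OF b0]; simp)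
  qed
  have bF2: "H.bil (\<lambda>s1 s2. H.sw (muH q s2) (\<lambda>z2 z3. \<beta> (muA (muA b' (act (muH p s1) (SA a1))) (act z2 a2)) (muH z3 h2)))"
    for p q a1 a2 h2
  proof -
    have b0: "H.bil (\<lambda>r t. \<beta> (muA X (act r a2)) (muH t h2))" for X a2 h2
      by (rule H.bil_I; rule lin_form_I; simp add: bs)
    show ?thesis
      by (rule H.bil_I; (rule H.lin_form_sw_param; rule lin_form_I; simp add: bs)?; rule H.lin_form_sw_comp[OF b0]; simp)
  qed
  have "H.sw_iter (Suc (Suc 0)) (muH g (SH h1)) (Z) = H.sw (muH g (SH h1)) (\<lambda>z1 r. H.sw r (\<lambda>z2 z3. Z [z1, z2, z3]))"
    by simp
  also have "\<dots> = H.sw g (\<lambda>p q. H.sw (SH h1) (\<lambda>s1 s2. H.sw (muH q s2) (\<lambda>z2 z3.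
      \<beta> (muA (muA b' (act (muH p s1) (SA a1))) (act z2 a2)) (muH z3 h2))))"
    by (simp only: H.comul_mul[OF bR], simp add: Z_def)
  also have "\<dots> = H.sw g (\<lambda>p q. H.sw h1 (\<lambda>x y. H.sw (muH q (SH x)) (\<lambda>z2 z3.
      \<beta> (muA (muA b' (act (muH p (SH y)) (SA a1))) (act z2 a2)) (muH z3 h2))))"
    by (simp only: H.antipode_anti_comult[OF bF2])
  finally have e: "H.sw_iter (Suc (Suc 0)) (muH g (SH h1)) (Z) = \<dots>" .
  show ?thesis unfolding Z_def[symmetric] e
    apply (simp only: H.antipode_anti_comult[OF bF1])
    apply (simp only: Sact)
    apply (rule H.sw_swap)
    done
qed

(* The remaining sum collapses by the antipode identity for the twisted coproduct. *)
lemma antipode_YSx_collapse: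
  assumes b: "bilin_form sA sH \<beta>"
  shows "H.sw_iter (Suc (Suc 0)) w (\<lambda>l. A.sw a (\<lambda>a1 a2. \<beta> (muA (muA b' (act (l!0) (SA a1))) (act (l!1) a2)) (muH (l!2) h2)))
    = eA a * \<beta> b' (muH w h2)"
proof -
  note bs = bilin_form_simps[OF b] distrib_left distrib_right
  have m3: "H.multilin (Suc (Suc (Suc 0))) (\<lambda>l. A.sw a (\<lambda>a1 a2. \<beta> (muA (muA b' (act (l!0) (SA a1))) (act (l!1) a2)) (muH (l!2) h2)))"
    by (rule H.multilin3I[where f="\<lambda>z1 z2 z3. A.sw a (\<lambda>a1 a2. \<beta> (muA (muA b' (act z1 (SA a1))) (act z2 a2)) (muH z3 h2))"];
        rule A.lin_form_sw_param; rule lin_form_I; simp add: bs)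
  have "H.sw_iter (Suc (Suc 0)) w (\<lambda>l. A.sw a (\<lambda>a1 a2. \<beta> (muA (muA b' (act (l!0) (SA a1))) (act (l!1) a2)) (muH (l!2) h2)))
      = H.sw_iter (Suc 0) w (\<lambda>l. eH (l!0) * eA a * \<beta> b' (muH (l!1) h2))"
    apply (subst H.sw_iter_split[OF m3, of 0, symmetric], simp)
    apply (rule H.sw_iter_cong)
    apply (clarsimp simp: length_Suc_conv)
    apply (rule act_antipode_right_S[where \<theta>="\<lambda>z. \<beta> z Q" for Q, simplified])
    apply (rule lin_form_I; simp add: bs)
    done
  also have "\<dots> = eA a * \<beta> b' (muH w h2)"
    by (simp add: bilin_form_push[OF b] bs mult.assoc mult.left_commute)
  finally show ?thesis .
qed

lemma antipode_YSx_elem: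
  assumes b: "bilin_form sA sH \<beta>"
  shows "A.sw a (\<lambda>a1 a2. H.sw h (\<lambda>h1 h2. H.sw (SH h1) (\<lambda>s1 s2. H.sw g (\<lambda>p q. H.sw (muH q s2) (\<lambda>r t.
     \<beta> (muA (muA b' (act p (act s1 (SA a1)))) (act r a2)) (muH t h2))))))
    = eA a * eH h * \<beta> b' g"
proof -
  have "A.sw a (\<lambda>a1 a2. H.sw h (\<lambda>h1 h2. H.sw (SH h1) (\<lambda>s1 s2. H.sw g (\<lambda>p q. H.sw (muH q s2) (\<lambda>r t.
     \<beta> (muA (muA b' (act p (act s1 (SA a1)))) (act r a2)) (muH t h2))))))
     = H.sw h (\<lambda>h1 h2. A.sw a (\<lambda>a1 a2. H.sw_iter (Suc (Suc 0)) (muH g (SH h1)) (\<lambda>l. \<beta> (muA (muA b' (act (l!0) (SA a1))) (act (l!1) a2)) (muH (l!2) h2))))"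
    by (simp only: antipode_YSx_normal_form[OF b] swap_HA)
  also have "\<dots> = H.sw h (\<lambda>h1 h2. eA a * \<beta> b' (muH (muH g (SH h1)) h2))"
    by (simp only: swap_A_sw_iter antipode_YSx_collapse[OF b])
  also have "\<dots> = eA a * eH h * \<beta> b' g"
    by (simp add: bilin_form_push[OF b] bilin_form_simps[OF b] distrib_left distrib_right)
  finally show ?thesis .
qed

lemma smash_antipode_YSx:
  assumes X: "X \<in> VT" and Y: "Y \<in> VT"
  shows "(\<Sum>(p,q)\<leftarrow>DT X. mulT (mulT Y (ST p)) q) = tens_scale (eT X) Y"
proof -
  obtain ys where ys: "Y = \<iota> ys" using Y by (auto simp: carrier_iff)
  show ?thesis
  proof (rule smash_antipode_axiom[OF X ys, where T="\<lambda>P Q. mulT (mulT Y (ST P)) Q"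
      and \<kappa>="\<lambda>\<beta> a1 h1 a2 h2 b g. H.sw (SH h1) (\<lambda>s1 s2. H.sw g (\<lambda>p q. H.sw (muH q s2) (\<lambda>r t.
     \<beta> (muA (muA b (act p (act s1 (SA a1)))) (act r a2)) (muH t h2))))"])
    fix \<beta> a1 h1 a2 h2 assume "bilin_form sA sH \<beta>"
    thus "mulT (mulT Y (ST (\<iota> [(a1, h1)]))) (\<iota> [(a2, h2)]) \<beta> = (\<Sum>(b,g)\<leftarrow>ys. H.sw (SH h1) (\<lambda>s1 s2. H.sw g (\<lambda>p q. H.sw (muH q s2) (\<lambda>r t.
     \<beta> (muA (muA b (act p (act s1 (SA a1)))) (act r a2)) (muH t h2)))))"
      by (simp only: ys smash_antipode_iota smash_mul_iota iota_app if_True mul_list_sum antipode_list_sum,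
          simp add: H.sw_swap_gen)
  qed (auto simp: Y smash_mul_linear smash_counit_antipode_linear smash_closed smash_mul_nonbilin
        intro: antipode_YSx_elem)
qed

lemma smash_hopf_quasigroup: "hopf_quasigroup tens_scale VT mulT uT DT eT ST"
  unfolding hopf_quasigroup_def
  by (intro conjI ballI allI)
     (use vector_space_tens smash_subspace smash_closed smash_mul_linear smash_comul_linear
        smash_counit_antipode_linear smash_unital smash_coassoc smash_counital smash_comul_unit
        smash_comul_mul smash_counit_mul smash_antipode_SxY smash_antipode_xSY smash_antipode_YxS
        smash_antipode_YSx in \<open>simp_all add: split_def\<close>)

end

theorem mainTheorem5:
  fixes sH :: "'k::field \<Rightarrow> 'h::ab_group_add \<Rightarrow> 'h"
    and muH :: "'h \<Rightarrow> 'h \<Rightarrow> 'h" and uH :: 'h and DH :: "'h \<Rightarrow> ('h \<times> 'h) list"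
    and eH :: "'h \<Rightarrow> 'k" and SH :: "'h \<Rightarrow> 'h"
    and sA :: "'k \<Rightarrow> 'a::ab_group_add \<Rightarrow> 'a"
    and muA :: "'a \<Rightarrow> 'a \<Rightarrow> 'a" and uA :: 'a and DA :: "'a \<Rightarrow> ('a \<times> 'a) list"
    and eA :: "'a \<Rightarrow> 'k" and SA :: "'a \<Rightarrow> 'a"
    and act :: "'h \<Rightarrow> 'a \<Rightarrow> 'a"
  assumes H: "hopf_quasigroup sH UNIV muH uH DH eH SH"
    and A: "hopf_quasigroup sA UNIV muA uA DA eA SA"
    and M: "quasimodule_hqg sH muH uH DH eH SH sA muA uA DA eA SA act"
    and cocomm: "\<And>h a. teq2 sH sA [(p, act q a). (p,q) \<leftarrow> DH h] [(q, act p a). (p,q) \<leftarrow> DH h]"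
    and Sact: "\<And>g h a. act g (act (SH h) a) = act (muH g (SH h)) a"
  shows
    \<comment> \<open>R is a coalgebra map\<close>
    "(\<forall>h a. teq4 sA sH sA sH
        [(x1, y1, x2, y2). (x,y) \<leftarrow> Rmap DH act h a, (x1,x2) \<leftarrow> DA x, (y1,y2) \<leftarrow> DH y]
        [(u, v, u', v'). (a1,a2) \<leftarrow> DA a, (h1,h2) \<leftarrow> DH h,
                         (u,v) \<leftarrow> Rmap DH act h1 a1, (u',v') \<leftarrow> Rmap DH act h2 a2]) \<and>
     (\<forall>h a. (\<Sum>(x,y)\<leftarrow>Rmap DH act h a. eA x * eH y) = eH h * eA a) \<and>
     \<comment> \<open>left multiplicative\<close>
     (\<forall>h a b. teq2 sA sH (Rmap DH act h (muA a b))
        [(muA u u', v'). (u,v) \<leftarrow> Rmap DH act h a, (u',v') \<leftarrow> Rmap DH act v b]) \<and>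
     \<comment> \<open>normal\<close>
     (\<forall>h. teq2 sA sH (Rmap DH act h uA) [(uA, h)]) \<and>
     (\<forall>a. teq2 sA sH (Rmap DH act uH a) [(a, uH)]) \<and>
     \<comment> \<open>left conormal\<close>
     (\<forall>h a. (\<Sum>(x,y)\<leftarrow>Rmap DH act h a. sH (eA x) y) = sH (eA a) h) \<and>
     \<comment> \<open>right S_H-multiplicative\<close>
     (\<forall>g h a. teq2 sA sH (Rmap DH act (muH g (SH h)) a)
        [(u', muH v' v). (u,v) \<leftarrow> Rmap DH act (SH h) a, (u',v') \<leftarrow> Rmap DH act g u]) \<and>
     \<comment> \<open>right S_H-conormal\<close>
     (\<forall>h a. (\<Sum>(u,v)\<leftarrow>Rmap DH act h a. \<Sum>(u',v')\<leftarrow>Rmap DH act (SH v) u. sA (eH v') u')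
              = sA (eH h) a) \<and>
     \<comment> \<open>the smash product A (x) H is a Hopf quasigroup\<close>
     hopf_quasigroup tens_scale (tens_carrier sA sH)
       (smash_mul sA sH muA muH DH act) (smash_unit sA sH uA uH)
       (smash_comul sA sH DA DH) (smash_counit sA sH eA eH)
       (smash_antipode sA sH DH SA SH act)"
proof -
  interpret smash sH muH uH DH eH SH sA muA uA DA eA SA act
    by (unfold_locales) (rule H A M cocomm Sact)+
  show ?thesis
    using R_coalg R_counit R_leftmult R_normal1 R_normal2 R_conormal R_Smult R_Sconormal smash_hopf_quasigroup
    by blast
qed

end
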